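(* Let $\mathcal{N}_{A'B'\to AB}$ be a bipartite quantum channel, $n\in\mathbb{N}$, and consider a protocol producing the state $$\omega_{M_AM_B}=\mathcal{P}^{(n+1)}\circ\mathcal{N}\circ\mathcal{P}^{(n)}\circ\cdots\circ\mathcal{P}^{(2)}\circ\mathcal{N}\circ\mathcal{P}^{(1)},$$ where $\mathcal{P}^{(1)}$ prepares a PPT state $\rho^{(1)}_{L_{A_1}A_1'B_1'L_{B_1}}$, each $\mathcal{P}^{(i)}_{L_{A_{i-1}}A_{i-1}B_{i-1}L_{B_{i-1}}\to L_{A_i}A_i'B_i'L_{B_i}}$ ($2\le i\le n$) and the final $\mathcal{P}^{(n+1)}_{L_{A_n}A_nB_nL_{B_n}\to M_AM_B}$ are completely PPT-preserving channels, and the $i$-th use of $\mathcal{N}$ acts as $\mathcal{N}_{A_i'B_i'\to A_iB_i}$ on the indicated systems. Then $$R_{\max}(M_A;M_B)_\omega\le n\,R_{\max}(\mathcal{N}).$$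
   Context: Alice holds all systems labelled $A$, $L_A$, $M_A$; Bob those labelled $B$, $L_B$, $M_B$. $T_X$ is partial transpose. A bipartite channel is completely PPT-preserving if conjugating it with partial transposes on Bob's input and output systems gives a completely positive map; a state is PPT if its partial transpose on Bob's systems is positive semidefinite. $D_{\max}(\rho\|\sigma)=\inf\{\lambda:\rho\le2^\lambda\sigma\}$. Max-Rains relative entropy of a state: $R_{\max}(C;D)_\sigma=\inf\{D_{\max}(\sigma_{CD}\|\tau_{CD}):\tau_{CD}\ge0,\ \|T_D(\tau_{CD})\|_1\le1\}$. For a bipartite map $\mathcal{M}_{A'B'\to AB}$, $E_N(\mathcal{M})=\log\|T_B\circ\mathcal{M}\circ T_{B'}\|_\diamond$ (diamond norm $\sup_\psi\|(\mathrm{id}\otimes\mathcal{P})(\psi)\|_1$ over pure states); for CP maps $D_{\max}(\mathcal{E}\|\mathcal{F})=\sup_{\psi}D_{\max}(\mathcal{E}(\psi)\|\mathcal{F}(\psi))$ over pure states with reference isomorphic to the input; the max-Rains information of a bipartite channel is $R_{\max}(\mathcal{N})=\inf_{\mathcal{M}\text{ CP}:E_N(\mathcal{M})\le0}D_{\max}(\mathcal{N}\|\mathcal{M})$. *)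

theory Defs
  imports "Jordan_Normal_Form.Matrix" "HOL-Library.Extended_Real"
begin

text \<open>A composite system
  with tensor factors of dimensions d1, d2 has dimension d1*d2, index (i,j) being i*d2+j
  (Kronecker convention).  A bipartite operator with Alice dimension a and Bob dimension b
  is a matrix of dimension a*b.\<close>

definition mtrace :: "complex mat \<Rightarrow> complex" where
  "mtrace M = (\<Sum>i<dim_row M. M $$ (i,i))"

definition psd :: "nat \<Rightarrow> complex mat \<Rightarrow> bool" where
  "psd d M \<longleftrightarrow> M \<in> carrier_mat d d \<and>
     (\<forall>v \<in> carrier_vec d. Im ((\<Sum>i<d. cnj (v $ i) * (M *\<^sub>v v) $ i)) = 0
                          \<and> Re ((\<Sum>i<d. cnj (v $ i) * (M *\<^sub>v v) $ i)) \<ge> 0)"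

definition adj :: "complex mat \<Rightarrow> complex mat" where
  "adj M = mat (dim_col M) (dim_row M) (\<lambda>(i,j). cnj (M $$ (j,i)))"

definition unitary_mat :: "nat \<Rightarrow> complex mat \<Rightarrow> bool" where
  "unitary_mat d U \<longleftrightarrow> U \<in> carrier_mat d d \<and> U * adj U = 1\<^sub>m d \<and> adj U * U = 1\<^sub>m d"

text \<open>Trace norm via its variational characterisation  max over unitaries |tr(U M)|.\<close>
definition trace_norm :: "nat \<Rightarrow> complex mat \<Rightarrow> real" where
  "trace_norm d M = Sup {cmod (mtrace (U * M)) | U. unitary_mat d U}"

definition pure_state :: "nat \<Rightarrow> complex mat \<Rightarrow> bool" where
  "pure_state d \<psi> \<longleftrightarrow> (\<exists>v \<in> carrier_vec d. (\<Sum>i<d. (cmod (v $ i))\<^sup>2) = 1 \<and>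
      \<psi> = mat d d (\<lambda>(i,j). v $ i * cnj (v $ j)))"

text \<open>Partial transpose on the second (Bob's) factor, Alice dimension a, Bob dimension b.\<close>
definition ptB :: "nat \<Rightarrow> nat \<Rightarrow> complex mat \<Rightarrow> complex mat" where
  "ptB a b M = mat (a*b) (a*b)
     (\<lambda>(p,q). M $$ ((p div b) * b + q mod b, (q div b) * b + p mod b))"

text \<open>id_k \<otimes> \<Phi> (reference system of dimension k on the left), \<Phi> : d1 \<rightarrow> d2.\<close>
definition lift_left :: "nat \<Rightarrow> nat \<Rightarrow> nat \<Rightarrow> (complex mat \<Rightarrow> complex mat) \<Rightarrow> complex mat \<Rightarrow> complex mat" where
  "lift_left k d1 d2 \<Phi> X = mat (k*d2) (k*d2)
     (\<lambda>(p,q). \<Phi> (mat d1 d1 (\<lambda>(i,j). X $$ ((p div d2) * d1 + i, (q div d2) * d1 + j)))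
                $$ (p mod d2, q mod d2))"

text \<open>\<Phi> \<otimes> id_k (identity on a k-dimensional system on the right), \<Phi> : d1 \<rightarrow> d2.\<close>
definition lift_right :: "nat \<Rightarrow> nat \<Rightarrow> nat \<Rightarrow> (complex mat \<Rightarrow> complex mat) \<Rightarrow> complex mat \<Rightarrow> complex mat" where
  "lift_right d1 d2 k \<Phi> X = mat (d2*k) (d2*k)
     (\<lambda>(p,q). \<Phi> (mat d1 d1 (\<lambda>(i,j). X $$ (i * k + p mod k, j * k + q mod k)))
                $$ (p div k, q div k))"

definition linear_map :: "nat \<Rightarrow> nat \<Rightarrow> (complex mat \<Rightarrow> complex mat) \<Rightarrow> bool" where
  "linear_map d1 d2 \<Phi> \<longleftrightarrow>
     (\<forall>X \<in> carrier_mat d1 d1. \<Phi> X \<in> carrier_mat d2 d2) \<and>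
     (\<forall>X \<in> carrier_mat d1 d1. \<forall>Y \<in> carrier_mat d1 d1. \<Phi> (X + Y) = \<Phi> X + \<Phi> Y) \<and>
     (\<forall>X \<in> carrier_mat d1 d1. \<forall>c. \<Phi> (c \<cdot>\<^sub>m X) = c \<cdot>\<^sub>m \<Phi> X)"

definition completely_positive :: "nat \<Rightarrow> nat \<Rightarrow> (complex mat \<Rightarrow> complex mat) \<Rightarrow> bool" where
  "completely_positive d1 d2 \<Phi> \<longleftrightarrow>
     (\<forall>k X. psd (k*d1) X \<longrightarrow> psd (k*d2) (lift_left k d1 d2 \<Phi> X))"

definition CP_map :: "nat \<Rightarrow> nat \<Rightarrow> (complex mat \<Rightarrow> complex mat) \<Rightarrow> bool" where
  "CP_map d1 d2 \<Phi> \<longleftrightarrow> linear_map d1 d2 \<Phi> \<and> completely_positive d1 d2 \<Phi>"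

definition quantum_channel :: "nat \<Rightarrow> nat \<Rightarrow> (complex mat \<Rightarrow> complex mat) \<Rightarrow> bool" where
  "quantum_channel d1 d2 \<Phi> \<longleftrightarrow> CP_map d1 d2 \<Phi> \<and>
     (\<forall>X \<in> carrier_mat d1 d1. mtrace (\<Phi> X) = mtrace X)"

definition density :: "nat \<Rightarrow> complex mat \<Rightarrow> bool" where
  "density d \<rho> \<longleftrightarrow> psd d \<rho> \<and> mtrace \<rho> = 1"

definition PPT_state :: "nat \<Rightarrow> nat \<Rightarrow> complex mat \<Rightarrow> bool" where
  "PPT_state a b \<rho> \<longleftrightarrow> density (a*b) \<rho> \<and> psd (a*b) (ptB a b \<rho>)"

definition pt_conj :: "nat \<Rightarrow> nat \<Rightarrow> nat \<Rightarrow> nat \<Rightarrow> (complex mat \<Rightarrow> complex mat) \<Rightarrow> complex mat \<Rightarrow> complex mat" where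
  "pt_conj a1 b1 a2 b2 \<Phi> X = ptB a2 b2 (\<Phi> (ptB a1 b1 X))"

definition completely_PPT_preserving :: "nat \<Rightarrow> nat \<Rightarrow> nat \<Rightarrow> nat \<Rightarrow> (complex mat \<Rightarrow> complex mat) \<Rightarrow> bool" where
  "completely_PPT_preserving a1 b1 a2 b2 \<Phi> \<longleftrightarrow>
     completely_positive (a1*b1) (a2*b2) (pt_conj a1 b1 a2 b2 \<Phi>)"

definition PPT_channel :: "nat \<Rightarrow> nat \<Rightarrow> nat \<Rightarrow> nat \<Rightarrow> (complex mat \<Rightarrow> complex mat) \<Rightarrow> bool" where
  "PPT_channel a1 b1 a2 b2 \<Phi> \<longleftrightarrow>
     quantum_channel (a1*b1) (a2*b2) \<Phi> \<and> completely_PPT_preserving a1 b1 a2 b2 \<Phi>"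

text \<open>Loewner order and max-relative entropy (extended reals; inf of empty set = +\<infinity>).\<close>
definition loewner_le :: "nat \<Rightarrow> complex mat \<Rightarrow> complex mat \<Rightarrow> bool" where
  "loewner_le d X Y \<longleftrightarrow> psd d (Y - X)"

definition Dmax :: "nat \<Rightarrow> complex mat \<Rightarrow> complex mat \<Rightarrow> ereal" where
  "Dmax d \<rho> \<sigma> = Inf {ereal l | l. loewner_le d \<rho> (complex_of_real (2 powr l) \<cdot>\<^sub>m \<sigma>)}"

definition Rmax_state :: "nat \<Rightarrow> nat \<Rightarrow> complex mat \<Rightarrow> ereal" where
  "Rmax_state c e \<sigma> = Inf {Dmax (c*e) \<sigma> \<tau> | \<tau>. psd (c*e) \<tau> \<and> trace_norm (c*e) (ptB c e \<tau>) \<le> 1}"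

definition diamond_norm :: "nat \<Rightarrow> nat \<Rightarrow> (complex mat \<Rightarrow> complex mat) \<Rightarrow> ereal" where
  "diamond_norm d1 d2 \<Phi> = Sup {ereal (trace_norm (d1*d2) (lift_left d1 d1 d2 \<Phi> \<psi>)) | \<psi>. pure_state (d1*d1) \<psi>}"

text \<open>log-negativity E_N of a bipartite map, with log 0 = -\<infinity>.\<close>
definition log_neg :: "nat \<Rightarrow> nat \<Rightarrow> nat \<Rightarrow> nat \<Rightarrow> (complex mat \<Rightarrow> complex mat) \<Rightarrow> ereal" where
  "log_neg a1 b1 a2 b2 \<Phi> =
     (let t = diamond_norm (a1*b1) (a2*b2) (pt_conj a1 b1 a2 b2 \<Phi>) in
      if t = 0 then -\<infinity> else if t = \<infinity> then \<infinity> else ereal (log 2 (real_of_ereal t)))"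

definition Dmax_map :: "nat \<Rightarrow> nat \<Rightarrow> (complex mat \<Rightarrow> complex mat) \<Rightarrow> (complex mat \<Rightarrow> complex mat) \<Rightarrow> ereal" where
  "Dmax_map d1 d2 E F = Sup {Dmax (d1*d2) (lift_left d1 d1 d2 E \<psi>) (lift_left d1 d1 d2 F \<psi>) | \<psi>. pure_state (d1*d1) \<psi>}"

definition Rmax_channel :: "nat \<Rightarrow> nat \<Rightarrow> nat \<Rightarrow> nat \<Rightarrow> (complex mat \<Rightarrow> complex mat) \<Rightarrow> ereal" where
  "Rmax_channel a1 b1 a2 b2 \<N> = Inf {Dmax_map (a1*b1) (a2*b2) \<N> \<M> | \<M>.
      CP_map (a1*b1) (a2*b2) \<M> \<and> log_neg a1 b1 a2 b2 \<M> \<le> 0}"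

text \<open>The i-th use of N_{A'B' \<rightarrow> AB} acting on L_A A' B' L_B (ordered this way), with L_A of
  dimension la and L_B of dimension lb: id_{L_A} \<otimes> N \<otimes> id_{L_B}.\<close>
definition embed_channel :: "nat \<Rightarrow> nat \<Rightarrow> nat \<Rightarrow> nat \<Rightarrow> nat \<Rightarrow> nat \<Rightarrow> (complex mat \<Rightarrow> complex mat) \<Rightarrow> complex mat \<Rightarrow> complex mat" where
  "embed_channel la lb a1 b1 a2 b2 \<N> =
     lift_left la (a1*b1*lb) (a2*b2*lb) (lift_right (a1*b1) (a2*b2) lb \<N>)"

end

(*
  Fix a CP map M with E_N(M) <= 0 and D_max(N || M) < lam and run the protocol with every use
  of N replaced by M. Along the protocol the simulated operator sigma_k and the true state tau_k
  satisfy sigma_k >= 0 and tau_k <= 2^(k lam) sigma_k, and the partial transpose of sigma_k is a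
  real combination of rank-one projectors of total weight at most 1, a certificate for
  ||T_B(sigma_k)||_1 <= 1. Domination propagates because the Choi matrix of 2^lam M - N is
  positive (test D_max on the maximally entangled state) and all maps involved are completely
  positive. The weight bound survives PPT channels, whose partial-transpose conjugates are CP and
  trace preserving, and survives id (x) T_B M T_B (x) id, because a Schmidt factorisation shrinks
  the reference system to the input dimension, where E_N(M) <= 0 bounds the trace norm on pure
  inputs. So the final simulated operator is feasible for R_max and dominates omega up to
  2^(n lam); hence R_max(omega) <= n lam, and lam can be taken arbitrarily close to R_max(N).
*)
theory Submission
  imports Defs "Jordan_Normal_Form.Char_Poly"
begin

section \<open>Finite sums and mixed-radix indices\<close>

lemma mult_add_less: "i < a \<Longrightarrow> j < (b::nat) \<Longrightarrow> i * b + j < a * b"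
proof -
  assume "i < a" "j < b"
  then have "i * b + j < i * b + b" by simp
  also have "\<dots> = Suc i * b" by simp
  also have "\<dots> \<le> a * b" using \<open>i < a\<close> by (metis Suc_leI mult_le_mono1)
  finally show ?thesis .
qed

lemma mult_add_div [simp]: "j < (b::nat) \<Longrightarrow> (i * b + j) div b = i"
  by simp

lemma mult_add_mod [simp]: "j < (b::nat) \<Longrightarrow> (i * b + j) mod b = j"
  by simp

lemma sum_lessThan_mult: fixes a b :: nat shows "(\<Sum>p<a*b. h p) = (\<Sum>i<a. \<Sum>j<b. h (i*b + j))"
proof (induction a)
  case 0 then show ?case by simp
next
  case (Suc a)
  have "(\<Sum>p<Suc a * b. h p) = (\<Sum>p<a*b. h p) + (\<Sum>p\<in>{a*b..<a*b+b}. h p)"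
    by (simp add: sum.atLeastLessThan_concat[symmetric] lessThan_atLeast0 add.commute)
  also have "(\<Sum>p\<in>{a*b..<a*b+b}. h p) = (\<Sum>j<b. h (a*b + j))"
    by (simp add: sum.shift_bounds_nat_ivl[where k = "a*b" and m = 0, simplified] lessThan_atLeast0 add.commute)
  finally show ?case using Suc by simp
qed

lemma sum_mod_eq_collapse:
  fixes d1 d2 :: nat
  assumes a: "a < d2"
  shows "(\<Sum>\<alpha><d1*d2. (if \<alpha> mod d2 = a then F (\<alpha> div d2) \<alpha> else 0)) = (\<Sum>i<d1. F i (i*d2 + a))"
proof -
  have "(\<Sum>\<alpha><d1*d2. (if \<alpha> mod d2 = a then F (\<alpha> div d2) \<alpha> else 0)) =
     (\<Sum>i<d1. \<Sum>a'<d2. (if (i*d2+a') mod d2 = a then F ((i*d2+a') div d2) (i*d2+a') else 0))"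
    by (rule sum_lessThan_mult)
  also have "\<dots> = (\<Sum>i<d1. \<Sum>a'<d2. (if a' = a then F i (i*d2+a') else 0))"
    by (intro sum.cong refl) simp
  also have "\<dots> = (\<Sum>i<d1. F i (i*d2 + a))" using a by simp
  finally show ?thesis .
qed

lemma sum_swap3: "(\<Sum>i\<in>I. \<Sum>j\<in>J. \<Sum>l\<in>L. f i j l) = (\<Sum>l\<in>L. \<Sum>i\<in>I. \<Sum>j\<in>J. f i j l)"
proof -
  have "(\<Sum>i\<in>I. \<Sum>j\<in>J. \<Sum>l\<in>L. f i j l) = (\<Sum>i\<in>I. \<Sum>l\<in>L. \<Sum>j\<in>J. f i j l)"
    by (rule sum.cong[OF refl], rule sum.swap)
  also have "\<dots> = (\<Sum>l\<in>L. \<Sum>i\<in>I. \<Sum>j\<in>J. f i j l)" by (rule sum.swap)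
  finally show ?thesis .
qed

lemma sum_swap4: "(\<Sum>a\<in>A. \<Sum>b\<in>B. \<Sum>p\<in>P. \<Sum>q\<in>Q. f a b p q) = (\<Sum>p\<in>P. \<Sum>q\<in>Q. \<Sum>a\<in>A. \<Sum>b\<in>B. f a b p q)"
proof -
  have "(\<Sum>a\<in>A. \<Sum>b\<in>B. \<Sum>p\<in>P. \<Sum>q\<in>Q. f a b p q) = (\<Sum>a\<in>A. \<Sum>p\<in>P. \<Sum>b\<in>B. \<Sum>q\<in>Q. f a b p q)"
    by (intro sum.cong refl) (rule sum.swap)
  also have "\<dots> = (\<Sum>p\<in>P. \<Sum>a\<in>A. \<Sum>b\<in>B. \<Sum>q\<in>Q. f a b p q)" by (rule sum.swap)
  also have "\<dots> = (\<Sum>p\<in>P. \<Sum>a\<in>A. \<Sum>q\<in>Q. \<Sum>b\<in>B. f a b p q)"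
    by (intro sum.cong refl) (rule sum.swap)
  also have "\<dots> = (\<Sum>p\<in>P. \<Sum>q\<in>Q. \<Sum>a\<in>A. \<Sum>b\<in>B. f a b p q)"
    by (intro sum.cong refl) (rule sum.swap)
  finally show ?thesis .
qed

lemma sum_sum_const_mult:
  fixes c :: "'a::comm_semiring_1"
  shows "(\<Sum>i\<in>I. \<Sum>j\<in>J. c * a i * b j) = c * sum a I * sum b J"
proof -
  have "c * sum a I * sum b J = c * (\<Sum>i\<in>I. \<Sum>j\<in>J. a i * b j)" by (simp add: mult.assoc sum_product)
  also have "\<dots> = (\<Sum>i\<in>I. \<Sum>j\<in>J. c * (a i * b j))" by (simp add: sum_distrib_left)
  finally show ?thesis by (simp add: mult.assoc)
qed

lemma sum_mult_cnj_sum: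
  fixes a :: "'i \<Rightarrow> 'j \<Rightarrow> complex"
  shows "(\<Sum>i\<in>I. (\<Sum>j\<in>J. a i j) * cnj (\<Sum>l\<in>J. a i l)) = (\<Sum>j\<in>J. \<Sum>l\<in>J. \<Sum>i\<in>I. a i j * cnj (a i l))"
proof -
  have "(\<Sum>i\<in>I. (\<Sum>j\<in>J. a i j) * cnj (\<Sum>l\<in>J. a i l)) = (\<Sum>i\<in>I. \<Sum>j\<in>J. \<Sum>l\<in>J. a i j * cnj (a i l))"
    by (rule sum.cong, simp, simp add: sum_product cnj_sum)
  also have "\<dots> = (\<Sum>j\<in>J. \<Sum>i\<in>I. \<Sum>l\<in>J. a i j * cnj (a i l))" by (rule sum.swap)
  also have "\<dots> = (\<Sum>j\<in>J. \<Sum>l\<in>J. \<Sum>i\<in>I. a i j * cnj (a i l))" by (rule sum.cong, simp, rule sum.swap)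
  finally show ?thesis .
qed

lemma sum_two_delta:
  fixes g :: "nat \<Rightarrow> complex"
  assumes "i < n" "j < n" "i \<noteq> j"
  shows "(\<Sum>q<n. g q * ((if q = i then a else 0) + (if q = j then b else 0))) = g i * a + g j * b"
proof -
  have "(\<Sum>q<n. g q * ((if q = i then a else 0) + (if q = j then b else 0))) =
     (\<Sum>q<n. (if q = i then g q * a else 0)) + (\<Sum>q<n. (if q = j then g q * b else 0))"
  proof -
    have "\<And>q. g q * ((if q = i then a else 0) + (if q = j then b else 0)) =
       (if q = i then g q * a else 0) + (if q = j then g q * b else 0)" by (simp add: algebra_simps)
    then show ?thesis by (simp add: sum.distrib)
  qed
  then show ?thesis using assms by (simp add: sum.delta')
qed

lemma double_delta:
  assumes a: "a < (n::nat)" and b: "b < n"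
  shows "(\<Sum>k<n. \<Sum>l<n. if k = a then (if l = b then f k l else 0) else 0) = f a b"
proof -
  have "(\<Sum>k<n. \<Sum>l<n. if k = a then (if l = b then f k l else 0) else 0) =
        (\<Sum>k<n. if k = a then (\<Sum>l<n. if l = b then f k l else 0) else 0)"
    by (rule sum.cong[OF refl]) simp
  also have "\<dots> = f a b" using a b by simp
  finally show ?thesis .
qed

lemma sum_pairs_delta:
  fixes X :: "complex mat"
  assumes "p < d" "q < d"
  shows "(\<Sum>k\<in>{..<d} \<times> {..<d}. X $$ k * (if p = fst k \<and> q = snd k then 1 else 0)) = X $$ (p,q)"
proof -
  have "(\<Sum>k\<in>{..<d} \<times> {..<d}. X $$ k * (if p = fst k \<and> q = snd k then 1 else 0)) =
        (\<Sum>k\<in>{..<d} \<times> {..<d}. if k = (p,q) then X $$ (p,q) else 0)"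
    by (rule sum.cong) auto
  then show ?thesis using assms by simp
qed

lemma sum_sum_list_swap: "(\<Sum>i\<in>I. \<Sum>p\<leftarrow>L. f i p) = (\<Sum>p\<leftarrow>L. \<Sum>i\<in>I. f i p)"
  by (induction L) (simp_all add: sum.distrib)

lemma norm_sum_list_le: "cmod (\<Sum>p\<leftarrow>L. f p) \<le> (\<Sum>p\<leftarrow>L. cmod (f p))"
  by (induction L) (simp_all add: order_trans[OF norm_triangle_ineq])

lemma sum_list_upt_lessThan: "(\<Sum>k\<leftarrow>[0..<n]. f k) = (\<Sum>k<n. f k)"
  by (simp add: sum_set_upt_conv_sum_list_nat[symmetric] atLeast0LessThan)

lemma sum_list_concat_map: "(\<Sum>x\<leftarrow>concat (map g L). f x) = (\<Sum>p\<leftarrow>L. \<Sum>x\<leftarrow>g p. f x)"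
  by (induction L) simp_all

section \<open>Adjoints, unitaries and the spectral theorem\<close>

lemma index_mult_mat_sum [simp]:
  "i < dim_row A \<Longrightarrow> j < dim_col B \<Longrightarrow> dim_col A = dim_row B \<Longrightarrow>
   (A * B) $$ (i,j) = (\<Sum>k<dim_col A. A $$ (i,k) * B $$ (k,j))"
  unfolding index_mult_mat(1) scalar_prod_def by (simp add: atLeast0LessThan)

lemma index_mult_mat_vec_sum [simp]:
  "i < dim_row A \<Longrightarrow> dim_col A = dim_vec v \<Longrightarrow> (A *\<^sub>v v) $ i = (\<Sum>k<dim_col A. A $$ (i,k) * v $ k)"
  unfolding index_mult_mat_vec scalar_prod_def by (simp add: atLeast0LessThan)

declare index_mult_mat(1)[simp del] index_mult_mat_vec[simp del]

lemma adj_dims [simp]: "dim_row (adj A) = dim_col A" "dim_col (adj A) = dim_row A"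
  by (auto simp: adj_def)

lemma index_adj [simp]: "i < dim_col A \<Longrightarrow> j < dim_row A \<Longrightarrow> adj A $$ (i,j) = cnj (A $$ (j,i))"
  unfolding adj_def by simp

lemma adj_carrier [simp]: "A \<in> carrier_mat n m \<Longrightarrow> adj A \<in> carrier_mat m n"
  unfolding carrier_mat_def by simp

lemma adj_one [simp]: "adj (1\<^sub>m n) = 1\<^sub>m n"
  by (rule eq_matI) simp_all

lemma adj_mult:
  assumes "A \<in> carrier_mat n m" and "B \<in> carrier_mat m l"
  shows "adj (A * B) = adj B * adj A"
  by (rule eq_matI) (use assms in \<open>simp_all add: sum_conjugate mult.commute\<close>)

lemma unitary_matD:
  assumes "unitary_mat n V"
  shows "V \<in> carrier_mat n n"
    and "\<And>i j. i < n \<Longrightarrow> j < n \<Longrightarrow> (\<Sum>k<n. V $$ (i,k) * cnj (V $$ (j,k))) = (if i = j then 1 else 0)"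
    and "\<And>k l. k < n \<Longrightarrow> l < n \<Longrightarrow> (\<Sum>i<n. cnj (V $$ (i,k)) * V $$ (i,l)) = (if k = l then 1 else 0)"
proof -
  have V: "V \<in> carrier_mat n n" and a: "V * adj V = 1\<^sub>m n" and b: "adj V * V = 1\<^sub>m n"
    using assms unfolding unitary_mat_def by auto
  show "V \<in> carrier_mat n n" by (fact V)
  show "(\<Sum>k<n. V $$ (i,k) * cnj (V $$ (j,k))) = (if i = j then 1 else 0)" if "i < n" "j < n" for i j
    using arg_cong[OF a, of "\<lambda>X. X $$ (i,j)"] V that by simp
  show "(\<Sum>i<n. cnj (V $$ (i,k)) * V $$ (i,l)) = (if k = l then 1 else 0)" if "k < n" "l < n" for k l
    using arg_cong[OF b, of "\<lambda>X. X $$ (k,l)"] V that by simp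
qed

lemma unitary_mult:
  assumes "unitary_mat n U" and "unitary_mat n V"
  shows "unitary_mat n (U * V)"
proof -
  have U: "U \<in> carrier_mat n n" "U * adj U = 1\<^sub>m n" "adj U * U = 1\<^sub>m n"
    and V: "V \<in> carrier_mat n n" "V * adj V = 1\<^sub>m n" "adj V * V = 1\<^sub>m n"
    using assms unfolding unitary_mat_def by auto
  note assoc = assoc_mult_mat[of _ n n _ n _ n] mult_carrier_mat[of _ n n _ n]
  have "U * V * adj (U * V) = U * (V * adj V) * adj U"
    using U(1) V(1) by (simp add: adj_mult[of U n n V n] assoc)
  moreover have "adj (U * V) * (U * V) = adj V * (adj U * U) * V"
    using U(1) V(1) by (simp add: adj_mult[of U n n V n] assoc)
  ultimately show ?thesis
    unfolding unitary_mat_def using U V by (simp del: assoc_mult_mat)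
qed

lemma unitary_conj_mult:
  assumes "W \<in> carrier_mat n n" and "U \<in> carrier_mat n n" and "D \<in> carrier_mat n n"
  shows "W * (U * D * adj U) * adj W = (W * U) * D * adj (W * U)"
  using assms by (simp add: adj_mult[of W n n U n] assoc_mult_mat[of _ n n _ n _ n] mult_carrier_mat[of _ n n _ n])

definition diag_real :: "nat \<Rightarrow> (nat \<Rightarrow> real) \<Rightarrow> complex mat" where
  "diag_real n \<mu> = mat n n (\<lambda>(i,j). if i = j then complex_of_real (\<mu> i) else 0)"

lemma diag_real_carrier [simp]: "diag_real n \<mu> \<in> carrier_mat n n"
  and diag_real_dims [simp]: "dim_row (diag_real n \<mu>) = n" "dim_col (diag_real n \<mu>) = n"
  unfolding diag_real_def by simp_all

lemma index_diag_real [simp]: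
  "i < n \<Longrightarrow> j < n \<Longrightarrow> diag_real n \<mu> $$ (i,j) = (if i = j then complex_of_real (\<mu> i) else 0)"
  unfolding diag_real_def by simp

definition unitary_diag :: "nat \<Rightarrow> complex mat \<Rightarrow> (nat \<Rightarrow> real) \<Rightarrow> complex mat" where
  "unitary_diag n U \<mu> = mat n n (\<lambda>(i,j). \<Sum>k<n. complex_of_real (\<mu> k) * U $$ (i,k) * cnj (U $$ (j,k)))"

lemma unitary_diag_carrier [simp]: "unitary_diag n U \<mu> \<in> carrier_mat n n"
  and unitary_diag_dims [simp]: "dim_row (unitary_diag n U \<mu>) = n" "dim_col (unitary_diag n U \<mu>) = n"
  unfolding unitary_diag_def by simp_all

lemma index_unitary_diag [simp]:
  "i < n \<Longrightarrow> j < n \<Longrightarrow>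
   unitary_diag n U \<mu> $$ (i,j) = (\<Sum>k<n. complex_of_real (\<mu> k) * U $$ (i,k) * cnj (U $$ (j,k)))"
  unfolding unitary_diag_def by simp

lemma mult_diag_real_adj:
  assumes U: "U \<in> carrier_mat n n"
  shows "U * diag_real n \<mu> * adj U = unitary_diag n U \<mu>"
proof (rule eq_matI)
  fix i j assume "i < dim_row (unitary_diag n U \<mu>)" "j < dim_col (unitary_diag n U \<mu>)"
  then have i: "i < n" and j: "j < n" by simp_all
  have col: "(U * diag_real n \<mu>) $$ (i,k) = \<mu> k * U $$ (i,k)" if k: "k < n" for k
  proof -
    have "(U * diag_real n \<mu>) $$ (i,k) = (\<Sum>l<n. if l = k then \<mu> k * U $$ (i,l) else 0)"
      using U i k by (intro trans[OF index_mult_mat_sum sum.cong]) auto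
    then show ?thesis using k by simp
  qed
  have "(U * diag_real n \<mu> * adj U) $$ (i,j) = (\<Sum>k<n. (U * diag_real n \<mu>) $$ (i,k) * adj U $$ (k,j))"
    using U i j index_mult_mat_sum[of i "U * diag_real n \<mu>" j "adj U"] by simp
  also have "\<dots> = (\<Sum>k<n. \<mu> k * U $$ (i,k) * cnj (U $$ (j,k)))"
    by (intro sum.cong refl, subst col) (use U j in auto)
  also have "\<dots> = unitary_diag n U \<mu> $$ (i,j)"
    using i j by simp
  finally show "(U * diag_real n \<mu> * adj U) $$ (i,j) = unitary_diag n U \<mu> $$ (i,j)" .
qed (use U in simp_all)

definition bordered_mat :: "complex \<Rightarrow> complex mat \<Rightarrow> complex mat" where
  "bordered_mat c U = mat (Suc (dim_row U)) (Suc (dim_col U))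
     (\<lambda>(i,j). if i = 0 \<and> j = 0 then c else if i = 0 \<or> j = 0 then 0 else U $$ (i - 1, j - 1))"

lemma bordered_mat_dims [simp]:
  "dim_row (bordered_mat c U) = Suc (dim_row U)" "dim_col (bordered_mat c U) = Suc (dim_col U)"
  unfolding bordered_mat_def by simp_all

lemma bordered_mat_carrier [simp]: "U \<in> carrier_mat m k \<Longrightarrow> bordered_mat c U \<in> carrier_mat (Suc m) (Suc k)"
  unfolding carrier_mat_def by simp

lemma index_bordered_mat:
  "i < Suc (dim_row U) \<Longrightarrow> j < Suc (dim_col U) \<Longrightarrow> bordered_mat c U $$ (i,j) =
    (if i = 0 \<and> j = 0 then c else if i = 0 \<or> j = 0 then 0 else U $$ (i - 1, j - 1))"
  unfolding bordered_mat_def by simp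

lemma adj_bordered_mat: "adj (bordered_mat c U) = bordered_mat (cnj c) (adj U)"
  by (rule eq_matI) (auto simp: bordered_mat_def)

lemma bordered_mat_mult:
  assumes U: "U \<in> carrier_mat m k" and V: "V \<in> carrier_mat k l"
  shows "bordered_mat c U * bordered_mat d V = bordered_mat (c * d) (U * V)"
proof (rule eq_matI)
  fix i j assume "i < dim_row (bordered_mat (c * d) (U * V))" "j < dim_col (bordered_mat (c * d) (U * V))"
  then have i: "i < Suc m" and j: "j < Suc l" using U V by simp_all
  have "(bordered_mat c U * bordered_mat d V) $$ (i,j) =
      (\<Sum>r<Suc k. bordered_mat c U $$ (i,r) * bordered_mat d V $$ (r,j))"
    using U V i j by simp
  also have "\<dots> = bordered_mat c U $$ (i,0) * bordered_mat d V $$ (0,j) +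
      (\<Sum>r<k. bordered_mat c U $$ (i, Suc r) * bordered_mat d V $$ (Suc r, j))"
    by (rule sum.lessThan_Suc_shift)
  also have "\<dots> = bordered_mat (c * d) (U * V) $$ (i,j)"
    using U V i j by (cases i; cases j) (simp_all add: index_bordered_mat)
  finally show "(bordered_mat c U * bordered_mat d V) $$ (i,j) = bordered_mat (c * d) (U * V) $$ (i,j)" .
qed (use U V in simp_all)

lemma bordered_mat_one: "bordered_mat 1 (1\<^sub>m m) = 1\<^sub>m (Suc m)"
  by (rule eq_matI) (auto simp: bordered_mat_def)

lemma diag_real_Suc: "diag_real (Suc m) \<mu> = bordered_mat (\<mu> 0) (diag_real m (\<lambda>k. \<mu> (Suc k)))"
  by (rule eq_matI) (auto simp: bordered_mat_def)

lemma unitary_bordered_mat: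
  assumes "unitary_mat m U"
  shows "unitary_mat (Suc m) (bordered_mat 1 U)"
proof -
  have U: "U \<in> carrier_mat m m" "U * adj U = 1\<^sub>m m" "adj U * U = 1\<^sub>m m"
    using assms unfolding unitary_mat_def by auto
  have "adj U \<in> carrier_mat m m" using U by simp
  then show ?thesis
    unfolding unitary_mat_def adj_bordered_mat
    using U by (simp add: bordered_mat_mult[of U m m "adj U" m] bordered_mat_mult[of "adj U" m m U m]
        bordered_mat_one)
qed

lemma reflection_mat_involution:
  fixes u :: "nat \<Rightarrow> complex" and c :: complex
  assumes c_real: "cnj c = c" and c_norm: "c * c * (\<Sum>k<n. u k * cnj (u k)) = 2 * c"
  defines "W \<equiv> mat n n (\<lambda>(i,j). (if i = j then 1 else 0) - c * u i * cnj (u j))"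
  shows "adj W = W" and "W * W = 1\<^sub>m n"
proof -
  have W: "W \<in> carrier_mat n n" unfolding W_def by simp
  have Wi: "W $$ (i,j) = (if i = j then 1 else 0) - c * u i * cnj (u j)" if "i < n" "j < n" for i j
    unfolding W_def using that by simp
  show "adj W = W"
    by (rule eq_matI) (use W in \<open>auto simp: Wi c_real\<close>)
  show "W * W = 1\<^sub>m n"
  proof (rule eq_matI)
    fix i j assume "i < dim_row (1\<^sub>m n)" "j < dim_col (1\<^sub>m n)"
    then have i: "i < n" and j: "j < n" by simp_all
    have expand: "((if i = k then 1 else 0) - c * u i * cnj (u k)) * ((if k = j then 1 else 0) - c * u k * cnj (u j)) =
        (if k = i then (if i = j then 1 else 0) else 0) - (if k = i then c * u k * cnj (u j) else 0)
        - (if k = j then c * u i * cnj (u k) else 0) + (c * c * u i * cnj (u j)) * (u k * cnj (u k))" for k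
      by (simp add: algebra_simps)
    have "(W * W) $$ (i,j) = (\<Sum>k<n. ((if i = k then 1 else 0) - c * u i * cnj (u k)) *
                                   ((if k = j then 1 else 0) - c * u k * cnj (u j)))"
      using W i j by (simp add: Wi)
    also have "\<dots> = (if i = j then 1 else 0) - c * u i * cnj (u j) - c * u i * cnj (u j)
        + (c * c * (\<Sum>k<n. u k * cnj (u k))) * u i * cnj (u j)"
      unfolding expand using i j
      by (simp add: sum.distrib sum_subtractf sum_distrib_left sum_distrib_right algebra_simps)
    also have "\<dots> = 1\<^sub>m n $$ (i,j)" unfolding c_norm using i j by (simp add: algebra_simps)
    finally show "(W * W) $$ (i,j) = 1\<^sub>m n $$ (i,j)" .
  qed (use W in simp_all)
qed

lemma sum_norm_sq_minus_unit:
  fixes f :: "nat \<Rightarrow> complex"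
  assumes n: "0 < n" and unit: "(\<Sum>i<n. (cmod (f i))\<^sup>2) = 1" and f0: "Im (f 0) = 0"
  shows "(\<Sum>i<n. (cmod (f i - (if i = 0 then 1 else 0)))\<^sup>2) = 2 - 2 * Re (f 0)"
proof -
  have "f 0 - 1 = complex_of_real (Re (f 0) - 1)" and "f 0 = complex_of_real (Re (f 0))"
    using f0 by (simp_all add: complex_eq_iff)
  then have "(cmod (f 0 - 1))\<^sup>2 = (Re (f 0) - 1)\<^sup>2" and "(cmod (f 0))\<^sup>2 = (Re (f 0))\<^sup>2"
    by (metis norm_of_real power2_abs)+
  moreover have "(\<Sum>i<n. (cmod (f i - (if i = 0 then 1 else 0)))\<^sup>2) =
      (cmod (f 0 - 1))\<^sup>2 + (\<Sum>k\<in>{..<n}-{0}. (cmod (f k))\<^sup>2)"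
    using n by (subst sum.remove[of _ 0]) auto
  moreover have "1 = (cmod (f 0))\<^sup>2 + (\<Sum>k\<in>{..<n}-{0}. (cmod (f k))\<^sup>2)"
    using n unit by (subst (asm) sum.remove[of _ 0]) auto
  ultimately show ?thesis by (simp add: power2_eq_square algebra_simps)
qed

text \<open>The reflection in the hyperplane orthogonal to f - e_0 maps e_0 to f; this needs f 0 real.\<close>
lemma householder_reflection_exists:
  fixes f :: "nat \<Rightarrow> complex"
  assumes n: "0 < n" and unit: "(\<Sum>i<n. (cmod (f i))\<^sup>2) = 1" and f0: "Im (f 0) = 0"
  shows "\<exists>W. W \<in> carrier_mat n n \<and> adj W = W \<and> W * W = 1\<^sub>m n \<and> (\<forall>i<n. W $$ (i,0) = f i)"
proof -
  define u where "u = (\<lambda>i. f i - (if i = 0 then 1 else 0))"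
  define \<nu> where "\<nu> = (\<Sum>i<n. (cmod (u i))\<^sup>2)"
  define c where "c = complex_of_real (2 / \<nu>)"
  define W where "W = mat n n (\<lambda>(i,j). (if i = j then 1 else 0) - c * u i * cnj (u j))"
  have c_real: "cnj c = c" unfolding c_def by simp
  have uu: "(\<Sum>k<n. u k * cnj (u k)) = complex_of_real \<nu>"
    unfolding \<nu>_def of_real_sum by (intro sum.cong refl) (metis complex_norm_square)
  have "2 / \<nu> * (2 / \<nu>) * \<nu> = 2 * (2 / \<nu>)"
    by (cases "\<nu> = 0") (simp_all add: field_simps)
  then have c_norm: "c * c * (\<Sum>k<n. u k * cnj (u k)) = 2 * c"
    unfolding uu c_def by (metis of_real_mult of_real_numeral)
  note inv = reflection_mat_involution[OF c_real c_norm, folded W_def]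
  define r where "r = Re (f 0)"
  have fr: "f 0 = complex_of_real r" using f0 unfolding r_def by (simp add: complex_eq_iff)
  have \<nu>r: "\<nu> = 2 - 2 * r"
    unfolding \<nu>_def u_def r_def by (rule sum_norm_sq_minus_unit[OF n unit f0])
  have col0: "W $$ (i,0) = f i" if i: "i < n" for i
  proof (cases "\<nu> = 0")
    case True
    then have "\<forall>k\<in>{..<n}. (cmod (u k))\<^sup>2 = 0"
      unfolding \<nu>_def by (subst sum_nonneg_eq_0_iff[symmetric]) auto
    then show ?thesis using i n unfolding W_def u_def by (auto split: if_splits)
  next
    case False
    then have "c * cnj (u 0) = -1" unfolding c_def u_def fr \<nu>r by (simp add: field_simps)
    have "W $$ (i,0) = (if i = 0 then 1 else 0) - u i * (c * cnj (u 0))"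
      using i n unfolding W_def by (simp add: algebra_simps)
    also have "\<dots> = (if i = 0 then 1 else 0) + u i" unfolding \<open>c * cnj (u 0) = -1\<close> by simp
    finally show ?thesis by (simp add: u_def)
  qed
  have "W \<in> carrier_mat n n" unfolding W_def by simp
  then show ?thesis using inv col0 by blast
qed

lemma eigenvector_exists:
  fixes A :: "complex mat"
  assumes A: "A \<in> carrier_mat n n" and n: "0 < n"
  shows "\<exists>e v. v \<in> carrier_vec n \<and> v \<noteq> 0\<^sub>v n \<and> A *\<^sub>v v = e \<cdot>\<^sub>v v"
proof -
  obtain es where cp: "char_poly A = (\<Prod>a\<leftarrow>es. [:- a, 1:])" and l: "length es = n"
    using char_poly_factorized[OF A] by blast
  then obtain e rest where es: "es = e # rest" using n by (cases es) auto
  have "eigenvalue A e" unfolding eigenvalue_root_char_poly[OF A] cp es by simp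
  then show ?thesis unfolding eigenvalue_def eigenvector_def using A by auto
qed

text \<open>Rescaling by a phase makes the first coordinate real, as the Householder step requires.\<close>
lemma unit_eigenvector_exists:
  fixes A :: "complex mat"
  assumes A: "A \<in> carrier_mat n n" and n: "0 < n"
  shows "\<exists>e f. (\<Sum>i<n. (cmod (f i))\<^sup>2) = 1 \<and> Im (f 0) = 0 \<and> (\<forall>i<n. (\<Sum>k<n. A $$ (i,k) * f k) = e * f i)"
proof -
  obtain e v where v: "v \<in> carrier_vec n" "v \<noteq> 0\<^sub>v n" and Av: "A *\<^sub>v v = e \<cdot>\<^sub>v v"
    using eigenvector_exists[OF A n] by blast
  define s where "s = (\<Sum>i<n. (cmod (v $ i))\<^sup>2)"
  obtain j where j: "j < n" "v $ j \<noteq> 0" using v by (metis carrier_vecD eq_vecI index_zero_vec)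
  have "(cmod (v $ j))\<^sup>2 \<le> s" unfolding s_def by (rule member_le_sum) (use j in auto)
  moreover have "0 < (cmod (v $ j))\<^sup>2" using j by simp
  ultimately have s: "0 < s" by linarith
  define ph where "ph = (if v $ 0 = 0 then 1 else cnj (v $ 0) / complex_of_real (cmod (v $ 0)))"
  define f where "f = (\<lambda>i. ph / complex_of_real (sqrt s) * v $ i)"
  have "cmod ph = 1" unfolding ph_def by (simp add: norm_divide)
  then have "(\<Sum>i<n. (cmod (f i))\<^sup>2) = (\<Sum>i<n. (cmod (v $ i))\<^sup>2) / s"
    unfolding f_def using s by (simp add: norm_mult norm_divide power_divide sum_divide_distrib)
  moreover have "Im (f 0) = 0"
    unfolding f_def ph_def
    by (simp add: mult.commute[of "cnj _"] complex_mult_cnj flip: of_real_mult of_real_power)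
  moreover have "(\<Sum>k<n. A $$ (i,k) * f k) = e * f i" if i: "i < n" for i
  proof -
    have "(\<Sum>k<n. A $$ (i,k) * f k) = ph / complex_of_real (sqrt s) * (\<Sum>k<n. A $$ (i,k) * v $ k)"
      unfolding f_def by (simp add: sum_distrib_left algebra_simps)
    also have "(\<Sum>k<n. A $$ (i,k) * v $ k) = e * v $ i"
      using arg_cong[OF Av, of "\<lambda>w. w $ i"] A v i by simp
    finally show ?thesis unfolding f_def by simp
  qed
  ultimately show ?thesis using s unfolding s_def by auto
qed

lemma hermitian_bordered_of_first_col:
  assumes B: "B \<in> carrier_mat (Suc m) (Suc m)" and h: "adj B = B"
    and col: "\<And>i. i < Suc m \<Longrightarrow> B $$ (i,0) = (if i = 0 then e else 0)"
  shows "\<exists>B'. B' \<in> carrier_mat m m \<and> adj B' = B' \<and> B = bordered_mat (complex_of_real (Re e)) B'"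
proof -
  have entry: "B $$ (j,i) = cnj (B $$ (i,j))" if "i < Suc m" "j < Suc m" for i j
    using arg_cong[OF h, of "\<lambda>X. X $$ (j,i)"] B that by simp
  have e: "complex_of_real (Re e) = e"
    using entry[of 0 0] col[of 0] by (simp add: complex_eq_iff)
  define B' where "B' = mat m m (\<lambda>(i,j). B $$ (Suc i, Suc j))"
  have B': "B' \<in> carrier_mat m m" unfolding B'_def by simp
  have "B $$ (i,j) = bordered_mat (complex_of_real (Re e)) B' $$ (i,j)" if "i < Suc m" "j < Suc m" for i j
  proof (cases i)
    case 0
    then show ?thesis using that col[of j] entry[of j 0] B' e by (cases j) (simp_all add: index_bordered_mat)
  next
    case (Suc i')
    then show ?thesis using that col[of i] B' by (cases j) (simp_all add: index_bordered_mat B'_def)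
  qed
  then have "B = bordered_mat (complex_of_real (Re e)) B'"
    using B B' by (intro eq_matI) auto
  moreover have "adj B' = B'"
  proof (rule eq_matI)
    fix i j assume "i < dim_row B'" "j < dim_col B'"
    then show "adj B' $$ (i,j) = B' $$ (i,j)" using B' entry[of "Suc j" "Suc i"] by (simp add: B'_def)
  qed (use B' in simp_all)
  ultimately show ?thesis using B' by blast
qed

lemma hermitian_deflation:
  assumes A: "A \<in> carrier_mat (Suc m) (Suc m)" and h: "adj A = A"
  shows "\<exists>W e A'. unitary_mat (Suc m) W \<and> A' \<in> carrier_mat m m \<and> adj A' = A' \<and>
     A = W * bordered_mat (complex_of_real e) A' * adj W"
proof -
  let ?n = "Suc m"
  obtain e f where unit: "(\<Sum>i<?n. (cmod (f i))\<^sup>2) = 1" and f0: "Im (f 0) = 0"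
     and Af: "\<And>i. i < ?n \<Longrightarrow> (\<Sum>k<?n. A $$ (i,k) * f k) = e * f i"
    using unit_eigenvector_exists[OF A] by blast
  obtain W where W: "W \<in> carrier_mat ?n ?n" and hW: "adj W = W" and WW: "W * W = 1\<^sub>m ?n"
    and Wf: "\<And>i. i < ?n \<Longrightarrow> W $$ (i,0) = f i"
    using householder_reflection_exists[OF _ unit f0] by blast
  note assoc = assoc_mult_mat[of _ ?n ?n _ ?n _ ?n] mult_carrier_mat[of _ ?n ?n _ ?n]
  define B where "B = W * A * W"
  have B: "B \<in> carrier_mat ?n ?n" unfolding B_def using W A by simp
  have "adj B = W * adj A * W"
    unfolding B_def using W A by (simp add: adj_mult[of _ ?n ?n _ ?n] hW assoc)
  then have hB: "adj B = B" unfolding h B_def .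
  have col: "B $$ (i,0) = (if i = 0 then e else 0)" if i: "i < ?n" for i
  proof -
    have "B $$ (i,0) = (\<Sum>l<?n. W $$ (i,l) * (\<Sum>k<?n. A $$ (l,k) * f k))"
      unfolding B_def using W A i by (simp add: Wf)
    also have "\<dots> = (\<Sum>l<?n. W $$ (i,l) * (e * W $$ (l,0)))"
      by (intro sum.cong refl) (simp add: Wf Af del: sum.lessThan_Suc)
    also have "\<dots> = e * (\<Sum>l<?n. W $$ (i,l) * W $$ (l,0))"
      by (simp add: sum_distrib_left algebra_simps del: sum.lessThan_Suc)
    also have "\<dots> = e * (W * W) $$ (i,0)"
      using W i by simp
    finally show ?thesis unfolding WW using i by simp
  qed
  obtain A' where A': "A' \<in> carrier_mat m m" "adj A' = A'" and BA': "B = bordered_mat (complex_of_real (Re e)) A'"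
    using hermitian_bordered_of_first_col[OF B hB col] by blast
  have "W * B * adj W = (W * W) * A * (W * W)"
    unfolding B_def hW using W A by (simp add: assoc)
  then have "A = W * B * adj W" using W A WW by simp
  moreover have "unitary_mat ?n W" unfolding unitary_mat_def hW using W WW by simp
  ultimately show ?thesis using A' unfolding BA' by blast
qed

theorem hermitian_spectral:
  assumes "A \<in> carrier_mat n n" and "adj A = A"
  shows "\<exists>U \<mu>. unitary_mat n U \<and> A = U * diag_real n \<mu> * adj U"
  using assms
proof (induction n arbitrary: A)
  case 0
  then have "A = 1\<^sub>m 0 * diag_real 0 (\<lambda>_. 0) * adj (1\<^sub>m 0)" by (intro eq_matI) auto
  moreover have "unitary_mat 0 (1\<^sub>m 0)" unfolding unitary_mat_def by simp
  ultimately show ?case by blast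
next
  case (Suc m)
  obtain W e A' where W: "unitary_mat (Suc m) W" and A': "A' \<in> carrier_mat m m" "adj A' = A'"
    and A: "A = W * bordered_mat (complex_of_real e) A' * adj W"
    using hermitian_deflation[OF Suc.prems] by blast
  obtain U' \<mu>' where U': "unitary_mat m U'" and A'd: "A' = U' * diag_real m \<mu>' * adj U'"
    using Suc.IH[OF A'] by blast
  define U where "U = bordered_mat 1 U'"
  define \<mu> where "\<mu> = case_nat e \<mu>'"
  have cU': "U' \<in> carrier_mat m m" and cW: "W \<in> carrier_mat (Suc m) (Suc m)"
    using U' W unfolding unitary_mat_def by auto
  have "bordered_mat (complex_of_real e) A' = U * diag_real (Suc m) \<mu> * adj U"
    unfolding U_def \<mu>_def A'd diag_real_Suc adj_bordered_mat using cU'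
    by (simp add: bordered_mat_mult[of _ m m _ m])
  then have "A = (W * U) * diag_real (Suc m) \<mu> * adj (W * U)"
    unfolding A U_def using cW cU' by (simp add: unitary_conj_mult)
  moreover have "unitary_mat (Suc m) (W * U)"
    unfolding U_def by (rule unitary_mult[OF W unitary_bordered_mat[OF U']])
  ultimately show ?case by blast
qed

corollary hermitian_unitary_diag:
  assumes "A \<in> carrier_mat n n" and "adj A = A"
  obtains U \<mu> where "unitary_mat n U" and "A = unitary_diag n U \<mu>"
proof -
  obtain U \<mu> where "unitary_mat n U" and "A = U * diag_real n \<mu> * adj U"
    using hermitian_spectral[OF assms] by blast
  then show ?thesis using that mult_diag_real_adj[OF unitary_matD(1)] by auto
qed

section \<open>Positive semidefinite matrices and trace-norm certificates\<close>

definition quad_form :: "nat \<Rightarrow> complex mat \<Rightarrow> (nat \<Rightarrow> complex) \<Rightarrow> complex" where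
  "quad_form d M f = (\<Sum>i<d. \<Sum>j<d. cnj (f i) * M $$ (i,j) * f j)"

lemma psd_iff_quad_form: "psd d M \<longleftrightarrow> M \<in> carrier_mat d d \<and> (\<forall>f. 0 \<le> quad_form d M f)"
proof
  assume p: "psd d M"
  then have M: "M \<in> carrier_mat d d" unfolding psd_def by simp
  show "M \<in> carrier_mat d d \<and> (\<forall>f. 0 \<le> quad_form d M f)"
  proof (intro conjI allI M)
    fix f :: "nat \<Rightarrow> complex"
    define v where "v = vec d f"
    have "v \<in> carrier_vec d" unfolding v_def by simp
    then have h: "Im (\<Sum>i<d. cnj (v $ i) * (M *\<^sub>v v) $ i) = 0 \<and> Re (\<Sum>i<d. cnj (v $ i) * (M *\<^sub>v v) $ i) \<ge> 0"
      using p unfolding psd_def by blast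
    have "(\<Sum>i<d. cnj (v $ i) * (M *\<^sub>v v) $ i) = quad_form d M f"
      unfolding quad_form_def v_def using M by (simp add: sum_distrib_left algebra_simps)
    then show "0 \<le> quad_form d M f" using h by (simp add: less_eq_complex_def)
  qed
next
  assume h: "M \<in> carrier_mat d d \<and> (\<forall>f. 0 \<le> quad_form d M f)"
  then have M: "M \<in> carrier_mat d d" by simp
  show "psd d M" unfolding psd_def
  proof (intro conjI ballI M)
    fix v :: "complex vec" assume v: "v \<in> carrier_vec d"
    have "(\<Sum>i<d. cnj (v $ i) * (M *\<^sub>v v) $ i) = quad_form d M (\<lambda>i. v $ i)"
      unfolding quad_form_def using M v by (simp add: sum_distrib_left algebra_simps)
    moreover have "0 \<le> quad_form d M (\<lambda>i. v $ i)" using h by simp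
    ultimately show "Im (\<Sum>i<d. cnj (v $ i) * (M *\<^sub>v v) $ i) = 0"
      "0 \<le> Re (\<Sum>i<d. cnj (v $ i) * (M *\<^sub>v v) $ i)" by (simp_all add: less_eq_complex_def)
  qed
qed

lemma quad_form_pair:
  assumes i: "i < n" and j: "j < n" and ij: "i \<noteq> j"
  shows "quad_form n A (\<lambda>p. (if p = i then a else 0) + (if p = j then b else 0)) =
    cnj a * a * A $$ (i,i) + cnj a * b * A $$ (i,j) + cnj b * a * A $$ (j,i) + cnj b * b * A $$ (j,j)"
proof -
  let ?f = "\<lambda>p. (if p = i then a else 0) + (if p = j then b else 0)"
  have inner: "(\<Sum>q<n. cnj (?f p) * A $$ (p,q) * ?f q) = cnj (?f p) * (A $$ (p,i) * a + A $$ (p,j) * b)" for p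
  proof -
    have "(\<Sum>q<n. cnj (?f p) * A $$ (p,q) * ?f q) = cnj (?f p) * (\<Sum>q<n. A $$ (p,q) * ?f q)"
      by (simp add: sum_distrib_left mult.assoc)
    then show ?thesis using sum_two_delta[OF i j ij, of "\<lambda>q. A $$ (p,q)" a b] by simp
  qed
  have "quad_form n A ?f = (\<Sum>p<n. (A $$ (p,i) * a + A $$ (p,j) * b) * ((if p = i then cnj a else 0) + (if p = j then cnj b else 0)))"
    unfolding quad_form_def inner by (rule sum.cong) (auto simp: mult.commute)
  also have "\<dots> = (A $$ (i,i) * a + A $$ (i,j) * b) * cnj a + (A $$ (j,i) * a + A $$ (j,j) * b) * cnj b"
    by (rule sum_two_delta[OF i j ij])
  finally show ?thesis by (simp add: algebra_simps)
qed

lemma quad_form_unit: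
  assumes i: "i < n"
  shows "quad_form n A (\<lambda>p. if p = i then 1 else 0) = A $$ (i,i)"
proof -
  have "quad_form n A (\<lambda>p. if p = i then 1 else 0) = (\<Sum>p<n. if p = i then A $$ (i,i) else 0)"
    unfolding quad_form_def by (rule sum.cong) (auto simp: if_distrib cong: if_cong)
  then show ?thesis using i by simp
qed

text \<open>Polarisation: the form is real at e_i + e_j and at e_i + i e_j.\<close>
lemma psd_entry_cnj:
  assumes q: "\<And>f. 0 \<le> quad_form n A f" and i: "i < n" and j: "j < n"
  shows "A $$ (i,j) = cnj (A $$ (j,i))"
proof (cases "i = j")
  case True
  have "0 \<le> A $$ (i,i)" using q[of "\<lambda>p. if p = i then 1 else 0"] unfolding quad_form_unit[OF i] .
  then show ?thesis using True by (simp add: less_eq_complex_def complex_eq_iff)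
next
  case False
  have d: "Im (A $$ (i,i)) = 0" "Im (A $$ (j,j)) = 0"
    using q[of "\<lambda>p. if p = i then 1 else 0"] q[of "\<lambda>p. if p = j then 1 else 0"]
    unfolding quad_form_unit[OF i] quad_form_unit[OF j] by (auto simp: less_eq_complex_def)
  have 1: "Im (quad_form n A (\<lambda>p. (if p = i then 1 else 0) + (if p = j then 1 else 0))) = 0"
    using q by (simp add: less_eq_complex_def)
  have 2: "Im (quad_form n A (\<lambda>p. (if p = i then 1 else 0) + (if p = j then \<i> else 0))) = 0"
    using q by (simp add: less_eq_complex_def)
  have "Im (A $$ (i,j)) + Im (A $$ (j,i)) = 0" using 1 d unfolding quad_form_pair[OF i j False] by simp
  moreover have "Re (A $$ (i,j)) - Re (A $$ (j,i)) = 0" using 2 d unfolding quad_form_pair[OF i j False] by simp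
  ultimately show ?thesis by (simp add: complex_eq_iff)
qed

lemma psd_adj: assumes "psd n A" shows "adj A = A"
proof -
  have A: "A \<in> carrier_mat n n" and q: "\<And>f. 0 \<le> quad_form n A f" using assms unfolding psd_iff_quad_form by auto
  show ?thesis
  proof (rule eq_matI)
    fix i j assume ij: "i < dim_row A" "j < dim_col A"
    then have i: "i < n" and j: "j < n" using A by auto
    show "adj A $$ (i,j) = A $$ (i,j)" using psd_entry_cnj[OF q j i] A i j by simp
  qed (use A in auto)
qed

lemma eigenvalue_quad_form:
  assumes U: "unitary_mat n U" and A: "A = U * diag_real n \<mu> * adj U" and k: "k < n"
  shows "quad_form n A (\<lambda>i. U $$ (i,k)) = complex_of_real (\<mu> k)"
proof -
  have Uc: "U \<in> carrier_mat n n" and UU: "adj U * U = 1\<^sub>m n"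
    using U unfolding unitary_mat_def by auto
  note assoc = assoc_mult_mat[of _ n n _ n _ n] mult_carrier_mat[of _ n n _ n]
  have "adj U * A * U = (adj U * U) * diag_real n \<mu> * (adj U * U)"
    unfolding A using Uc by (simp add: assoc)
  then have "(adj U * A * U) $$ (k,k) = complex_of_real (\<mu> k)"
    unfolding UU using Uc k by simp
  moreover have "A \<in> carrier_mat n n" unfolding A using Uc by (simp add: mult_carrier_mat[of _ n n _ n])
  then have "(adj U * A * U) $$ (k,k) = quad_form n A (\<lambda>i. U $$ (i,k))"
    unfolding quad_form_def using Uc k by (simp add: sum_distrib_left algebra_simps) (rule sum.swap)
  ultimately show ?thesis by simp
qed

lemma psd_gram:
  assumes p: "psd n A"
  shows "\<exists>vs. \<forall>i<n. \<forall>j<n. A $$ (i,j) = (\<Sum>k<n. vs k i * cnj (vs k j))"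
proof -
  have A: "A \<in> carrier_mat n n" and q: "\<And>f. 0 \<le> quad_form n A f"
    using p unfolding psd_iff_quad_form by auto
  obtain U \<mu> where U: "unitary_mat n U" and Ad: "A = U * diag_real n \<mu> * adj U"
    using hermitian_spectral[OF A psd_adj[OF p]] by blast
  have mu: "0 \<le> \<mu> k" if "k < n" for k
    using q[of "\<lambda>i. U $$ (i,k)"] eigenvalue_quad_form[OF U Ad that] by (simp add: less_eq_complex_def)
  define vs where "vs = (\<lambda>k i. complex_of_real (sqrt (\<mu> k)) * U $$ (i,k))"
  have "A $$ (i,j) = (\<Sum>k<n. vs k i * cnj (vs k j))" if "i < n" "j < n" for i j
  proof -
    have "A $$ (i,j) = (\<Sum>k<n. complex_of_real (\<mu> k) * U $$ (i,k) * cnj (U $$ (j,k)))"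
      unfolding Ad mult_diag_real_adj[OF unitary_matD(1)[OF U]] using that by simp
    also have "\<dots> = (\<Sum>k<n. vs k i * cnj (vs k j))"
      unfolding vs_def using mu
      by (intro sum.cong refl) (simp add: algebra_simps flip: of_real_mult)
    finally show ?thesis .
  qed
  then show ?thesis by blast
qed

definition sqnorm :: "nat \<Rightarrow> (nat \<Rightarrow> complex) \<Rightarrow> real" where
  "sqnorm d v = (\<Sum>i<d. (cmod (v i))\<^sup>2)"

lemma sqnorm_nonneg: "0 \<le> sqnorm d v" unfolding sqnorm_def by (simp add: sum_nonneg)

lemma sqnorm_eq_0_iff: "sqnorm d v = 0 \<longleftrightarrow> (\<forall>i<d. v i = 0)"
  unfolding sqnorm_def by (auto simp: sum_nonneg_eq_0_iff)

lemma of_real_sqnorm: "complex_of_real (sqnorm d v) = (\<Sum>i<d. v i * cnj (v i))"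
  unfolding sqnorm_def of_real_sum by (rule sum.cong[OF refl], rule complex_norm_square)

lemma unitary_entry_le_1:
  assumes u: "unitary_mat n V" and i: "i < n" and k: "k < n"
  shows "cmod (V $$ (i,k)) \<le> 1"
proof -
  have "complex_of_real (\<Sum>l<n. (cmod (V $$ (i,l)))\<^sup>2) = (\<Sum>l<n. V $$ (i,l) * cnj (V $$ (i,l)))"
    unfolding of_real_sum by (rule sum.cong[OF refl], rule complex_norm_square)
  then have "complex_of_real (\<Sum>l<n. (cmod (V $$ (i,l)))\<^sup>2) = 1"
    using unitary_matD(2)[OF u i i] by simp
  then have s: "(\<Sum>l<n. (cmod (V $$ (i,l)))\<^sup>2) = 1" by (metis of_real_eq_1_iff)
  have "(cmod (V $$ (i,k)))\<^sup>2 \<le> (\<Sum>l<n. (cmod (V $$ (i,l)))\<^sup>2)"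
    by (rule member_le_sum) (use k in auto)
  then have "(cmod (V $$ (i,k)))\<^sup>2 \<le> 1" using s by simp
  then show ?thesis by (simp add: power_le_one_iff)
qed

lemma sqnorm_unitary_mult:
  assumes u: "unitary_mat n V"
  shows "sqnorm n (\<lambda>i. \<Sum>j<n. V $$ (i,j) * v j) = sqnorm n v"
proof -
  note b = unitary_matD(3)[OF u]
  have "complex_of_real (sqnorm n (\<lambda>i. \<Sum>j<n. V $$ (i,j) * v j)) =
     (\<Sum>i<n. (\<Sum>j<n. V $$ (i,j) * v j) * cnj (\<Sum>l<n. V $$ (i,l) * v l))"
    unfolding of_real_sqnorm ..
  also have "\<dots> = (\<Sum>j<n. \<Sum>l<n. \<Sum>i<n. V $$ (i,j) * v j * cnj (V $$ (i,l) * v l))"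
    by (rule sum_mult_cnj_sum)
  also have "\<dots> = (\<Sum>j<n. \<Sum>l<n. v j * cnj (v l) * (\<Sum>i<n. cnj (V $$ (i,l)) * V $$ (i,j)))"
    by (intro sum.cong refl) (simp add: sum_distrib_left algebra_simps)
  also have "\<dots> = (\<Sum>j<n. \<Sum>l<n. if l = j then v j * cnj (v l) else 0)"
    by (intro sum.cong refl) (simp add: b)
  also have "\<dots> = (\<Sum>j<n. v j * cnj (v j))" by simp
  also have "\<dots> = complex_of_real (sqnorm n v)" unfolding of_real_sqnorm ..
  finally show ?thesis by (metis of_real_eq_iff)
qed

lemma inner_le_sqnorm_avg:
  "cmod (\<Sum>i<n. cnj (v i) * w i) \<le> (sqnorm n v + sqnorm n w) / 2"
proof -
  have "cmod (\<Sum>i<n. cnj (v i) * w i) \<le> (\<Sum>i<n. cmod (v i) * cmod (w i))"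
    by (rule order_trans[OF norm_sum]) (simp add: norm_mult)
  also have "\<dots> \<le> (\<Sum>i<n. ((cmod (v i))\<^sup>2 + (cmod (w i))\<^sup>2) / 2)"
  proof (rule sum_mono)
    fix i
    have "0 \<le> (cmod (v i) - cmod (w i))\<^sup>2" by simp
    then show "cmod (v i) * cmod (w i) \<le> ((cmod (v i))\<^sup>2 + (cmod (w i))\<^sup>2) / 2"
      by (simp add: power2_eq_square algebra_simps)
  qed
  also have "\<dots> = (sqnorm n v + sqnorm n w) / 2"
    unfolding sqnorm_def by (simp add: sum_divide_distrib[symmetric] sum.distrib)
  finally show ?thesis .
qed

lemma adj_unitary_diag: "adj (unitary_diag n U a) = unitary_diag n U a"
proof (rule eq_matI)
  fix i j assume "i < dim_row (unitary_diag n U a)" "j < dim_col (unitary_diag n U a)"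
  then have i: "i < n" and j: "j < n" by simp_all
  have "adj (unitary_diag n U a) $$ (i,j) = cnj (\<Sum>k<n. complex_of_real (a k) * U $$ (j,k) * cnj (U $$ (i,k)))"
    using i j by simp
  also have "\<dots> = (\<Sum>k<n. cnj (complex_of_real (a k) * U $$ (j,k) * cnj (U $$ (i,k))))" by (rule cnj_sum)
  also have "\<dots> = unitary_diag n U a $$ (i,j)" using i j by (simp, intro sum.cong refl, simp add: algebra_simps)
  finally show "adj (unitary_diag n U a) $$ (i,j) = unitary_diag n U a $$ (i,j)" .
qed simp_all

lemma unitary_diag_mult:
  assumes u: "unitary_mat n U"
  shows "unitary_diag n U a * unitary_diag n U b = unitary_diag n U (\<lambda>k. a k * b k)"
proof (rule eq_matI)
  note b = unitary_matD(3)[OF u]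
  fix i j assume "i < dim_row (unitary_diag n U (\<lambda>k. a k * b k))" "j < dim_col (unitary_diag n U (\<lambda>k. a k * b k))"
  then have i: "i < n" and j: "j < n" by simp_all
  have "(unitary_diag n U a * unitary_diag n U b) $$ (i,j) = (\<Sum>l<n. (\<Sum>k<n. complex_of_real (a k) * U $$ (i,k) * cnj (U $$ (l,k))) *
      (\<Sum>m<n. complex_of_real (b m) * U $$ (l,m) * cnj (U $$ (j,m))))"
    using i j by simp
  also have "\<dots> = (\<Sum>l<n. \<Sum>k<n. \<Sum>m<n. (complex_of_real (a k) * U $$ (i,k) * cnj (U $$ (l,k))) *
      (complex_of_real (b m) * U $$ (l,m) * cnj (U $$ (j,m))))"
    by (simp add: sum_product)
  also have "\<dots> = (\<Sum>k<n. \<Sum>m<n. \<Sum>l<n. (complex_of_real (a k) * U $$ (i,k) * cnj (U $$ (l,k))) *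
      (complex_of_real (b m) * U $$ (l,m) * cnj (U $$ (j,m))))"
    by (rule sum_swap3[symmetric])
  also have "\<dots> = (\<Sum>k<n. \<Sum>m<n. (complex_of_real (a k) * complex_of_real (b m) * U $$ (i,k) * cnj (U $$ (j,m))) *
      (\<Sum>l<n. cnj (U $$ (l,k)) * U $$ (l,m)))"
    by (intro sum.cong refl) (simp add: sum_distrib_left algebra_simps)
  also have "\<dots> = (\<Sum>k<n. \<Sum>m<n. if k = m then complex_of_real (a k) * complex_of_real (b m) * U $$ (i,k) * cnj (U $$ (j,m)) else 0)"
    by (intro sum.cong refl) (simp add: b)
  also have "\<dots> = unitary_diag n U (\<lambda>k. a k * b k) $$ (i,j)" using i j by simp
  finally show "(unitary_diag n U a * unitary_diag n U b) $$ (i, j) = unitary_diag n U (\<lambda>k. a k * b k) $$ (i, j)" .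
qed simp_all

lemma unitary_diag_one:
  assumes u: "unitary_mat n U"
  shows "unitary_diag n U (\<lambda>_. 1) = 1\<^sub>m n"
  by (rule eq_matI) (simp_all add: unitary_matD(2)[OF u])

lemma mtrace_unitary_diag:
  assumes u: "unitary_mat n U"
  shows "mtrace (unitary_diag n U a) = (\<Sum>k<n. complex_of_real (a k))"
proof -
  note b = unitary_matD(3)[OF u]
  have "mtrace (unitary_diag n U a) = (\<Sum>i<n. \<Sum>k<n. complex_of_real (a k) * U $$ (i,k) * cnj (U $$ (i,k)))"
    unfolding mtrace_def by simp
  also have "\<dots> = (\<Sum>k<n. complex_of_real (a k) * (\<Sum>i<n. cnj (U $$ (i,k)) * U $$ (i,k)))"
  proof -
    have "(\<Sum>i<n. \<Sum>k<n. complex_of_real (a k) * U $$ (i,k) * cnj (U $$ (i,k))) =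
       (\<Sum>k<n. \<Sum>i<n. complex_of_real (a k) * U $$ (i,k) * cnj (U $$ (i,k)))" by (rule sum.swap)
    also have "\<dots> = (\<Sum>k<n. complex_of_real (a k) * (\<Sum>i<n. cnj (U $$ (i,k)) * U $$ (i,k)))"
      by (intro sum.cong refl) (simp add: sum_distrib_left algebra_simps)
    finally show ?thesis .
  qed
  also have "\<dots> = (\<Sum>k<n. complex_of_real (a k))" by (simp add: b)
  finally show ?thesis .
qed

lemma sqnorm_unitary_col:
  assumes u: "unitary_mat n U" and k: "k < n"
  shows "sqnorm n (\<lambda>i. U $$ (i,k)) = 1"
proof -
  have "complex_of_real (sqnorm n (\<lambda>i. U $$ (i,k))) = (\<Sum>i<n. cnj (U $$ (i,k)) * U $$ (i,k))"
    unfolding of_real_sqnorm by (simp add: mult.commute)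
  also have "\<dots> = 1" using unitary_matD(3)[OF u k k] by simp
  finally show ?thesis by (metis of_real_eq_1_iff)
qed

lemma trace_norm_bdd_above:
  assumes Z: "Z \<in> carrier_mat n n"
  shows "bdd_above {cmod (mtrace (U * Z)) | U. unitary_mat n U}"
proof (rule bdd_aboveI)
  fix x assume "x \<in> {cmod (mtrace (U * Z)) | U. unitary_mat n U}"
  then obtain U where u: "unitary_mat n U" and x: "x = cmod (mtrace (U * Z))" by blast
  have U: "U \<in> carrier_mat n n" using unitary_matD(1)[OF u] .
  have "mtrace (U * Z) = (\<Sum>i<n. \<Sum>k<n. U $$ (i,k) * Z $$ (k,i))"
    unfolding mtrace_def using U Z by simp
  then have "x \<le> (\<Sum>i<n. \<Sum>k<n. cmod (U $$ (i,k) * Z $$ (k,i)))"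
  proof -
    have "cmod (\<Sum>i<n. \<Sum>k<n. U $$ (i,k) * Z $$ (k,i)) \<le> (\<Sum>i<n. cmod (\<Sum>k<n. U $$ (i,k) * Z $$ (k,i)))"
      by (rule norm_sum)
    also have "\<dots> \<le> (\<Sum>i<n. \<Sum>k<n. cmod (U $$ (i,k) * Z $$ (k,i)))"
      by (intro sum_mono norm_sum)
    finally show ?thesis unfolding x using \<open>mtrace (U * Z) = _\<close> by simp
  qed
  also have "\<dots> \<le> (\<Sum>i<n. \<Sum>k<n. cmod (Z $$ (k,i)))"
  proof (intro sum_mono)
    fix i k assume "i \<in> {..<n}" "k \<in> {..<n}"
    then have "cmod (U $$ (i,k)) \<le> 1" using unitary_entry_le_1[OF u] by simp
    then show "cmod (U $$ (i,k) * Z $$ (k,i)) \<le> cmod (Z $$ (k,i))"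
      by (simp add: norm_mult mult_left_le_one_le)
  qed
  finally show "x \<le> (\<Sum>i<n. \<Sum>k<n. cmod (Z $$ (k,i)))" .
qed

text \<open>rank1_bounded d Y s says Y = \<Sum>k c_k v_k v_k^* with \<Sum>k |c_k| |v_k|^2 \<le> s. This certifies
  trace_norm d Y \<le> s, and unlike the trace norm it is visibly preserved by linear maps that send
  each v v^* to a matrix with certificate |v|^2.\<close>
definition rank1_sum :: "(real \<times> (nat \<Rightarrow> complex)) list \<Rightarrow> nat \<Rightarrow> nat \<Rightarrow> complex" where
  "rank1_sum L i j = (\<Sum>p\<leftarrow>L. complex_of_real (fst p) * snd p i * cnj (snd p j))"

definition rank1_weight :: "nat \<Rightarrow> (real \<times> (nat \<Rightarrow> complex)) list \<Rightarrow> real" where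
  "rank1_weight d L = (\<Sum>p\<leftarrow>L. \<bar>fst p\<bar> * sqnorm d (snd p))"

definition rank1_bounded :: "nat \<Rightarrow> complex mat \<Rightarrow> real \<Rightarrow> bool" where
  "rank1_bounded d Y s \<longleftrightarrow> Y \<in> carrier_mat d d \<and> (\<exists>L. (\<forall>i<d. \<forall>j<d. Y $$ (i,j) = rank1_sum L i j) \<and> rank1_weight d L \<le> s)"

lemma trace_norm_le_of_rank1_bounded:
  assumes d: "rank1_bounded n Y s"
  shows "trace_norm n Y \<le> s"
proof -
  obtain L where Y: "Y \<in> carrier_mat n n" and YL: "\<And>i j. i < n \<Longrightarrow> j < n \<Longrightarrow> Y $$ (i,j) = rank1_sum L i j"
    and w: "rank1_weight n L \<le> s" using d unfolding rank1_bounded_def by blast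
  have b: "cmod (mtrace (V * Y)) \<le> s" if u: "unitary_mat n V" for V
  proof -
    have V: "V \<in> carrier_mat n n" using unitary_matD(1)[OF u] .
    have "mtrace (V * Y) = (\<Sum>i<n. \<Sum>j<n. V $$ (i,j) * Y $$ (j,i))"
      unfolding mtrace_def using V Y by simp
    also have "\<dots> = (\<Sum>i<n. \<Sum>j<n. \<Sum>p\<leftarrow>L. V $$ (i,j) * (complex_of_real (fst p) * snd p j * cnj (snd p i)))"
      by (intro sum.cong refl) (simp add: YL rank1_sum_def sum_list_const_mult)
    also have "\<dots> = (\<Sum>p\<leftarrow>L. \<Sum>i<n. \<Sum>j<n. V $$ (i,j) * (complex_of_real (fst p) * snd p j * cnj (snd p i)))"
      by (simp add: sum_sum_list_swap)
    also have "\<dots> = (\<Sum>p\<leftarrow>L. complex_of_real (fst p) * (\<Sum>i<n. cnj (snd p i) * (\<Sum>j<n. V $$ (i,j) * snd p j)))"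
      by (rule arg_cong[where f = sum_list], rule map_cong[OF refl])
         (simp add: sum_distrib_left algebra_simps)
    finally have tr: "mtrace (V * Y) = \<dots>" .
    have "cmod (mtrace (V * Y)) \<le> (\<Sum>p\<leftarrow>L. cmod (complex_of_real (fst p) * (\<Sum>i<n. cnj (snd p i) * (\<Sum>j<n. V $$ (i,j) * snd p j))))"
      unfolding tr by (rule norm_sum_list_le)
    also have "\<dots> \<le> (\<Sum>p\<leftarrow>L. \<bar>fst p\<bar> * sqnorm n (snd p))"
    proof (rule sum_list_mono)
      fix p :: "real \<times> (nat \<Rightarrow> complex)"
      have "cmod (\<Sum>i<n. cnj (snd p i) * (\<Sum>j<n. V $$ (i,j) * snd p j)) \<le>
          (sqnorm n (snd p) + sqnorm n (\<lambda>i. \<Sum>j<n. V $$ (i,j) * snd p j)) / 2"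
        by (rule inner_le_sqnorm_avg)
      also have "\<dots> = sqnorm n (snd p)" unfolding sqnorm_unitary_mult[OF u] by simp
      finally show "cmod (complex_of_real (fst p) * (\<Sum>i<n. cnj (snd p i) * (\<Sum>j<n. V $$ (i,j) * snd p j))) \<le> \<bar>fst p\<bar> * sqnorm n (snd p)"
        by (simp add: norm_mult mult_left_mono)
    qed
    also have "\<dots> \<le> s" using w unfolding rank1_weight_def .
    finally show ?thesis .
  qed
  have ne: "{cmod (mtrace (U * Y)) | U. unitary_mat n U} \<noteq> {}"
    using unitary_mat_def[of n "1\<^sub>m n"] by auto
  show ?thesis unfolding trace_norm_def
    by (rule cSup_least[OF ne]) (use b in blast)
qed

text \<open>The sign unitary U sgn(D) U^* attains the trace norm of U D U^*.\<close>
lemma hermitian_rank1_bounded: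
  assumes Z: "Z \<in> carrier_mat n n" and h: "adj Z = Z"
  shows "rank1_bounded n Z (trace_norm n Z)"
proof -
  obtain U \<mu> where u: "unitary_mat n U" and Zu: "Z = unitary_diag n U \<mu>"
    using hermitian_unitary_diag[OF Z h] by blast
  define L where "L = map (\<lambda>k. (\<mu> k, \<lambda>i. U $$ (i,k))) [0..<n]"
  have ZL: "Z $$ (i,j) = rank1_sum L i j" if "i < n" "j < n" for i j
    unfolding Zu rank1_sum_def L_def using that by (simp add: sum_list_upt_lessThan o_def)
  have wL: "rank1_weight n L = (\<Sum>k<n. \<bar>\<mu> k\<bar>)"
    unfolding rank1_weight_def L_def by (simp add: o_def sum_list_upt_lessThan sqnorm_unitary_col[OF u])
  define sg where "sg = (\<lambda>k. if \<mu> k \<ge> 0 then 1 else (-1::real))"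
  define S where "S = unitary_diag n U sg"
  have sgsg: "(\<lambda>k. sg k * sg k) = (\<lambda>_. 1)" unfolding sg_def by auto
  have uS: "unitary_mat n S" unfolding unitary_mat_def S_def adj_unitary_diag
    by (simp add: unitary_diag_mult[OF u] sgsg unitary_diag_one[OF u])
  have "mtrace (S * Z) = (\<Sum>k<n. complex_of_real (sg k * \<mu> k))"
    unfolding S_def Zu unitary_diag_mult[OF u] mtrace_unitary_diag[OF u] ..
  also have "\<dots> = complex_of_real (\<Sum>k<n. \<bar>\<mu> k\<bar>)"
    unfolding of_real_sum sg_def by (intro sum.cong refl) auto
  finally have "cmod (mtrace (S * Z)) = \<bar>\<Sum>k<n. \<bar>\<mu> k\<bar>\<bar>" by (simp only: norm_of_real)
  then have "cmod (mtrace (S * Z)) = (\<Sum>k<n. \<bar>\<mu> k\<bar>)" by (simp add: sum_nonneg)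
  then have "(\<Sum>k<n. \<bar>\<mu> k\<bar>) \<le> trace_norm n Z" unfolding trace_norm_def
    by (metis (mono_tags, lifting) cSup_upper mem_Collect_eq trace_norm_bdd_above[OF Z] uS)
  then show ?thesis unfolding rank1_bounded_def using Z ZL wL by auto
qed

definition mat_unit :: "nat \<Rightarrow> nat \<Rightarrow> nat \<Rightarrow> complex mat" where
  "mat_unit d i j = mat d d (\<lambda>(p,q). if p = i \<and> q = j then 1 else 0)"

definition outer_mat :: "nat \<Rightarrow> (nat \<Rightarrow> complex) \<Rightarrow> complex mat" where
  "outer_mat d v = mat d d (\<lambda>(i,j). v i * cnj (v j))"

lemma outer_mat_carrier[simp]: "outer_mat d v \<in> carrier_mat d d" unfolding outer_mat_def by simp
lemma outer_mat_dims[simp]: "dim_row (outer_mat d v) = d" "dim_col (outer_mat d v) = d"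
  unfolding outer_mat_def by simp_all
lemma index_outer_mat[simp]: "i < d \<Longrightarrow> j < d \<Longrightarrow> outer_mat d v $$ (i,j) = v i * cnj (v j)" unfolding outer_mat_def by simp
lemma mat_unit_carrier[simp]: "mat_unit d i j \<in> carrier_mat d d" unfolding mat_unit_def by simp

lemma psd_sum_mat:
  assumes fin: "finite I" and M: "\<And>k. k \<in> I \<Longrightarrow> psd d (M k)"
  shows "psd d (mat d d (\<lambda>st. \<Sum>k\<in>I. M k $$ st))"
  unfolding psd_iff_quad_form
proof (intro conjI allI)
  show "mat d d (\<lambda>st. \<Sum>k\<in>I. M k $$ st) \<in> carrier_mat d d" by simp
  fix f :: "nat \<Rightarrow> complex"
  have "quad_form d (mat d d (\<lambda>st. \<Sum>k\<in>I. M k $$ st)) f = (\<Sum>i<d. \<Sum>j<d. \<Sum>k\<in>I. cnj (f i) * M k $$ (i,j) * f j)"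
    unfolding quad_form_def by (intro sum.cong refl) (simp add: sum_distrib_left sum_distrib_right)
  also have "\<dots> = (\<Sum>k\<in>I. quad_form d (M k) f)" unfolding quad_form_def by (rule sum_swap3)
  finally show "0 \<le> quad_form d (mat d d (\<lambda>st. \<Sum>k\<in>I. M k $$ st)) f"
    using M unfolding psd_iff_quad_form by (simp add: sum_nonneg)
qed

lemma mult_cnj_nonneg: "0 \<le> (z::complex) * cnj z"
  by (simp add: complex_mult_cnj less_eq_complex_def)

lemma psd_outer_mat: "psd d (outer_mat d v)"
  unfolding psd_iff_quad_form
proof (intro conjI allI)
  fix f :: "nat \<Rightarrow> complex"
  have "(\<Sum>i<d. cnj (f i) * v i) * cnj (\<Sum>j<d. cnj (f j) * v j) = (\<Sum>i<d. \<Sum>j<d. (cnj (f i) * v i) * cnj (cnj (f j) * v j))"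
    by (simp only: cnj_sum sum_product)
  also have "\<dots> = quad_form d (outer_mat d v) f"
    unfolding quad_form_def by (intro sum.cong refl) (simp add: algebra_simps)
  finally have "quad_form d (outer_mat d v) f = (\<Sum>i<d. cnj (f i) * v i) * cnj (\<Sum>j<d. cnj (f j) * v j)" ..
  then show "0 \<le> quad_form d (outer_mat d v) f" by (simp only: mult_cnj_nonneg)
qed simp

lemma psd_add: "psd d A \<Longrightarrow> psd d B \<Longrightarrow> psd d (A + B)"
  unfolding psd_iff_quad_form
proof (intro conjI allI)
  fix f assume A: "A \<in> carrier_mat d d \<and> (\<forall>f. 0 \<le> quad_form d A f)" and B: "B \<in> carrier_mat d d \<and> (\<forall>f. 0 \<le> quad_form d B f)"
  show "A + B \<in> carrier_mat d d" using A B by simp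
  have Ac: "A \<in> carrier_mat d d" and Bc: "B \<in> carrier_mat d d" using A B by simp_all
  have "quad_form d (A + B) f = quad_form d A f + quad_form d B f"
    unfolding quad_form_def sum.distrib[symmetric] by (intro sum.cong refl) (use Ac Bc in \<open>simp add: algebra_simps\<close>)
  then show "0 \<le> quad_form d (A + B) f" using A B by simp
qed

lemma psd_zero_dim: "X \<in> carrier_mat 0 0 \<Longrightarrow> psd 0 X"
  unfolding psd_def by simp

lemma psd_smult: "psd d A \<Longrightarrow> 0 \<le> c \<Longrightarrow> psd d (complex_of_real c \<cdot>\<^sub>m A)"
  unfolding psd_iff_quad_form
proof (intro conjI allI)
  fix f assume A: "A \<in> carrier_mat d d \<and> (\<forall>f. 0 \<le> quad_form d A f)" and c: "0 \<le> c"
  show "complex_of_real c \<cdot>\<^sub>m A \<in> carrier_mat d d" using A by simp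
  have Ac: "A \<in> carrier_mat d d" using A by simp
  have "quad_form d (complex_of_real c \<cdot>\<^sub>m A) f = complex_of_real c * quad_form d A f"
    unfolding quad_form_def sum_distrib_left by (intro sum.cong refl) (use Ac in \<open>simp add: algebra_simps\<close>)
  then show "0 \<le> quad_form d (complex_of_real c \<cdot>\<^sub>m A) f" using A c by (simp add: less_eq_complex_def)
qed

lemma rank1_bounded_mono: "rank1_bounded d Y s \<Longrightarrow> s \<le> s' \<Longrightarrow> rank1_bounded d Y s'"
  unfolding rank1_bounded_def by (meson order_trans)

lemma rank1_bounded_smult:
  assumes d: "rank1_bounded d Y s" and c: "0 \<le> c"
  shows "rank1_bounded d (complex_of_real c \<cdot>\<^sub>m Y) (c * s)"
proof -
  obtain L where Y: "Y \<in> carrier_mat d d" and YL: "\<And>i j. i < d \<Longrightarrow> j < d \<Longrightarrow> Y $$ (i,j) = rank1_sum L i j"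
    and w: "rank1_weight d L \<le> s"
    using d unfolding rank1_bounded_def by blast
  define L' where "L' = map (\<lambda>p. (c * fst p, snd p)) L"
  have "(complex_of_real c \<cdot>\<^sub>m Y) $$ (i,j) = rank1_sum L' i j" if "i < d" "j < d" for i j
    using Y that by (simp add: YL rank1_sum_def L'_def o_def sum_list_const_mult[symmetric] algebra_simps)
  moreover have "rank1_weight d L' = c * rank1_weight d L"
    unfolding rank1_weight_def L'_def using c by (simp add: o_def sum_list_const_mult[symmetric] abs_mult algebra_simps)
  moreover have "c * rank1_weight d L \<le> c * s" using w c by (simp add: mult_left_mono)
  ultimately show ?thesis unfolding rank1_bounded_def using Y by auto
qed

lemma rank1_bounded_zero:
  assumes Y: "Y \<in> carrier_mat d d" and z: "\<And>i j. i < d \<Longrightarrow> j < d \<Longrightarrow> Y $$ (i,j) = 0" and s: "0 \<le> s"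
  shows "rank1_bounded d Y s"
  unfolding rank1_bounded_def using Y z s by (intro conjI exI[of _ "[]"]) (auto simp: rank1_sum_def rank1_weight_def)

lemma pure_state_normalise:
  assumes "0 < sqnorm d v"
  shows "pure_state d (outer_mat d (\<lambda>i. v i / complex_of_real (sqrt (sqnorm d v))))"
  unfolding pure_state_def
proof (intro bexI[of _ "vec d (\<lambda>i. v i / complex_of_real (sqrt (sqnorm d v)))"] conjI)
  show "(\<Sum>i<d. (cmod (vec d (\<lambda>i. v i / complex_of_real (sqrt (sqnorm d v))) $ i))\<^sup>2) = 1"
    using assms unfolding sqnorm_def
    by (simp add: norm_divide power_divide sum_divide_distrib[symmetric] less_imp_le)
  show "outer_mat d (\<lambda>i. v i / complex_of_real (sqrt (sqnorm d v))) =
      mat d d (\<lambda>(i,j). vec d (\<lambda>i. v i / complex_of_real (sqrt (sqnorm d v))) $ i *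
        cnj (vec d (\<lambda>i. v i / complex_of_real (sqrt (sqnorm d v))) $ j))"
    unfolding outer_mat_def by (rule eq_matI) auto
qed simp

section \<open>Linear maps on matrices\<close>

lemma linear_mapD:
  assumes "linear_map d1 d2 \<Phi>"
  shows "\<And>X. X \<in> carrier_mat d1 d1 \<Longrightarrow> \<Phi> X \<in> carrier_mat d2 d2"
    "\<And>X Y. X \<in> carrier_mat d1 d1 \<Longrightarrow> Y \<in> carrier_mat d1 d1 \<Longrightarrow> \<Phi> (X + Y) = \<Phi> X + \<Phi> Y"
    "\<And>X c. X \<in> carrier_mat d1 d1 \<Longrightarrow> \<Phi> (c \<cdot>\<^sub>m X) = c \<cdot>\<^sub>m \<Phi> X"
  using assms unfolding linear_map_def by auto

lemma linear_map_sum: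
  assumes lin: "linear_map d1 d2 \<Phi>" and fin: "finite I" and F: "\<And>k. k \<in> I \<Longrightarrow> F k \<in> carrier_mat d1 d1"
  shows "\<Phi> (mat d1 d1 (\<lambda>pq. \<Sum>k\<in>I. c k * F k $$ pq)) = mat d2 d2 (\<lambda>st. \<Sum>k\<in>I. c k * \<Phi> (F k) $$ st)"
  using fin F
proof (induction I rule: finite_induct)
  case empty
  have z: "mat d1 d1 (\<lambda>pq. \<Sum>k\<in>{}. c k * F k $$ pq) = 0 \<cdot>\<^sub>m (0\<^sub>m d1 d1)"
    by (rule eq_matI) auto
  have "\<Phi> (0 \<cdot>\<^sub>m (0\<^sub>m d1 d1)) = 0 \<cdot>\<^sub>m \<Phi> (0\<^sub>m d1 d1)" by (rule linear_mapD(3)[OF lin]) simp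
  also have "\<dots> = mat d2 d2 (\<lambda>st. \<Sum>k\<in>{}. c k * \<Phi> (F k) $$ st)"
    using linear_mapD(1)[OF lin, of "0\<^sub>m d1 d1"] by (intro eq_matI) auto
  finally show ?case unfolding z .
next
  case (insert k I)
  have Fk: "F k \<in> carrier_mat d1 d1" using insert by simp
  have s: "mat d1 d1 (\<lambda>pq. \<Sum>k\<in>insert k I. c k * F k $$ pq) =
     c k \<cdot>\<^sub>m F k + mat d1 d1 (\<lambda>pq. \<Sum>k\<in>I. c k * F k $$ pq)"
  proof (rule eq_matI)
    fix i j assume "i < dim_row (c k \<cdot>\<^sub>m F k + mat d1 d1 (\<lambda>pq. \<Sum>k\<in>I. c k * F k $$ pq))"
      "j < dim_col (c k \<cdot>\<^sub>m F k + mat d1 d1 (\<lambda>pq. \<Sum>k\<in>I. c k * F k $$ pq))"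
    then have i: "i < d1" and j: "j < d1" by auto
    have dF: "dim_row (F k) = d1" "dim_col (F k) = d1" using Fk by auto
    show "mat d1 d1 (\<lambda>pq. \<Sum>k\<in>insert k I. c k * F k $$ pq) $$ (i,j) =
      (c k \<cdot>\<^sub>m F k + mat d1 d1 (\<lambda>pq. \<Sum>k\<in>I. c k * F k $$ pq)) $$ (i,j)"
      using i j dF insert by simp
  qed auto
  have "\<Phi> (c k \<cdot>\<^sub>m F k + mat d1 d1 (\<lambda>pq. \<Sum>k\<in>I. c k * F k $$ pq)) =
     c k \<cdot>\<^sub>m \<Phi> (F k) + mat d2 d2 (\<lambda>st. \<Sum>k\<in>I. c k * \<Phi> (F k) $$ st)"
    using linear_mapD(2,3)[OF lin] insert Fk by simp
  also have "\<dots> = mat d2 d2 (\<lambda>st. \<Sum>k\<in>insert k I. c k * \<Phi> (F k) $$ st)"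
    by (rule eq_matI) (use insert linear_mapD(1)[OF lin Fk] in auto)
  finally show ?case unfolding s .
qed

lemma linear_map_expand:
  assumes lin: "linear_map d1 d2 \<Phi>" and X: "X \<in> carrier_mat d1 d1"
  shows "\<Phi> X = mat d2 d2 (\<lambda>(s,t). \<Sum>i<d1. \<Sum>j<d1. X $$ (i,j) * \<Phi> (mat_unit d1 i j) $$ (s,t))"
proof -
  have Xe: "X = mat d1 d1 (\<lambda>pq. \<Sum>k\<in>{..<d1} \<times> {..<d1}. X $$ (fst k, snd k) * mat_unit d1 (fst k) (snd k) $$ pq)"
    by (rule eq_matI) (use X in \<open>auto simp: mat_unit_def sum_pairs_delta\<close>)
  have "\<Phi> X = mat d2 d2 (\<lambda>st. \<Sum>k\<in>{..<d1} \<times> {..<d1}. X $$ (fst k, snd k) * \<Phi> (mat_unit d1 (fst k) (snd k)) $$ st)"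
    by (subst Xe, rule linear_map_sum[OF lin]) auto
  also have "\<dots> = mat d2 d2 (\<lambda>(s,t). \<Sum>i<d1. \<Sum>j<d1. X $$ (i,j) * \<Phi> (mat_unit d1 i j) $$ (s,t))"
    by (rule eq_matI) (auto simp: sum.cartesian_product split_def)
  finally show ?thesis .
qed

lemma index_linear_map:
  assumes lin: "linear_map d1 d2 \<Phi>" and X: "X \<in> carrier_mat d1 d1" and s: "s < d2" and t: "t < d2"
  shows "\<Phi> X $$ (s,t) = (\<Sum>i<d1. \<Sum>j<d1. X $$ (i,j) * \<Phi> (mat_unit d1 i j) $$ (s,t))"
  using linear_map_expand[OF lin X] s t by (metis (no_types, lifting) case_prod_conv index_mat(1))

lemma psd_rank1_bounded:
  assumes p: "psd n A"
  shows "rank1_bounded n A (Re (mtrace A))"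
proof -
  have A: "A \<in> carrier_mat n n" using p unfolding psd_iff_quad_form by simp
  obtain vs where vs: "\<And>i j. i < n \<Longrightarrow> j < n \<Longrightarrow> A $$ (i,j) = (\<Sum>k<n. vs k i * cnj (vs k j))"
    using psd_gram[OF p] by blast
  define L where "L = map (\<lambda>k. (1::real, vs k)) [0..<n]"
  have AL: "A $$ (i,j) = rank1_sum L i j" if "i < n" "j < n" for i j
    unfolding vs[OF that] rank1_sum_def L_def by (simp add: o_def sum_list_upt_lessThan)
  have "complex_of_real (rank1_weight n L) = (\<Sum>k<n. \<Sum>i<n. vs k i * cnj (vs k i))"
    unfolding rank1_weight_def L_def by (simp add: o_def sum_list_upt_lessThan of_real_sqnorm)
  also have "\<dots> = (\<Sum>i<n. \<Sum>k<n. vs k i * cnj (vs k i))" by (rule sum.swap)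
  also have "\<dots> = mtrace A" unfolding mtrace_def using A vs by simp
  finally have "rank1_weight n L = Re (mtrace A)" by (metis Re_complex_of_real)
  then show ?thesis unfolding rank1_bounded_def using A AL by auto
qed

lemma index_linear_map_rank1_sum:
  assumes lin: "linear_map d1 d2 \<Phi>" and Y: "Y \<in> carrier_mat d1 d1"
    and YL: "\<And>i j. i < d1 \<Longrightarrow> j < d1 \<Longrightarrow> Y $$ (i,j) = rank1_sum L i j" and st: "s < d2" "t < d2"
  shows "\<Phi> Y $$ (s,t) = (\<Sum>p\<leftarrow>L. complex_of_real (fst p) * \<Phi> (outer_mat d1 (snd p)) $$ (s,t))"
proof -
  have "\<Phi> Y $$ (s,t) = (\<Sum>i<d1. \<Sum>j<d1. Y $$ (i,j) * \<Phi> (mat_unit d1 i j) $$ (s,t))"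
    by (rule index_linear_map[OF lin Y st])
  also have "\<dots> = (\<Sum>i<d1. \<Sum>j<d1. \<Sum>p\<leftarrow>L. complex_of_real (fst p) * (snd p i * cnj (snd p j) * \<Phi> (mat_unit d1 i j) $$ (s,t)))"
    by (intro sum.cong refl) (simp add: YL rank1_sum_def algebra_simps flip: sum_list_const_mult)
  also have "\<dots> = (\<Sum>p\<leftarrow>L. complex_of_real (fst p) * (\<Sum>i<d1. \<Sum>j<d1. snd p i * cnj (snd p j) * \<Phi> (mat_unit d1 i j) $$ (s,t)))"
    by (simp add: sum_sum_list_swap sum_distrib_left)
  also have "\<dots> = (\<Sum>p\<leftarrow>L. complex_of_real (fst p) * \<Phi> (outer_mat d1 (snd p)) $$ (s,t))"
    by (rule arg_cong[where f = sum_list], rule map_cong[OF refl])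
       (simp add: index_linear_map[OF lin outer_mat_carrier st])
  finally show ?thesis .
qed

lemma linear_map_rank1_bounded:
  assumes lin: "linear_map d1 d2 \<Phi>" and dY: "rank1_bounded d1 Y s"
    and img: "\<And>v. rank1_bounded d2 (\<Phi> (outer_mat d1 v)) (sqnorm d1 v)"
  shows "rank1_bounded d2 (\<Phi> Y) s"
proof -
  obtain L where Y: "Y \<in> carrier_mat d1 d1" and YL: "\<And>i j. i < d1 \<Longrightarrow> j < d1 \<Longrightarrow> Y $$ (i,j) = rank1_sum L i j"
    and w: "rank1_weight d1 L \<le> s" using dY unfolding rank1_bounded_def by blast
  have "\<forall>v. \<exists>L'. (\<forall>i<d2. \<forall>j<d2. \<Phi> (outer_mat d1 v) $$ (i,j) = rank1_sum L' i j) \<and> rank1_weight d2 L' \<le> sqnorm d1 v"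
    using img unfolding rank1_bounded_def by blast
  then obtain G where G1: "\<And>v i j. i < d2 \<Longrightarrow> j < d2 \<Longrightarrow> \<Phi> (outer_mat d1 v) $$ (i,j) = rank1_sum (G v) i j"
    and G2: "\<And>v. rank1_weight d2 (G v) \<le> sqnorm d1 v" by metis
  define L' where "L' = concat (map (\<lambda>p. map (\<lambda>q. (fst p * fst q, snd q)) (G (snd p))) L)"
  have "\<Phi> Y $$ (s',t) = rank1_sum L' s' t" if st: "s' < d2" "t < d2" for s' t
  proof -
    have "\<Phi> Y $$ (s',t) = (\<Sum>p\<leftarrow>L. complex_of_real (fst p) * \<Phi> (outer_mat d1 (snd p)) $$ (s',t))"
      by (rule index_linear_map_rank1_sum[OF lin Y YL st])
    also have "\<dots> = rank1_sum L' s' t"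
      unfolding L'_def rank1_sum_def sum_list_concat_map
      by (rule arg_cong[where f = sum_list], rule map_cong[OF refl])
         (simp add: G1[OF st] rank1_sum_def o_def sum_list_const_mult[symmetric] algebra_simps)
    finally show ?thesis .
  qed
  moreover have "rank1_weight d2 L' = (\<Sum>p\<leftarrow>L. \<bar>fst p\<bar> * rank1_weight d2 (G (snd p)))"
    unfolding L'_def rank1_weight_def sum_list_concat_map
    by (rule arg_cong[where f = sum_list], rule map_cong[OF refl])
       (simp add: o_def sum_list_const_mult[symmetric] abs_mult algebra_simps)
  moreover have "\<dots> \<le> (\<Sum>p\<leftarrow>L. \<bar>fst p\<bar> * sqnorm d1 (snd p))"
    by (rule sum_list_mono) (simp add: G2 mult_left_mono)
  ultimately show ?thesis
    unfolding rank1_bounded_def using linear_mapD(1)[OF lin Y] w unfolding rank1_weight_def by auto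
qed

lemma linear_map_psd_of_outer:
  assumes lin: "linear_map d1 d2 \<Psi>" and po: "\<And>x. psd d2 (\<Psi> (outer_mat d1 x))" and X: "psd d1 X"
  shows "psd d2 (\<Psi> X)"
proof -
  obtain vs where vs: "\<And>i j. i < d1 \<Longrightarrow> j < d1 \<Longrightarrow> X $$ (i,j) = (\<Sum>k<d1. vs k i * cnj (vs k j))"
    using psd_gram[OF X] by blast
  have Xc: "X \<in> carrier_mat d1 d1" using X unfolding psd_iff_quad_form by simp
  have Xe: "X = mat d1 d1 (\<lambda>pq. \<Sum>k<d1. 1 * outer_mat d1 (vs k) $$ pq)"
    by (rule eq_matI) (use Xc vs in auto)
  have "\<Psi> X = mat d2 d2 (\<lambda>st. \<Sum>k<d1. 1 * \<Psi> (outer_mat d1 (vs k)) $$ st)"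
    by (subst Xe, rule linear_map_sum[OF lin]) auto
  also have "psd d2 \<dots>" using psd_sum_mat[of "{..<d1}" d2 "\<lambda>k. \<Psi> (outer_mat d1 (vs k))"] po by simp
  finally show ?thesis .
qed

lemma lift_left_1:
  assumes X: "X \<in> carrier_mat d1 d1" and PX: "\<Phi> X \<in> carrier_mat d2 d2"
  shows "lift_left 1 d1 d2 \<Phi> X = \<Phi> X"
proof -
  have m: "mat d1 d1 (\<lambda>(i,j). X $$ (i,j)) = X" by (rule eq_matI) (use X in auto)
  show ?thesis unfolding lift_left_def by (rule eq_matI) (use PX m in auto)
qed

lemma completely_positive_psd:
  assumes cp: "completely_positive d1 d2 \<Phi>" and X: "psd d1 X" and PX: "\<Phi> X \<in> carrier_mat d2 d2"
  shows "psd d2 (\<Phi> X)"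
proof -
  have Xc: "X \<in> carrier_mat d1 d1" using X unfolding psd_iff_quad_form by simp
  have "psd (1*d1) X \<longrightarrow> psd (1*d2) (lift_left 1 d1 d2 \<Phi> X)" using cp unfolding completely_positive_def by blast
  then have "psd (1*d2) (lift_left 1 d1 d2 \<Phi> X)" using X by (simp only: mult_1)
  moreover have "lift_left 1 d1 d2 \<Phi> X = \<Phi> X" by (rule lift_left_1[of X d1 \<Phi> d2, OF Xc PX])
  ultimately show ?thesis by (simp only: mult_1)
qed

lemma linear_map_smult_diff:
  assumes lin: "linear_map d1 d2 \<Phi>" and X: "X \<in> carrier_mat d1 d1" and Y: "Y \<in> carrier_mat d1 d1"
  shows "\<Phi> (c \<cdot>\<^sub>m X - Y) = c \<cdot>\<^sub>m \<Phi> X - \<Phi> Y"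
proof -
  have e: "c \<cdot>\<^sub>m X - Y = c \<cdot>\<^sub>m X + (-1) \<cdot>\<^sub>m Y" by (rule eq_matI) (use X Y in simp_all)
  have PX: "\<Phi> X \<in> carrier_mat d2 d2" and PY: "\<Phi> Y \<in> carrier_mat d2 d2" using linear_mapD(1)[OF lin] X Y by auto
  have "\<Phi> (c \<cdot>\<^sub>m X - Y) = c \<cdot>\<^sub>m \<Phi> X + (-1) \<cdot>\<^sub>m \<Phi> Y"
    unfolding e using linear_mapD(2,3)[OF lin] X Y by simp
  also have "\<dots> = c \<cdot>\<^sub>m \<Phi> X - \<Phi> Y" by (rule eq_matI) (use PX PY in simp_all)
  finally show ?thesis .
qed

lemma linear_map_smult_diff_map:
  assumes M: "linear_map d1 d2 M" and N: "linear_map d1 d2 N"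
  shows "linear_map d1 d2 (\<lambda>Y. c \<cdot>\<^sub>m M Y - N Y)"
  unfolding linear_map_def
proof (intro conjI ballI allI)
  fix X :: "complex mat" assume X: "X \<in> carrier_mat d1 d1"
  show "c \<cdot>\<^sub>m M X - N X \<in> carrier_mat d2 d2" using linear_mapD(1)[OF N X] linear_mapD(1)[OF M X] by (intro carrier_matI) auto
next
  fix X Y :: "complex mat" assume X: "X \<in> carrier_mat d1 d1" and Y: "Y \<in> carrier_mat d1 d1"
  show "c \<cdot>\<^sub>m M (X + Y) - N (X + Y) = c \<cdot>\<^sub>m M X - N X + (c \<cdot>\<^sub>m M Y - N Y)"
    unfolding linear_mapD(2)[OF M X Y] linear_mapD(2)[OF N X Y]
    by (rule eq_matI) (use linear_mapD(1)[OF M X] linear_mapD(1)[OF M Y] linear_mapD(1)[OF N X] linear_mapD(1)[OF N Y] in \<open>simp_all add: algebra_simps\<close>)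
next
  fix X :: "complex mat" and e :: complex assume X: "X \<in> carrier_mat d1 d1"
  show "c \<cdot>\<^sub>m M (e \<cdot>\<^sub>m X) - N (e \<cdot>\<^sub>m X) = e \<cdot>\<^sub>m (c \<cdot>\<^sub>m M X - N X)"
    unfolding linear_mapD(3)[OF M X] linear_mapD(3)[OF N X]
    by (rule eq_matI) (use linear_mapD(1)[OF M X] linear_mapD(1)[OF N X] in \<open>simp_all add: algebra_simps\<close>)
qed

section \<open>Embedding a map as id \<otimes> \<Phi> \<otimes> id\<close>

definition embed_map :: "nat \<Rightarrow> nat \<Rightarrow> nat \<Rightarrow> nat \<Rightarrow> (complex mat \<Rightarrow> complex mat) \<Rightarrow> complex mat \<Rightarrow> complex mat" where
  "embed_map la lb d1 d2 \<Phi> = lift_left la (d1*lb) (d2*lb) (lift_right d1 d2 lb \<Phi>)"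

lemma embed_channel_eq: "embed_channel la lb a1 b1 a2 b2 N = embed_map la lb (a1*b1) (a2*b2) N"
  unfolding embed_channel_def embed_map_def ..

definition left_index :: "nat \<Rightarrow> nat \<Rightarrow> nat \<Rightarrow> nat" where "left_index d2 lb p = p div (d2*lb)"
definition mid_index :: "nat \<Rightarrow> nat \<Rightarrow> nat \<Rightarrow> nat" where "mid_index d2 lb p = (p mod (d2*lb)) div lb"
definition right_index :: "nat \<Rightarrow> nat \<Rightarrow> nat" where "right_index lb p = p mod lb"
definition triple_index :: "nat \<Rightarrow> nat \<Rightarrow> nat \<Rightarrow> nat \<Rightarrow> nat \<Rightarrow> nat" where "triple_index d1 lb r i t = r*(d1*lb) + (i*lb + t)"

lemma embed_map_carrier[simp]: "embed_map la lb d1 d2 \<Phi> X \<in> carrier_mat (la*(d2*lb)) (la*(d2*lb))"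
  unfolding embed_map_def lift_left_def by simp

lemma embed_map_dims[simp]: "dim_row (embed_map la lb d1 d2 \<Phi> X) = la*(d2*lb)" "dim_col (embed_map la lb d1 d2 \<Phi> X) = la*(d2*lb)"
  unfolding embed_map_def lift_left_def by simp_all

definition embed_block :: "nat \<Rightarrow> nat \<Rightarrow> nat \<Rightarrow> complex mat \<Rightarrow> nat \<Rightarrow> nat \<Rightarrow> complex mat" where
  "embed_block d1 d2 lb X p q = mat d1 d1 (\<lambda>(i,j). X $$ (triple_index d1 lb (left_index d2 lb p) i (right_index lb p), triple_index d1 lb (left_index d2 lb q) j (right_index lb q)))"

lemma embed_block_carrier[simp]: "embed_block d1 d2 lb X p q \<in> carrier_mat d1 d1" unfolding embed_block_def by simp

lemma index_embed_map:
  assumes p: "p < la*(d2*lb)" and q: "q < la*(d2*lb)"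
  shows "embed_map la lb d1 d2 \<Phi> X $$ (p,q) = \<Phi> (embed_block d1 d2 lb X p q) $$ (mid_index d2 lb p, mid_index d2 lb q)"
proof -
  have pos: "0 < d2*lb" using p by (cases "d2*lb = 0") auto
  then have lbpos: "0 < lb" by simp
  have pm: "p mod (d2*lb) < d2*lb" "q mod (d2*lb) < d2*lb" using pos by simp_all
  have mm: "(p mod (d2*lb)) mod lb = p mod lb" "(q mod (d2*lb)) mod lb = q mod lb"
    by (simp_all add: mod_mod_cancel)
  have inner: "mat d1 d1 (\<lambda>(i,j). mat (d1*lb) (d1*lb) (\<lambda>(i',j'). X $$ (p div (d2*lb) * (d1*lb) + i', q div (d2*lb) * (d1*lb) + j'))
        $$ (i * lb + p mod (d2*lb) mod lb, j * lb + q mod (d2*lb) mod lb)) = embed_block d1 d2 lb X p q"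
  proof (rule eq_matI)
    fix i j assume "i < dim_row (embed_block d1 d2 lb X p q)" "j < dim_col (embed_block d1 d2 lb X p q)"
    then have i: "i < d1" and j: "j < d1" unfolding embed_block_def by simp_all
    have b: "i * lb + p mod lb < d1*lb" "j * lb + q mod lb < d1*lb"
      using mult_add_less[OF i, of "p mod lb" lb] mult_add_less[OF j, of "q mod lb" lb] lbpos by simp_all
    show "mat d1 d1 (\<lambda>(i,j). mat (d1*lb) (d1*lb) (\<lambda>(i',j'). X $$ (p div (d2*lb) * (d1*lb) + i', q div (d2*lb) * (d1*lb) + j'))
        $$ (i * lb + p mod (d2*lb) mod lb, j * lb + q mod (d2*lb) mod lb)) $$ (i,j) = embed_block d1 d2 lb X p q $$ (i,j)"
      unfolding mm using i j b by (simp add: embed_block_def triple_index_def left_index_def right_index_def)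
  qed (simp_all add: embed_block_def)
  show ?thesis
    unfolding embed_map_def lift_left_def using p q pm
    by (simp add: lift_right_def inner mid_index_def)
qed

lemma index_embed_map_linear:
  assumes lin: "linear_map d1 d2 \<Phi>" and p: "p < la*(d2*lb)" and q: "q < la*(d2*lb)"
  shows "embed_map la lb d1 d2 \<Phi> X $$ (p,q) = (\<Sum>i<d1. \<Sum>j<d1.
     X $$ (triple_index d1 lb (left_index d2 lb p) i (right_index lb p), triple_index d1 lb (left_index d2 lb q) j (right_index lb q)) * \<Phi> (mat_unit d1 i j) $$ (mid_index d2 lb p, mid_index d2 lb q))"
proof -
  have pos: "0 < d2*lb" using p by (cases "d2*lb = 0") auto
  have s: "mid_index d2 lb p < d2" "mid_index d2 lb q < d2" unfolding mid_index_def using pos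
    by (simp_all add: less_mult_imp_div_less)
  show ?thesis unfolding index_embed_map[OF p q] index_linear_map[OF lin embed_block_carrier s]
    by (intro sum.cong refl) (simp add: embed_block_def)
qed

definition sesq_form :: "nat \<Rightarrow> complex mat \<Rightarrow> (nat \<Rightarrow> complex) \<Rightarrow> (nat \<Rightarrow> complex) \<Rightarrow> complex" where
  "sesq_form d C u v = (\<Sum>a<d. \<Sum>b<d. cnj (u a) * C $$ (a,b) * v b)"

lemma quad_form_sum:
  "quad_form d C (\<lambda>a. \<Sum>q\<in>Q. y q a) = (\<Sum>p\<in>Q. \<Sum>q\<in>Q. sesq_form d C (y p) (y q))"
proof -
  have "quad_form d C (\<lambda>a. \<Sum>q\<in>Q. y q a) = (\<Sum>a<d. \<Sum>b<d. \<Sum>p\<in>Q. \<Sum>q\<in>Q. cnj (y p a) * C $$ (a,b) * y q b)"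
  proof -
    have pw: "cnj (\<Sum>p\<in>Q. y p a) * C $$ (a,b) * (\<Sum>q\<in>Q. y q b) = (\<Sum>p\<in>Q. \<Sum>q\<in>Q. cnj (y p a) * C $$ (a,b) * y q b)" for a b
    proof -
      have "cnj (\<Sum>p\<in>Q. y p a) * C $$ (a,b) = (\<Sum>p\<in>Q. cnj (y p a) * C $$ (a,b))"
        by (simp add: cnj_sum sum_distrib_right)
      then show ?thesis by (simp add: sum_product)
    qed
    show ?thesis unfolding quad_form_def pw ..
  qed
  also have "\<dots> = (\<Sum>p\<in>Q. \<Sum>q\<in>Q. sesq_form d C (y p) (y q))" unfolding sesq_form_def by (rule sum_swap4)
  finally show ?thesis .
qed

lemma sesq_form_collapse:
  fixes d1 d2 :: nat
  assumes a: "a < d2" and b: "b < d2"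
  shows "sesq_form (d1*d2) C (\<lambda>\<alpha>. if \<alpha> mod d2 = a then f (\<alpha> div d2) else 0) (\<lambda>\<beta>. if \<beta> mod d2 = b then h (\<beta> div d2) else 0)
    = (\<Sum>i<d1. \<Sum>j<d1. cnj (f i) * C $$ (i*d2+a, j*d2+b) * h j)"
proof -
  have inner: "(\<Sum>\<beta><d1*d2. cnj (if \<alpha> mod d2 = a then f (\<alpha> div d2) else 0) * C $$ (\<alpha>,\<beta>) *
       (if \<beta> mod d2 = b then h (\<beta> div d2) else 0)) =
     (if \<alpha> mod d2 = a then (\<Sum>j<d1. cnj (f (\<alpha> div d2)) * C $$ (\<alpha>, j*d2+b) * h j) else 0)" for \<alpha>
  proof -
    have "(\<Sum>\<beta><d1*d2. cnj (if \<alpha> mod d2 = a then f (\<alpha> div d2) else 0) * C $$ (\<alpha>,\<beta>) *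
       (if \<beta> mod d2 = b then h (\<beta> div d2) else 0)) =
       (\<Sum>\<beta><d1*d2. (if \<beta> mod d2 = b then (\<lambda>j \<beta>. cnj (if \<alpha> mod d2 = a then f (\<alpha> div d2) else 0) * C $$ (\<alpha>,\<beta>) * h j) (\<beta> div d2) \<beta> else 0))"
      by (intro sum.cong refl) simp
    also have "\<dots> = (\<Sum>j<d1. cnj (if \<alpha> mod d2 = a then f (\<alpha> div d2) else 0) * C $$ (\<alpha>, j*d2+b) * h j)"
      by (rule sum_mod_eq_collapse[OF b])
    finally show ?thesis by simp
  qed
  have "sesq_form (d1*d2) C (\<lambda>\<alpha>. if \<alpha> mod d2 = a then f (\<alpha> div d2) else 0) (\<lambda>\<beta>. if \<beta> mod d2 = b then h (\<beta> div d2) else 0)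
    = (\<Sum>\<alpha><d1*d2. (if \<alpha> mod d2 = a then (\<lambda>i \<alpha>. \<Sum>j<d1. cnj (f i) * C $$ (\<alpha>, j*d2+b) * h j) (\<alpha> div d2) \<alpha> else 0))"
    unfolding sesq_form_def inner by simp
  also have "\<dots> = (\<Sum>i<d1. \<Sum>j<d1. cnj (f i) * C $$ (i*d2+a, j*d2+b) * h j)"
    by (rule sum_mod_eq_collapse[OF a])
  finally show ?thesis .
qed

definition choi_mat :: "nat \<Rightarrow> nat \<Rightarrow> (complex mat \<Rightarrow> complex mat) \<Rightarrow> complex mat" where
  "choi_mat d1 d2 \<Phi> = mat (d1*d2) (d1*d2) (\<lambda>(\<alpha>,\<beta>). \<Phi> (mat_unit d1 (\<alpha> div d2) (\<beta> div d2)) $$ (\<alpha> mod d2, \<beta> mod d2))"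

lemma index_choi_mat:
  assumes "i < d1" "j < d1" "a < d2" "b < d2"
  shows "choi_mat d1 d2 \<Phi> $$ (i*d2+a, j*d2+b) = \<Phi> (mat_unit d1 i j) $$ (a,b)"
  unfolding choi_mat_def using assms mult_add_less[of i d1 a d2] mult_add_less[of j d1 b d2] by simp

lemma pos_of_less_triple: "p < la*(d2*lb) \<Longrightarrow> 0 < la \<and> 0 < d2 \<and> 0 < (lb::nat)"
  by (cases "la = 0"; cases "d2 = 0"; cases "lb = 0") auto

lemma left_index_less: "p < la*(d2*lb) \<Longrightarrow> left_index d2 lb p < la"
  unfolding left_index_def by (simp add: less_mult_imp_div_less mult.commute)

lemma mid_index_less: "p < la*(d2*lb) \<Longrightarrow> mid_index d2 lb p < d2"
  unfolding mid_index_def using pos_of_less_triple[of p la d2 lb]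
  by (simp add: less_mult_imp_div_less)

lemma right_index_less: "p < la*(d2*lb) \<Longrightarrow> right_index lb p < lb"
  unfolding right_index_def using pos_of_less_triple[of p la d2 lb] by simp

lemma triple_index_less: "r < la \<Longrightarrow> i < d1 \<Longrightarrow> t < lb \<Longrightarrow> triple_index d1 lb r i t < la*(d1*lb)"
  unfolding triple_index_def using mult_add_less[of r la "i*lb+t" "d1*lb"] mult_add_less[of i d1 t lb] by simp

lemma linear_map_embed_map:
  assumes lin: "linear_map d1 d2 \<Phi>"
  shows "linear_map (la*(d1*lb)) (la*(d2*lb)) (embed_map la lb d1 d2 \<Phi>)"
  unfolding linear_map_def
proof (intro conjI ballI allI)
  fix X Y :: "complex mat" assume X: "X \<in> carrier_mat (la*(d1*lb)) (la*(d1*lb))" and Y: "Y \<in> carrier_mat (la*(d1*lb)) (la*(d1*lb))"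
  show "embed_map la lb d1 d2 \<Phi> (X + Y) = embed_map la lb d1 d2 \<Phi> X + embed_map la lb d1 d2 \<Phi> Y"
  proof (rule eq_matI)
    fix p q assume "p < dim_row (embed_map la lb d1 d2 \<Phi> X + embed_map la lb d1 d2 \<Phi> Y)"
      "q < dim_col (embed_map la lb d1 d2 \<Phi> X + embed_map la lb d1 d2 \<Phi> Y)"
    then have p: "p < la*(d2*lb)" and q: "q < la*(d2*lb)" by simp_all
    have b: "triple_index d1 lb (left_index d2 lb p) i (right_index lb p) < la*(d1*lb)" "triple_index d1 lb (left_index d2 lb q) j (right_index lb q) < la*(d1*lb)"
      if "i < d1" "j < d1" for i j
      using triple_index_less[OF left_index_less[OF p] that(1) right_index_less[OF p]] triple_index_less[OF left_index_less[OF q] that(2) right_index_less[OF q]] by simp_all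
    show "embed_map la lb d1 d2 \<Phi> (X + Y) $$ (p,q) = (embed_map la lb d1 d2 \<Phi> X + embed_map la lb d1 d2 \<Phi> Y) $$ (p,q)"
      unfolding index_add_mat(1)[OF p[folded embed_map_dims(1)[of la lb d1 d2 \<Phi> Y]] q[folded embed_map_dims(2)[of la lb d1 d2 \<Phi> Y]]]
        index_embed_map_linear[OF lin p q]
      using X Y b by (simp add: sum.distrib[symmetric] algebra_simps)
  qed simp_all
next
  fix X :: "complex mat" and c :: complex assume X: "X \<in> carrier_mat (la*(d1*lb)) (la*(d1*lb))"
  show "embed_map la lb d1 d2 \<Phi> (c \<cdot>\<^sub>m X) = c \<cdot>\<^sub>m embed_map la lb d1 d2 \<Phi> X"
  proof (rule eq_matI)
    fix p q assume "p < dim_row (c \<cdot>\<^sub>m embed_map la lb d1 d2 \<Phi> X)" "q < dim_col (c \<cdot>\<^sub>m embed_map la lb d1 d2 \<Phi> X)"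
    then have p: "p < la*(d2*lb)" and q: "q < la*(d2*lb)" by simp_all
    have b: "triple_index d1 lb (left_index d2 lb p) i (right_index lb p) < la*(d1*lb)" "triple_index d1 lb (left_index d2 lb q) j (right_index lb q) < la*(d1*lb)"
      if "i < d1" "j < d1" for i j
      using triple_index_less[OF left_index_less[OF p] that(1) right_index_less[OF p]] triple_index_less[OF left_index_less[OF q] that(2) right_index_less[OF q]] by simp_all
    show "embed_map la lb d1 d2 \<Phi> (c \<cdot>\<^sub>m X) $$ (p,q) = (c \<cdot>\<^sub>m embed_map la lb d1 d2 \<Phi> X) $$ (p,q)"
      unfolding index_smult_mat(1)[OF p[folded embed_map_dims(1)[of la lb d1 d2 \<Phi> X]] q[folded embed_map_dims(2)[of la lb d1 d2 \<Phi> X]]]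
        index_embed_map_linear[OF lin p q]
      using X b by (simp add: sum_distrib_left algebra_simps)
  qed simp_all
qed simp

lemma psd_sesq_congruence:
  assumes C: "psd D C" and T: "T \<in> carrier_mat N N"
    and T_eq: "\<And>p q. p < N \<Longrightarrow> q < N \<Longrightarrow> T $$ (p,q) = sesq_form D C (y p) (y q)"
  shows "psd N T"
  unfolding psd_iff_quad_form
proof (intro conjI allI T)
  fix g :: "nat \<Rightarrow> complex"
  have "quad_form N T g = (\<Sum>p<N. \<Sum>q<N. sesq_form D C (\<lambda>a. g p * y p a) (\<lambda>a. g q * y q a))"
    unfolding quad_form_def
    by (intro sum.cong refl) (simp add: T_eq sesq_form_def sum_distrib_left sum_distrib_right algebra_simps)
  also have "\<dots> = quad_form D C (\<lambda>a. \<Sum>q<N. g q * y q a)" by (rule quad_form_sum[symmetric])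
  finally show "0 \<le> quad_form N T g" using C unfolding psd_iff_quad_form by simp
qed

lemma triple_index_decode:
  assumes r: "r < la" and s: "s < d2" and t: "t < lb"
  shows "left_index d2 lb (r*(d2*lb) + (s*lb + t)) = r" "mid_index d2 lb (r*(d2*lb) + (s*lb + t)) = s"
    "right_index lb (r*(d2*lb) + (s*lb + t)) = t"
proof -
  have st: "s*lb + t < d2*lb" by (rule mult_add_less[OF s t])
  show "left_index d2 lb (r*(d2*lb) + (s*lb + t)) = r" unfolding left_index_def using st by simp
  show "mid_index d2 lb (r*(d2*lb) + (s*lb + t)) = s" unfolding mid_index_def using st t by simp
  have e: "r*(d2*lb) + (s*lb + t) = (r*d2 + s)*lb + t" by (simp add: algebra_simps)
  show "right_index lb (r*(d2*lb) + (s*lb + t)) = t" unfolding right_index_def e using t by simp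
qed

lemma sqnorm_triple:
  "sqnorm (la*(d*lb)) y = (\<Sum>r<la. \<Sum>s<d. \<Sum>t<lb. (cmod (y (r*(d*lb) + (s*lb + t))))\<^sup>2)"
  unfolding sqnorm_def by (simp add: sum_lessThan_mult)

lemma embed_map_smult_diff:
  assumes M: "\<And>X. X \<in> carrier_mat d1 d1 \<Longrightarrow> M X \<in> carrier_mat d2 d2"
    and N: "\<And>X. X \<in> carrier_mat d1 d1 \<Longrightarrow> N X \<in> carrier_mat d2 d2"
  shows "embed_map la lb d1 d2 (\<lambda>Y. c \<cdot>\<^sub>m M Y - N Y) X = c \<cdot>\<^sub>m embed_map la lb d1 d2 M X - embed_map la lb d1 d2 N X"
proof (rule eq_matI)
  fix p q assume "p < dim_row (c \<cdot>\<^sub>m embed_map la lb d1 d2 M X - embed_map la lb d1 d2 N X)"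
    "q < dim_col (c \<cdot>\<^sub>m embed_map la lb d1 d2 M X - embed_map la lb d1 d2 N X)"
  then have p: "p < la*(d2*lb)" and q: "q < la*(d2*lb)" by simp_all
  have s: "mid_index d2 lb p < d2" "mid_index d2 lb q < d2" using mid_index_less p q by auto
  show "embed_map la lb d1 d2 (\<lambda>Y. c \<cdot>\<^sub>m M Y - N Y) X $$ (p,q) = (c \<cdot>\<^sub>m embed_map la lb d1 d2 M X - embed_map la lb d1 d2 N X) $$ (p,q)"
  proof -
    have "M (embed_block d1 d2 lb X p q) \<in> carrier_mat d2 d2" "N (embed_block d1 d2 lb X p q) \<in> carrier_mat d2 d2"
      using M[OF embed_block_carrier] N[OF embed_block_carrier] by auto
    then have dm: "dim_row (M (embed_block d1 d2 lb X p q)) = d2" "dim_col (M (embed_block d1 d2 lb X p q)) = d2"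
      "dim_row (N (embed_block d1 d2 lb X p q)) = d2" "dim_col (N (embed_block d1 d2 lb X p q)) = d2" by auto
    show ?thesis unfolding index_embed_map[OF p q] using p q s dm by (simp add: index_embed_map[OF p q])
  qed
qed simp_all

section \<open>Schmidt factorisation and the embedded map on rank-one inputs\<close>

lemma sum_orthonormal_rows:
  fixes n :: nat
  assumes U1: "\<And>i j. i < n \<Longrightarrow> j < n \<Longrightarrow> (\<Sum>m<n. U i m * cnj (U j m)) = (if i = j then 1 else 0)"
  shows "(\<Sum>m<n. (\<Sum>i<n. y i * U i m) * cnj (\<Sum>j<n. y j * U j m)) = (\<Sum>i<n. y i * cnj (y i))"
proof -
  have "(\<Sum>m<n. (\<Sum>i<n. y i * U i m) * cnj (\<Sum>j<n. y j * U j m)) =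
        (\<Sum>i<n. \<Sum>j<n. \<Sum>m<n. y i * U i m * cnj (y j * U j m))"
    by (rule sum_mult_cnj_sum)
  also have "\<dots> = (\<Sum>i<n. \<Sum>j<n. y i * cnj (y j) * (\<Sum>m<n. U i m * cnj (U j m)))"
    by (intro sum.cong refl) (simp add: sum_distrib_left algebra_simps)
  also have "\<dots> = (\<Sum>i<n. \<Sum>j<n. if j = i then y i * cnj (y i) else 0)"
    by (intro sum.cong refl) (auto simp: U1)
  also have "\<dots> = (\<Sum>i<n. y i * cnj (y i))" by (rule sum.cong[OF refl]) simp
  finally show ?thesis .
qed

locale gram_eigenbasis =
  fixes R d :: nat and x u :: "nat \<Rightarrow> nat \<Rightarrow> complex" and \<mu> :: "nat \<Rightarrow> real"
  assumes rows: "\<And>i j. i < d \<Longrightarrow> j < d \<Longrightarrow> (\<Sum>k<d. u i k * cnj (u j k)) = (if i = j then 1 else 0)"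
    and cols: "\<And>k l. k < d \<Longrightarrow> l < d \<Longrightarrow> (\<Sum>i<d. cnj (u i k) * u i l) = (if k = l then 1 else 0)"
    and gram: "\<And>i j. i < d \<Longrightarrow> j < d \<Longrightarrow>
      (\<Sum>\<rho><R. cnj (x \<rho> i) * x \<rho> j) = (\<Sum>k<d. complex_of_real (\<mu> k) * u i k * cnj (u j k))"
begin

definition eigen_coeff :: "nat \<Rightarrow> nat \<Rightarrow> complex" where
  "eigen_coeff \<rho> m = (\<Sum>i<d. x \<rho> i * u i m)"

lemma eigen_coeff_orthogonal:
  assumes m: "m < d" and m': "m' < d"
  shows "(\<Sum>\<rho><R. cnj (eigen_coeff \<rho> m) * eigen_coeff \<rho> m') = (if m = m' then complex_of_real (\<mu> m) else 0)"
proof -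
  have "(\<Sum>\<rho><R. cnj (eigen_coeff \<rho> m) * eigen_coeff \<rho> m') =
      (\<Sum>\<rho><R. \<Sum>i<d. \<Sum>j<d. cnj (u i m) * (cnj (x \<rho> i) * x \<rho> j) * u j m')"
    unfolding eigen_coeff_def cnj_sum sum_product by (intro sum.cong refl) (simp add: algebra_simps)
  also have "\<dots> = (\<Sum>i<d. \<Sum>j<d. cnj (u i m) * (\<Sum>k<d. complex_of_real (\<mu> k) * u i k * cnj (u j k)) * u j m')"
    by (subst sum_swap3[symmetric]) (intro sum.cong refl, simp add: gram[symmetric] sum_distrib_left sum_distrib_right)
  also have "\<dots> = (\<Sum>k<d. \<Sum>i<d. \<Sum>j<d. complex_of_real (\<mu> k) * (cnj (u i m) * u i k) * (cnj (u j k) * u j m'))"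
    by (subst sum_swap3[symmetric]) (intro sum.cong refl, simp add: sum_distrib_left sum_distrib_right algebra_simps)
  also have "\<dots> = (\<Sum>k<d. complex_of_real (\<mu> k) * (\<Sum>i<d. cnj (u i m) * u i k) * (\<Sum>j<d. cnj (u j k) * u j m'))"
    by (intro sum.cong refl) (rule sum_sum_const_mult)
  also have "\<dots> = (\<Sum>k<d. if m = m' then (if k = m then complex_of_real (\<mu> k) else 0) else 0)"
    by (intro sum.cong refl) (auto simp: cols m m')
  also have "\<dots> = (if m = m' then complex_of_real (\<mu> m) else 0)"
    using m by (cases "m = m'") (simp_all add: sum.delta)
  finally show ?thesis .
qed

lemma eigenvalue_eq:
  assumes "m < d"
  shows "\<mu> m = sqnorm R (\<lambda>\<rho>. eigen_coeff \<rho> m)"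
proof -
  have "complex_of_real (sqnorm R (\<lambda>\<rho>. eigen_coeff \<rho> m)) = complex_of_real (\<mu> m)"
    unfolding of_real_sqnorm using eigen_coeff_orthogonal[OF assms assms] by (simp add: mult.commute)
  then show ?thesis by simp
qed

lemma eigenvalue_nonneg: "m < d \<Longrightarrow> 0 \<le> \<mu> m"
  using eigenvalue_eq sqnorm_nonneg by simp

lemma eigen_coeff_eq_0:
  assumes "m < d" and "\<rho> < R" and "\<mu> m = 0"
  shows "eigen_coeff \<rho> m = 0"
proof -
  have "\<forall>\<rho>'\<in>{..<R}. (cmod (eigen_coeff \<rho>' m))\<^sup>2 = 0"
    using assms eigenvalue_eq[of m] unfolding sqnorm_def by (subst sum_nonneg_eq_0_iff[symmetric]) auto
  then show ?thesis using assms by simp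
qed

definition iso :: "nat \<Rightarrow> nat \<Rightarrow> complex" where
  "iso \<rho> m = eigen_coeff \<rho> m / complex_of_real (sqrt (\<mu> m))"

definition weight :: "nat \<Rightarrow> nat \<Rightarrow> complex" where
  "weight m i = complex_of_real (sqrt (\<mu> m)) * cnj (u i m)"

lemma factorisation:
  assumes \<rho>: "\<rho> < R" and i: "i < d"
  shows "x \<rho> i = (\<Sum>m<d. iso \<rho> m * weight m i)"
proof -
  have "iso \<rho> m * weight m i = eigen_coeff \<rho> m * cnj (u i m)" if m: "m < d" for m
  proof (cases "\<mu> m = 0")
    case True then show ?thesis unfolding iso_def weight_def using eigen_coeff_eq_0[OF m \<rho>] by simp
  next
    case False
    then have "sqrt (\<mu> m) \<noteq> 0" using eigenvalue_nonneg[OF m] by simp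
    then show ?thesis unfolding iso_def weight_def by (simp add: field_simps)
  qed
  then have "(\<Sum>m<d. iso \<rho> m * weight m i) = (\<Sum>m<d. eigen_coeff \<rho> m * cnj (u i m))" by simp
  also have "\<dots> = (\<Sum>j<d. x \<rho> j * (\<Sum>m<d. u j m * cnj (u i m)))"
    unfolding eigen_coeff_def sum_distrib_right sum_distrib_left by (subst sum.swap) (simp add: algebra_simps)
  also have "\<dots> = x \<rho> i"
    using i by (simp add: rows if_distrib[of "(*) _"] cong: if_cong)
  finally show ?thesis ..
qed

lemma sqnorm_weight: "(\<Sum>m<d. sqnorm d (weight m)) = (\<Sum>\<rho><R. sqnorm d (x \<rho>))"
proof -
  have "complex_of_real (\<Sum>m<d. sqnorm d (weight m)) = (\<Sum>m<d. complex_of_real (\<mu> m) * (\<Sum>i<d. cnj (u i m) * u i m))"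
    unfolding of_real_sum of_real_sqnorm weight_def
    by (intro sum.cong refl) (simp add: sum_distrib_left algebra_simps eigenvalue_nonneg flip: of_real_mult)
  also have "\<dots> = (\<Sum>m<d. \<Sum>\<rho><R. cnj (eigen_coeff \<rho> m) * eigen_coeff \<rho> m)"
    by (intro sum.cong refl) (simp add: cols eigen_coeff_orthogonal)
  also have "\<dots> = (\<Sum>\<rho><R. \<Sum>m<d. eigen_coeff \<rho> m * cnj (eigen_coeff \<rho> m))"
    by (subst sum.swap) (simp add: mult.commute)
  also have "\<dots> = complex_of_real (\<Sum>\<rho><R. sqnorm d (x \<rho>))"
    unfolding eigen_coeff_def of_real_sum of_real_sqnorm by (rule sum.cong[OF refl], rule sum_orthonormal_rows[OF rows])
  finally show ?thesis by (simp only: of_real_eq_iff)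
qed

lemma iso_contraction: "sqnorm R (\<lambda>\<rho>. \<Sum>m<d. iso \<rho> m * z m) \<le> sqnorm d z"
proof -
  have iso_cols: "(\<Sum>\<rho><R. iso \<rho> m * cnj (iso \<rho> m')) = (if m = m' \<and> \<mu> m \<noteq> 0 then 1 else 0)"
    if m: "m < d" and m': "m' < d" for m m'
  proof -
    have "(\<Sum>\<rho><R. iso \<rho> m * cnj (iso \<rho> m')) =
        cnj (\<Sum>\<rho><R. cnj (eigen_coeff \<rho> m) * eigen_coeff \<rho> m') / (complex_of_real (sqrt (\<mu> m)) * complex_of_real (sqrt (\<mu> m')))"
      unfolding iso_def by (simp add: cnj_sum sum_divide_distrib algebra_simps)
    then show ?thesis
      using eigenvalue_nonneg[OF m] eigenvalue_nonneg[OF m']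
      by (simp add: eigen_coeff_orthogonal[OF m m'] flip: of_real_mult)
  qed
  have "complex_of_real (sqnorm R (\<lambda>\<rho>. \<Sum>m<d. iso \<rho> m * z m)) =
      (\<Sum>m<d. \<Sum>m'<d. \<Sum>\<rho><R. iso \<rho> m * z m * cnj (iso \<rho> m' * z m'))"
    unfolding of_real_sqnorm by (rule sum_mult_cnj_sum)
  also have "\<dots> = (\<Sum>m<d. \<Sum>m'<d. z m * cnj (z m') * (\<Sum>\<rho><R. iso \<rho> m * cnj (iso \<rho> m')))"
    by (intro sum.cong refl) (simp add: sum_distrib_left algebra_simps)
  also have "\<dots> = (\<Sum>m<d. \<Sum>m'<d. if m' = m \<and> \<mu> m \<noteq> 0 then z m * cnj (z m) else 0)"
    by (intro sum.cong refl) (auto simp: iso_cols)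
  also have "\<dots> = (\<Sum>m<d. if \<mu> m \<noteq> 0 then z m * cnj (z m) else 0)"
    by (intro sum.cong refl) (simp add: sum.delta')
  finally have eq: "complex_of_real (sqnorm R (\<lambda>\<rho>. \<Sum>m<d. iso \<rho> m * z m)) =
      (\<Sum>m<d. if \<mu> m \<noteq> 0 then z m * cnj (z m) else 0)" .
  have "sqnorm R (\<lambda>\<rho>. \<Sum>m<d. iso \<rho> m * z m) = Re (complex_of_real (sqnorm R (\<lambda>\<rho>. \<Sum>m<d. iso \<rho> m * z m)))"
    by (simp only: Re_complex_of_real)
  also have "\<dots> = Re (\<Sum>m<d. if \<mu> m \<noteq> 0 then z m * cnj (z m) else 0)"
    unfolding eq ..
  also have "\<dots> \<le> sqnorm d z"
    unfolding Re_sum sqnorm_def by (rule sum_mono) (simp add: complex_mult_cnj cmod_power2)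
  finally show ?thesis .
qed

end

text \<open>A thin singular value decomposition of the R \<times> d matrix x: the factor V is a contraction
  and W has only d rows, which lets the reference system of an embedded map be shrunk to the
  dimension of its input.\<close>
lemma schmidt_factorisation:
  fixes x :: "nat \<Rightarrow> nat \<Rightarrow> complex"
  shows "\<exists>V W. (\<forall>\<rho><R. \<forall>i<d. x \<rho> i = (\<Sum>m<d. V \<rho> m * W m i)) \<and>
     (\<Sum>m<d. sqnorm d (W m)) = (\<Sum>\<rho><R. sqnorm d (x \<rho>)) \<and>
     (\<forall>z. sqnorm R (\<lambda>\<rho>. \<Sum>m<d. V \<rho> m * z m) \<le> sqnorm d z)"
proof -
  define H where "H = mat d d (\<lambda>(i,j). \<Sum>\<rho><R. cnj (x \<rho> i) * x \<rho> j)"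
  have "H \<in> carrier_mat d d" and "adj H = H" unfolding H_def
    by (auto intro!: eq_matI simp: cnj_sum mult.commute)
  then obtain U \<mu> where U: "unitary_mat d U" and HU: "H = unitary_diag d U \<mu>"
    by (rule hermitian_unitary_diag)
  have "(\<Sum>\<rho><R. cnj (x \<rho> i) * x \<rho> j) = (\<Sum>k<d. complex_of_real (\<mu> k) * U $$ (i,k) * cnj (U $$ (j,k)))"
    if "i < d" "j < d" for i j
    using arg_cong[OF HU, of "\<lambda>M. M $$ (i,j)"] that by (simp add: H_def)
  then interpret gram_eigenbasis R d x "\<lambda>i k. U $$ (i,k)" \<mu>
    using unitary_matD(2,3)[OF U] by unfold_locales auto
  show ?thesis using factorisation sqnorm_weight iso_contraction by blast
qed

definition lift_outer :: "nat \<Rightarrow> nat \<Rightarrow> (complex mat \<Rightarrow> complex mat) \<Rightarrow> (nat \<Rightarrow> complex) \<Rightarrow> complex mat" where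
  "lift_outer d1 d2 \<Phi> w = lift_left d1 d1 d2 \<Phi> (outer_mat (d1*d1) w)"

lemma lift_outer_carrier[simp]: "lift_outer d1 d2 \<Phi> w \<in> carrier_mat (d1*d2) (d1*d2)"
  unfolding lift_outer_def lift_left_def by simp

lemma lift_outer_dims[simp]: "dim_row (lift_outer d1 d2 \<Phi> w) = d1*d2" "dim_col (lift_outer d1 d2 \<Phi> w) = d1*d2"
  unfolding lift_outer_def lift_left_def by simp_all

lemma index_lift_outer:
  assumes lin: "linear_map d1 d2 \<Phi>" and i: "i < d1" and j: "j < d1" and a: "a < d2" and b: "b < d2"
  shows "lift_outer d1 d2 \<Phi> w $$ (i*d2+a, j*d2+b) =
    (\<Sum>k<d1. \<Sum>l<d1. w (i*d1+k) * cnj (w (j*d1+l)) * \<Phi> (mat_unit d1 k l) $$ (a,b))"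
proof -
  have p: "i*d2+a < d1*d2" "j*d2+b < d1*d2" using mult_add_less i j a b by auto
  have embed_block: "mat d1 d1 (\<lambda>(k,l). outer_mat (d1*d1) w $$ (i*d1+k, j*d1+l)) = mat d1 d1 (\<lambda>(k,l). w (i*d1+k) * cnj (w (j*d1+l)))"
    by (rule eq_matI) (use mult_add_less[OF i] mult_add_less[OF j] in auto)
  have "lift_outer d1 d2 \<Phi> w $$ (i*d2+a, j*d2+b) = \<Phi> (mat d1 d1 (\<lambda>(k,l). w (i*d1+k) * cnj (w (j*d1+l)))) $$ (a,b)"
    unfolding lift_outer_def lift_left_def using p a b by (simp add: embed_block)
  also have "\<dots> = (\<Sum>k<d1. \<Sum>l<d1. w (i*d1+k) * cnj (w (j*d1+l)) * \<Phi> (mat_unit d1 k l) $$ (a,b))"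
    by (subst index_linear_map[OF lin _ a b]) simp_all
  finally show ?thesis .
qed

lemma index_lift_outer':
  assumes lin: "linear_map d1 d2 \<Phi>" and p: "p < d1*d2" and q: "q < d1*d2"
  shows "lift_outer d1 d2 \<Phi> w $$ (p, q) =
    (\<Sum>k<d1. \<Sum>l<d1. w (p div d2*d1+k) * cnj (w (q div d2*d1+l)) * \<Phi> (mat_unit d1 k l) $$ (p mod d2, q mod d2))"
proof -
  have d2: "0 < d2" using p by (cases d2) auto
  have pd: "p div d2 < d1" "q div d2 < d1" using p q by (simp_all add: less_mult_imp_div_less)
  have "lift_outer d1 d2 \<Phi> w $$ (p, q) = lift_outer d1 d2 \<Phi> w $$ (p div d2 * d2 + p mod d2, q div d2 * d2 + q mod d2)" by simp
  also have "\<dots> = (\<Sum>k<d1. \<Sum>l<d1. w (p div d2*d1+k) * cnj (w (q div d2*d1+l)) * \<Phi> (mat_unit d1 k l) $$ (p mod d2, q mod d2))"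
    by (rule index_lift_outer[OF lin pd]) (simp_all add: d2)
  finally show ?thesis .
qed

lemma adj_lift_outer:
  assumes lin: "linear_map d1 d2 \<Phi>"
    and herm: "\<And>i j a b. i < d1 \<Longrightarrow> j < d1 \<Longrightarrow> a < d2 \<Longrightarrow> b < d2 \<Longrightarrow>
        \<Phi> (mat_unit d1 j i) $$ (b,a) = cnj (\<Phi> (mat_unit d1 i j) $$ (a,b))"
  shows "adj (lift_outer d1 d2 \<Phi> w) = lift_outer d1 d2 \<Phi> w"
proof (rule eq_matI)
  fix p q assume "p < dim_row (lift_outer d1 d2 \<Phi> w)" "q < dim_col (lift_outer d1 d2 \<Phi> w)"
  then have p: "p < d1*d2" and q: "q < d1*d2" using lift_outer_carrier[of d1 d2 \<Phi> w] by auto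
  have d2: "0 < d2" using p by (cases d2) auto
  have m: "p mod d2 < d2" "q mod d2 < d2" using d2 by simp_all
  have "adj (lift_outer d1 d2 \<Phi> w) $$ (p,q) = cnj (lift_outer d1 d2 \<Phi> w $$ (q,p))" using p q by simp
  also have "\<dots> = (\<Sum>k<d1. \<Sum>l<d1. cnj (w (q div d2*d1+k) * cnj (w (p div d2*d1+l)) * \<Phi> (mat_unit d1 k l) $$ (q mod d2, p mod d2)))"
    unfolding index_lift_outer'[OF lin q p] by (simp add: cnj_sum)
  also have "\<dots> = (\<Sum>k<d1. \<Sum>l<d1. w (p div d2*d1+l) * cnj (w (q div d2*d1+k)) * \<Phi> (mat_unit d1 l k) $$ (p mod d2, q mod d2))"
    by (intro sum.cong refl) (simp add: herm[OF _ _ m(1) m(2)] algebra_simps)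
  also have "\<dots> = (\<Sum>l<d1. \<Sum>k<d1. w (p div d2*d1+l) * cnj (w (q div d2*d1+k)) * \<Phi> (mat_unit d1 l k) $$ (p mod d2, q mod d2))"
    by (rule sum.swap)
  also have "\<dots> = lift_outer d1 d2 \<Phi> w $$ (p,q)" unfolding index_lift_outer'[OF lin p q] ..
  finally show "adj (lift_outer d1 d2 \<Phi> w) $$ (p,q) = lift_outer d1 d2 \<Phi> w $$ (p,q)" .
qed simp_all

lemma lift_outer_smult:
  assumes lin: "linear_map d1 d2 \<Phi>"
  shows "lift_outer d1 d2 \<Phi> (\<lambda>k. c * w k) = (c * cnj c) \<cdot>\<^sub>m lift_outer d1 d2 \<Phi> w"
  by (rule eq_matI) (simp_all add: index_lift_outer'[OF lin] sum_distrib_left algebra_simps)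

text \<open>Rescaling w to a unit vector reduces the claim to the diamond-norm bound on pure states.\<close>
lemma lift_outer_rank1_bounded:
  assumes lin: "linear_map d1 d2 \<Phi>"
    and herm: "\<And>i j a b. i < d1 \<Longrightarrow> j < d1 \<Longrightarrow> a < d2 \<Longrightarrow> b < d2 \<Longrightarrow>
        \<Phi> (mat_unit d1 j i) $$ (b,a) = cnj (\<Phi> (mat_unit d1 i j) $$ (a,b))"
    and tn: "\<And>\<psi>. pure_state (d1*d1) \<psi> \<Longrightarrow> trace_norm (d1*d2) (lift_left d1 d1 d2 \<Phi> \<psi>) \<le> 1"
  shows "rank1_bounded (d1*d2) (lift_outer d1 d2 \<Phi> w) (sqnorm (d1*d1) w)"
proof (cases "sqnorm (d1*d1) w = 0")
  case True
  show ?thesis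
  proof (rule rank1_bounded_zero)
    fix p q assume p: "p < d1*d2" and q: "q < d1*d2"
    have "p div d2 < d1" using p by (simp add: less_mult_imp_div_less)
    then have "w (p div d2 * d1 + k) = 0" if "k < d1" for k
      using True mult_add_less that unfolding sqnorm_eq_0_iff by blast
    then show "lift_outer d1 d2 \<Phi> w $$ (p,q) = 0" unfolding index_lift_outer'[OF lin p q] by simp
  qed (simp_all add: sqnorm_nonneg)
next
  case False
  define c where "c = sqnorm (d1*d1) w"
  have c: "0 < c" using False sqnorm_nonneg[of "d1*d1" w] unfolding c_def by simp
  define u where "u k = w k / complex_of_real (sqrt c)" for k
  have "trace_norm (d1*d2) (lift_outer d1 d2 \<Phi> u) \<le> 1"
    unfolding lift_outer_def u_def c_def by (rule tn[OF pure_state_normalise]) (use c c_def in simp)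
  then have "rank1_bounded (d1*d2) (lift_outer d1 d2 \<Phi> u) 1"
    using rank1_bounded_mono[OF hermitian_rank1_bounded[OF lift_outer_carrier adj_lift_outer[OF lin herm]]] by blast
  then have "rank1_bounded (d1*d2) (complex_of_real c \<cdot>\<^sub>m lift_outer d1 d2 \<Phi> u) (c * 1)"
    using c by (intro rank1_bounded_smult) simp_all
  moreover have "lift_outer d1 d2 \<Phi> w = lift_outer d1 d2 \<Phi> (\<lambda>k. complex_of_real (sqrt c) * u k)"
    unfolding u_def using c by simp
  ultimately show ?thesis
    unfolding lift_outer_smult[OF lin] c_def using c c_def by (simp flip: of_real_mult)
qed

definition max_ent_vec :: "nat \<Rightarrow> nat \<Rightarrow> complex" where
  "max_ent_vec d1 p = (if p div d1 = p mod d1 then 1 else 0)"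

lemma max_ent_vec_index: "k < d1 \<Longrightarrow> max_ent_vec d1 (r*d1 + k) = (if k = r then 1 else 0)"
  unfolding max_ent_vec_def by simp

lemma lift_outer_max_ent:
  assumes lin: "linear_map d1 d2 \<Phi>"
  shows "lift_outer d1 d2 \<Phi> (max_ent_vec d1) = choi_mat d1 d2 \<Phi>"
proof (rule eq_matI)
  fix p q assume "p < dim_row (choi_mat d1 d2 \<Phi>)" "q < dim_col (choi_mat d1 d2 \<Phi>)"
  then have p: "p < d1*d2" and q: "q < d1*d2" unfolding choi_mat_def by simp_all
  have pd: "p div d2 < d1" "q div d2 < d1" using p q by (simp_all add: less_mult_imp_div_less)
  have "lift_outer d1 d2 \<Phi> (max_ent_vec d1) $$ (p,q) =
     (\<Sum>k<d1. \<Sum>l<d1. if k = p div d2 then (if l = q div d2 then \<Phi> (mat_unit d1 k l) $$ (p mod d2, q mod d2) else 0) else 0)"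
    unfolding index_lift_outer'[OF lin p q] by (intro sum.cong refl) (simp add: max_ent_vec_index)
  also have "\<dots> = choi_mat d1 d2 \<Phi> $$ (p,q)"
    unfolding double_delta[OF pd] choi_mat_def using p q by simp
  finally show "lift_outer d1 d2 \<Phi> (max_ent_vec d1) $$ (p,q) = choi_mat d1 d2 \<Phi> $$ (p,q)" .
qed (simp_all add: choi_mat_def)

lemma sqnorm_max_ent_vec: "sqnorm (d1*d1) (max_ent_vec d1) = real d1"
proof -
  have "sqnorm (d1*d1) (max_ent_vec d1) = (\<Sum>i<d1. \<Sum>j<d1. if j = i then 1 else 0)"
    unfolding sqnorm_def sum_lessThan_mult by (intro sum.cong refl) (simp add: max_ent_vec_index)
  then show ?thesis by simp
qed

text \<open>x viewed as a matrix whose rows are indexed by the reference system L_A L_B.\<close>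
definition ref_split :: "nat \<Rightarrow> nat \<Rightarrow> (nat \<Rightarrow> complex) \<Rightarrow> nat \<Rightarrow> nat \<Rightarrow> complex" where
  "ref_split d1 lb x \<rho> i = x (triple_index d1 lb (\<rho> div lb) i (\<rho> mod lb))"

definition embed_coeff :: "nat \<Rightarrow> nat \<Rightarrow> (nat \<Rightarrow> nat \<Rightarrow> complex) \<Rightarrow> nat \<Rightarrow> nat \<Rightarrow> complex" where
  "embed_coeff d2 lb V p \<alpha> = (if \<alpha> mod d2 = mid_index d2 lb p
     then cnj (V (left_index d2 lb p * lb + right_index lb p) (\<alpha> div d2)) else 0)"

lemma index_embed_map_outer_factor:
  assumes lin: "linear_map d1 d2 \<Phi>"
    and fac: "\<And>\<rho> i. \<rho> < la*lb \<Longrightarrow> i < d1 \<Longrightarrow> ref_split d1 lb x \<rho> i = (\<Sum>m<d1. V \<rho> m * W m i)"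
    and p: "p < la*(d2*lb)" and q: "q < la*(d2*lb)"
  shows "embed_map la lb d1 d2 \<Phi> (outer_mat (la*(d1*lb)) x) $$ (p,q) =
    sesq_form (d1*d2) (lift_outer d1 d2 \<Phi> (\<lambda>k. W (k div d1) (k mod d1))) (embed_coeff d2 lb V p) (embed_coeff d2 lb V q)"
proof -
  let ?A = "\<lambda>p i. triple_index d1 lb (left_index d2 lb p) i (right_index lb p)"
  let ?\<rho> = "\<lambda>p. left_index d2 lb p * lb + right_index lb p"
  let ?w = "\<lambda>k. W (k div d1) (k mod d1)"
  let ?J = "\<lambda>i j. \<Phi> (mat_unit d1 i j) $$ (mid_index d2 lb p, mid_index d2 lb q)"
  have s: "mid_index d2 lb p < d2" "mid_index d2 lb q < d2" using mid_index_less p q by auto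
  have xA: "x (?A p' i) = (\<Sum>m<d1. V (?\<rho> p') m * W m i)" if p': "p' < la*(d2*lb)" and i: "i < d1" for p' i
    using fac[OF mult_add_less[OF left_index_less[OF p'] right_index_less[OF p']] i] right_index_less[OF p']
    by (simp add: ref_split_def)
  have A: "?A p i < la*(d1*lb)" "?A q j < la*(d1*lb)" if "i < d1" "j < d1" for i j
    using triple_index_less[OF left_index_less[OF p] that(1) right_index_less[OF p]]
      triple_index_less[OF left_index_less[OF q] that(2) right_index_less[OF q]] by simp_all
  have "sesq_form (d1*d2) (lift_outer d1 d2 \<Phi> ?w) (embed_coeff d2 lb V p) (embed_coeff d2 lb V q) =
      (\<Sum>m<d1. \<Sum>m'<d1. V (?\<rho> p) m * lift_outer d1 d2 \<Phi> ?w $$ (m*d2 + mid_index d2 lb p, m'*d2 + mid_index d2 lb q) *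
        cnj (V (?\<rho> q) m'))"
    unfolding embed_coeff_def
    by (subst sesq_form_collapse[OF s, where f = "\<lambda>m. cnj (V (?\<rho> p) m)" and h = "\<lambda>m. cnj (V (?\<rho> q) m)"]) simp
  also have "\<dots> = (\<Sum>m<d1. \<Sum>m'<d1. \<Sum>i<d1. \<Sum>j<d1. V (?\<rho> p) m * W m i * cnj (V (?\<rho> q) m' * W m' j) * ?J i j)"
    using s by (intro sum.cong refl) (simp add: index_lift_outer[OF lin] sum_distrib_left sum_distrib_right algebra_simps)
  also have "\<dots> = (\<Sum>i<d1. \<Sum>j<d1. (\<Sum>m<d1. V (?\<rho> p) m * W m i) * cnj (\<Sum>m'<d1. V (?\<rho> q) m' * W m' j) * ?J i j)"
    unfolding cnj_sum sum_product by (subst sum_swap4) (simp only: sum_distrib_right)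
  also have "\<dots> = (\<Sum>i<d1. \<Sum>j<d1. x (?A p i) * cnj (x (?A q j)) * ?J i j)"
    using p q by (simp add: xA)
  also have "\<dots> = embed_map la lb d1 d2 \<Phi> (outer_mat (la*(d1*lb)) x) $$ (p,q)"
    unfolding index_embed_map_linear[OF lin p q] using A by simp
  finally show ?thesis ..
qed

lemma index_embed_map_outer:
  assumes lin: "linear_map d1 d2 \<Phi>" and p: "p < la*(d2*lb)" and q: "q < la*(d2*lb)"
  shows "embed_map la lb d1 d2 \<Phi> (outer_mat (la*(d1*lb)) x) $$ (p,q) =
    sesq_form (d1*d2) (choi_mat d1 d2 \<Phi>) (embed_coeff d2 lb (ref_split d1 lb x) p) (embed_coeff d2 lb (ref_split d1 lb x) q)"
proof -
  have "(\<lambda>k. (if k div d1 = k mod d1 then 1 else 0)) = max_ent_vec d1"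
    unfolding max_ent_vec_def by simp
  then show ?thesis
    using lift_outer_max_ent[OF lin]
      index_embed_map_outer_factor[OF lin _ p q, where V = "ref_split d1 lb x" and W = "\<lambda>m i. if m = i then 1 else 0" and x = x]
    by (simp add: if_distrib[of "(*) _"] cong: if_cong)
qed

lemma embed_map_outer_psd:
  assumes lin: "linear_map d1 d2 \<Phi>" and C: "psd (d1*d2) (choi_mat d1 d2 \<Phi>)"
  shows "psd (la*(d2*lb)) (embed_map la lb d1 d2 \<Phi> (outer_mat (la*(d1*lb)) x))"
  by (rule psd_sesq_congruence[OF C embed_map_carrier index_embed_map_outer[OF lin]])

lemma embed_map_psd:
  assumes lin: "linear_map d1 d2 \<Phi>" and C: "psd (d1*d2) (choi_mat d1 d2 \<Phi>)" and X: "psd (la*(d1*lb)) X"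
  shows "psd (la*(d2*lb)) (embed_map la lb d1 d2 \<Phi> X)"
  by (rule linear_map_psd_of_outer[OF linear_map_embed_map[OF lin] embed_map_outer_psd[OF lin C] X])

lemma rank1_bounded_sesq_congruence:
  assumes Z: "rank1_bounded D Z s" and T: "T \<in> carrier_mat N N"
    and T_eq: "\<And>p q. p < N \<Longrightarrow> q < N \<Longrightarrow> T $$ (p,q) = sesq_form D Z (y p) (y q)"
    and contr: "\<And>v. sqnorm N (\<lambda>p. \<Sum>a<D. cnj (y p a) * v a) \<le> sqnorm D v"
  shows "rank1_bounded N T s"
proof -
  obtain L where ZL: "\<And>a b. a < D \<Longrightarrow> b < D \<Longrightarrow> Z $$ (a,b) = rank1_sum L a b"
    and w: "rank1_weight D L \<le> s"
    using Z unfolding rank1_bounded_def by blast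
  define Y where "Y = (\<lambda>v p. \<Sum>a<D. cnj (y p a) * v a)"
  define L' where "L' = map (\<lambda>e. (fst e, Y (snd e))) L"
  have "T $$ (p,q) = rank1_sum L' p q" if "p < N" "q < N" for p q
  proof -
    have "T $$ (p,q) = (\<Sum>a<D. \<Sum>b<D. \<Sum>e\<leftarrow>L. complex_of_real (fst e) * (cnj (y p a) * snd e a) * cnj (cnj (y q b) * snd e b))"
      unfolding T_eq[OF that] sesq_form_def
      by (intro sum.cong refl) (simp add: ZL rank1_sum_def algebra_simps flip: sum_list_const_mult sum_list_mult_const)
    also have "\<dots> = (\<Sum>e\<leftarrow>L. \<Sum>a<D. \<Sum>b<D. complex_of_real (fst e) * (cnj (y p a) * snd e a) * cnj (cnj (y q b) * snd e b))"
      by (simp only: sum_sum_list_swap)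
    also have "\<dots> = rank1_sum L' p q"
      unfolding rank1_sum_def L'_def Y_def map_map o_def
      by (intro arg_cong[where f = sum_list] map_cong refl)
        (simp only: fst_conv snd_conv cnj_sum sum_distrib_left sum_distrib_right, rule sum.swap)
    finally show ?thesis .
  qed
  moreover have "rank1_weight N L' \<le> rank1_weight D L"
    unfolding rank1_weight_def L'_def
    by (simp add: o_def, rule sum_list_mono) (simp add: Y_def contr mult_left_mono)
  ultimately show ?thesis unfolding rank1_bounded_def using T w by auto
qed

lemma sqnorm_embed_coeff:
  assumes contr: "\<And>z. sqnorm (la*lb) (\<lambda>\<rho>. \<Sum>m<d1. V \<rho> m * z m) \<le> sqnorm d1 z"
  shows "sqnorm (la*(d2*lb)) (\<lambda>p. \<Sum>\<alpha><d1*d2. cnj (embed_coeff d2 lb V p \<alpha>) * z \<alpha>) \<le> sqnorm (d1*d2) z"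
proof -
  have coeff: "(\<Sum>\<alpha><d1*d2. cnj (embed_coeff d2 lb V (r*(d2*lb) + (s*lb + t)) \<alpha>) * z \<alpha>) =
      (\<Sum>m<d1. V (r*lb+t) m * z (m*d2 + s))" if "r < la" "s < d2" "t < lb" for r s t
    unfolding embed_coeff_def triple_index_decode[OF that]
    by (subst sum_mod_eq_collapse[OF that(2), where F = "\<lambda>m \<alpha>. V (r*lb+t) m * z \<alpha>", symmetric])
      (auto intro: sum.cong)
  have "sqnorm (la*(d2*lb)) (\<lambda>p. \<Sum>\<alpha><d1*d2. cnj (embed_coeff d2 lb V p \<alpha>) * z \<alpha>) =
      (\<Sum>s<d2. \<Sum>r<la. \<Sum>t<lb. (cmod (\<Sum>m<d1. V (r*lb+t) m * z (m*d2 + s)))\<^sup>2)"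
    unfolding sqnorm_triple by (subst sum.swap) (simp add: coeff)
  also have "\<dots> = (\<Sum>s<d2. sqnorm (la*lb) (\<lambda>\<rho>. \<Sum>m<d1. V \<rho> m * z (m*d2 + s)))"
    unfolding sqnorm_def sum_lessThan_mult ..
  also have "\<dots> \<le> (\<Sum>s<d2. sqnorm d1 (\<lambda>m. z (m*d2 + s)))"
    by (rule sum_mono) (rule contr)
  also have "\<dots> = sqnorm (d1*d2) z"
    unfolding sqnorm_def sum_lessThan_mult by (rule sum.swap)
  finally show ?thesis .
qed

lemma sqnorm_ref_split: "(\<Sum>\<rho><la*lb. sqnorm d1 (ref_split d1 lb x \<rho>)) = sqnorm (la*(d1*lb)) x"
proof -
  have "(\<Sum>\<rho><la*lb. sqnorm d1 (ref_split d1 lb x \<rho>)) =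
      (\<Sum>r<la. \<Sum>t<lb. \<Sum>i<d1. (cmod (x (triple_index d1 lb r i t)))\<^sup>2)"
    unfolding sum_lessThan_mult sqnorm_def ref_split_def by simp
  also have "\<dots> = sqnorm (la*(d1*lb)) x"
    unfolding sqnorm_def sum_lessThan_mult triple_index_def by (rule sum.cong[OF refl], rule sum.swap)
  finally show ?thesis .
qed

lemma embed_map_outer_rank1_bounded:
  assumes lin: "linear_map d1 d2 \<Phi>"
    and herm: "\<And>i j a b. i < d1 \<Longrightarrow> j < d1 \<Longrightarrow> a < d2 \<Longrightarrow> b < d2 \<Longrightarrow>
        \<Phi> (mat_unit d1 j i) $$ (b,a) = cnj (\<Phi> (mat_unit d1 i j) $$ (a,b))"
    and tn: "\<And>\<psi>. pure_state (d1*d1) \<psi> \<Longrightarrow> trace_norm (d1*d2) (lift_left d1 d1 d2 \<Phi> \<psi>) \<le> 1"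
  shows "rank1_bounded (la*(d2*lb)) (embed_map la lb d1 d2 \<Phi> (outer_mat (la*(d1*lb)) x)) (sqnorm (la*(d1*lb)) x)"
proof -
  obtain V W where fac: "\<And>\<rho> i. \<rho> < la*lb \<Longrightarrow> i < d1 \<Longrightarrow> ref_split d1 lb x \<rho> i = (\<Sum>m<d1. V \<rho> m * W m i)"
    and nW: "(\<Sum>m<d1. sqnorm d1 (W m)) = (\<Sum>\<rho><la*lb. sqnorm d1 (ref_split d1 lb x \<rho>))"
    and contr: "\<And>z. sqnorm (la*lb) (\<lambda>\<rho>. \<Sum>m<d1. V \<rho> m * z m) \<le> sqnorm d1 z"
    using schmidt_factorisation[of "la*lb" d1 "ref_split d1 lb x"] by blast
  define w where "w k = W (k div d1) (k mod d1)" for k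
  have "sqnorm (d1*d1) w = sqnorm (la*(d1*lb)) x"
    unfolding sqnorm_ref_split[symmetric] nW[symmetric] unfolding sqnorm_def sum_lessThan_mult w_def by simp
  moreover have "rank1_bounded (la*(d2*lb)) (embed_map la lb d1 d2 \<Phi> (outer_mat (la*(d1*lb)) x)) (sqnorm (d1*d1) w)"
    unfolding w_def
    by (rule rank1_bounded_sesq_congruence[OF lift_outer_rank1_bounded[OF lin herm tn] embed_map_carrier
          index_embed_map_outer_factor[OF lin fac] sqnorm_embed_coeff[OF contr]])
  ultimately show ?thesis by simp
qed

section \<open>Partial transposes\<close>

text \<open>An index of L_A \<otimes> A \<otimes> B \<otimes> L_B, read both in the bipartite grouping (L_A A)(B L_B)
  and in the grouping L_A (A B) L_B of embed_map.\<close>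
lemma four_index_decode:
  fixes r sa sb t la A B lb :: nat
  assumes r: "r < la" and sa: "sa < A" and sb: "sb < B" and t: "t < lb"
  defines "v \<equiv> ((r*A+sa)*B+sb)*lb + t"
  shows "v < (la*A)*(B*lb)" "v < la*((A*B)*lb)" "v div (B*lb) = r*A+sa" "v mod (B*lb) = sb*lb + t"
    "left_index (A*B) lb v = r" "mid_index (A*B) lb v = sa*B+sb" "right_index lb v = t" "v = triple_index (A*B) lb r (sa*B+sb) t"
proof -
  have s: "sa*B+sb < A*B" by (rule mult_add_less[OF sa sb])
  have st: "sb*lb + t < B*lb" by (rule mult_add_less[OF sb t])
  have e1: "v = (r*A+sa)*(B*lb) + (sb*lb + t)" unfolding v_def by (simp add: algebra_simps)
  have e2: "v = r*((A*B)*lb) + ((sa*B+sb)*lb + t)" unfolding v_def by (simp add: algebra_simps)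
  have ra: "r*A+sa < la*A" by (rule mult_add_less[OF r sa])
  show "v < (la*A)*(B*lb)" unfolding e1 by (rule mult_add_less[OF ra st])
  show "v < la*((A*B)*lb)" unfolding e2 by (rule mult_add_less[OF r mult_add_less[OF s t]])
  show "v div (B*lb) = r*A+sa" unfolding e1 using st by simp
  show "v mod (B*lb) = sb*lb + t" unfolding e1 using st by simp
  show "left_index (A*B) lb v = r" unfolding e2 by (rule triple_index_decode(1)[OF r s t])
  show "mid_index (A*B) lb v = sa*B+sb" unfolding e2 by (rule triple_index_decode(2)[OF r s t])
  show "right_index lb v = t" unfolding e2 by (rule triple_index_decode(3)[OF r s t])
  show "v = triple_index (A*B) lb r (sa*B+sb) t" unfolding e2 triple_index_def ..
qed

lemma four_index_exists:
  fixes p la A B lb :: nat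
  assumes p: "p < la*((A*B)*lb)"
  shows "\<exists>r sa sb t. r < la \<and> sa < A \<and> sb < B \<and> t < lb \<and> p = ((r*A+sa)*B+sb)*lb + t"
proof -
  have pos: "0 < A" "0 < B" "0 < lb" using p by (cases "A = 0"; cases "B = 0"; cases "lb = 0"; auto)+
  define r where "r = p div ((A*B)*lb)"
  define s where "s = (p mod ((A*B)*lb)) div lb"
  define t where "t = p mod lb"
  have r: "r < la" unfolding r_def using p by (simp add: less_mult_imp_div_less mult.commute)
  have s: "s < A*B" unfolding s_def using pos by (simp add: less_mult_imp_div_less)
  have t: "t < lb" unfolding t_def using pos by simp
  have "p = r*((A*B)*lb) + p mod ((A*B)*lb)" unfolding r_def by (metis div_mult_mod_eq mult.commute)
  also have "p mod ((A*B)*lb) = s*lb + (p mod ((A*B)*lb)) mod lb" unfolding s_def by (rule div_mult_mod_eq[symmetric])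
  also have "(p mod ((A*B)*lb)) mod lb = t" unfolding t_def by (simp add: mod_mod_cancel)
  finally have pe: "p = r*((A*B)*lb) + (s*lb + t)" .
  have "s = (s div B)*B + s mod B" by (rule div_mult_mod_eq[symmetric])
  then have "p = ((r*A + s div B)*B + s mod B)*lb + t" unfolding pe by (simp add: algebra_simps)
  moreover have "s div B < A" using s pos by (simp add: less_mult_imp_div_less)
  moreover have "s mod B < B" using pos by simp
  ultimately show ?thesis using r t by blast
qed

lemma pair_index_decode:
  fixes ia ib a b :: nat
  assumes "ia < a" "ib < b"
  shows "(ia*b+ib) div b = ia" "(ia*b+ib) mod b = ib" "ia*b+ib < a*b"
  using assms mult_add_less by auto

lemma index_ptB: "p < a*b \<Longrightarrow> q < a*b \<Longrightarrow> ptB a b M $$ (p,q) = M $$ ((p div b)*b + q mod b, (q div b)*b + p mod b)"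
  unfolding ptB_def by simp

lemma ptB_dims[simp]: "dim_row (ptB a b M) = a*b" "dim_col (ptB a b M) = a*b"
  unfolding ptB_def by simp_all

lemma ptB_embed_block:
  assumes c: "r < la" "sa < a2" "sb < b2" "t < lb" and c': "r' < la" "sa' < a2" "sb' < b2" "t' < lb"
  defines "p \<equiv> ((r*a2+sa)*b2+sb)*lb + t" and "q \<equiv> ((r'*a2+sa')*b2+sb')*lb + t'"
    and "p' \<equiv> ((r*a2+sa)*b2+sb')*lb + t'" and "q' \<equiv> ((r'*a2+sa')*b2+sb)*lb + t"
  shows "ptB a1 b1 (embed_block (a1*b1) (a2*b2) lb (ptB (la*a1) (b1*lb) X) p q) = embed_block (a1*b1) (a2*b2) lb X p' q'"
proof (rule eq_matI)
  note P = four_index_decode[OF c, folded p_def] and Q = four_index_decode[OF c', folded q_def]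
  note P' = four_index_decode[OF c(1,2) c'(3,4), folded p'_def] and Q' = four_index_decode[OF c'(1,2) c(3,4), folded q'_def]
  fix i j assume "i < dim_row (embed_block (a1*b1) (a2*b2) lb X p' q')" "j < dim_col (embed_block (a1*b1) (a2*b2) lb X p' q')"
  then have i: "i < a1*b1" and j: "j < a1*b1" unfolding embed_block_def by simp_all
  have b1: "0 < b1" using i by (cases b1) auto
  define ia ib ja jb where "ia = i div b1" "ib = i mod b1" "ja = j div b1" "jb = j mod b1"
  have ii: "ia < a1" "ib < b1" "ja < a1" "jb < b1" unfolding ia_ib_ja_jb_def using i j b1
    by (simp_all add: less_mult_imp_div_less)
  have ie: "i = ia*b1+ib" "j = ja*b1+jb" unfolding ia_ib_ja_jb_def by simp_all
  note X1 = four_index_decode[OF c(1) ii(1) ii(4) c(4)]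
  note X2 = four_index_decode[OF c'(1) ii(3) ii(2) c'(4)]
  note X3 = four_index_decode[OF c(1) ii(1) ii(2) c'(4)]
  note X4 = four_index_decode[OF c'(1) ii(3) ii(4) c(4)]
  have "ptB a1 b1 (embed_block (a1*b1) (a2*b2) lb (ptB (la*a1) (b1*lb) X) p q) $$ (i,j) =
        embed_block (a1*b1) (a2*b2) lb (ptB (la*a1) (b1*lb) X) p q $$ (ia*b1+jb, ja*b1+ib)"
    using i j unfolding ie by (simp add: index_ptB pair_index_decode ii)
  also have "\<dots> = ptB (la*a1) (b1*lb) X $$ (triple_index (a1*b1) lb r (ia*b1+jb) t, triple_index (a1*b1) lb r' (ja*b1+ib) t')"
    unfolding embed_block_def using pair_index_decode(3)[OF ii(1) ii(4)] pair_index_decode(3)[OF ii(3) ii(2)]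
    by (simp add: P(5,7) Q(5,7))
  also have "\<dots> = X $$ (triple_index (a1*b1) lb r i t', triple_index (a1*b1) lb r' j t)"
  proof -
    let ?v1 = "((r*a1+ia)*b1+jb)*lb + t" and ?v2 = "((r'*a1+ja)*b1+ib)*lb + t'"
    have e1: "(?v1 div (b1*lb))*(b1*lb) + ?v2 mod (b1*lb) = triple_index (a1*b1) lb r i t'"
      unfolding X1(3) X2(4) ie(1) X3(8)[symmetric] by (simp add: algebra_simps)
    have e2: "(?v2 div (b1*lb))*(b1*lb) + ?v1 mod (b1*lb) = triple_index (a1*b1) lb r' j t"
      unfolding X2(3) X1(4) ie(2) X4(8)[symmetric] by (simp add: algebra_simps)
    show ?thesis unfolding X1(8)[symmetric] X2(8)[symmetric] index_ptB[OF X1(1) X2(1)] e1 e2 ..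
  qed
  also have "\<dots> = embed_block (a1*b1) (a2*b2) lb X p' q' $$ (i,j)"
    unfolding embed_block_def using i j by (simp add: P'(5,7) Q'(5,7))
  finally show "ptB a1 b1 (embed_block (a1*b1) (a2*b2) lb (ptB (la*a1) (b1*lb) X) p q) $$ (i,j) =
      embed_block (a1*b1) (a2*b2) lb X p' q' $$ (i,j)" .
qed (simp_all add: embed_block_def)

lemma ptB_embed_map:
  "ptB (la*a2) (b2*lb) (embed_map la lb (a1*b1) (a2*b2) M X) =
   embed_map la lb (a1*b1) (a2*b2) (pt_conj a1 b1 a2 b2 M) (ptB (la*a1) (b1*lb) X)"
proof (rule eq_matI)
  fix p q assume "p < dim_row (embed_map la lb (a1*b1) (a2*b2) (pt_conj a1 b1 a2 b2 M) (ptB (la*a1) (b1*lb) X))"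
    "q < dim_col (embed_map la lb (a1*b1) (a2*b2) (pt_conj a1 b1 a2 b2 M) (ptB (la*a1) (b1*lb) X))"
  then have p: "p < la*((a2*b2)*lb)" and q: "q < la*((a2*b2)*lb)" by simp_all
  obtain r sa sb t where c: "r < la" "sa < a2" "sb < b2" "t < lb" and pe: "p = ((r*a2+sa)*b2+sb)*lb + t"
    using four_index_exists[OF p] by blast
  obtain r' sa' sb' t' where c': "r' < la" "sa' < a2" "sb' < b2" "t' < lb" and qe: "q = ((r'*a2+sa')*b2+sb')*lb + t'"
    using four_index_exists[OF q] by blast
  define p' where "p' = ((r*a2+sa)*b2+sb')*lb + t'"
  define q' where "q' = ((r'*a2+sa')*b2+sb)*lb + t"
  note P = four_index_decode[OF c, folded pe] and Q = four_index_decode[OF c', folded qe]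
  note P' = four_index_decode[OF c(1,2) c'(3,4), folded p'_def] and Q' = four_index_decode[OF c'(1,2) c(3,4), folded q'_def]
  have "ptB (la*a2) (b2*lb) (embed_map la lb (a1*b1) (a2*b2) M X) $$ (p,q) = embed_map la lb (a1*b1) (a2*b2) M X $$ (p', q')"
  proof -
    have "(p div (b2*lb))*(b2*lb) + q mod (b2*lb) = p'" "(q div (b2*lb))*(b2*lb) + p mod (b2*lb) = q'"
      unfolding P(3,4) Q(3,4) p'_def q'_def by (simp_all add: algebra_simps)
    then show ?thesis using P(1) Q(1) by (simp add: index_ptB)
  qed
  also have "\<dots> = M (embed_block (a1*b1) (a2*b2) lb X p' q') $$ (sa*b2+sb', sa'*b2+sb)"
    using index_embed_map[OF P'(2) Q'(2)] P'(6) Q'(6) by simp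
  also have "\<dots> = pt_conj a1 b1 a2 b2 M (embed_block (a1*b1) (a2*b2) lb (ptB (la*a1) (b1*lb) X) p q) $$ (sa*b2+sb, sa'*b2+sb')"
    unfolding pt_conj_def pe qe ptB_embed_block[OF c c', folded p'_def q'_def] by (simp add: index_ptB pair_index_decode c c')
  also have "\<dots> = embed_map la lb (a1*b1) (a2*b2) (pt_conj a1 b1 a2 b2 M) (ptB (la*a1) (b1*lb) X) $$ (p,q)"
    using index_embed_map[OF p q] P(6) Q(6) by simp
  finally show "ptB (la*a2) (b2*lb) (embed_map la lb (a1*b1) (a2*b2) M X) $$ (p,q) =
      embed_map la lb (a1*b1) (a2*b2) (pt_conj a1 b1 a2 b2 M) (ptB (la*a1) (b1*lb) X) $$ (p,q)" .
qed (simp_all add: algebra_simps)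

lemma ptB_carrier[simp]: "ptB a b M \<in> carrier_mat (a*b) (a*b)"
  unfolding ptB_def by simp

lemma ptB_index_less:
  assumes p: "p < a*b" and q: "q < (a::nat)*b"
  shows "(p div b)*b + q mod b < a*b"
proof -
  have b: "0 < b" using p by (cases b) auto
  show ?thesis using mult_add_less[of "p div b" a "q mod b" b] p b by (simp add: less_mult_imp_div_less)
qed

lemma ptB_ptB:
  assumes X: "X \<in> carrier_mat (a*b) (a*b)"
  shows "ptB a b (ptB a b X) = X"
proof (rule eq_matI)
  fix p q assume "p < dim_row X" "q < dim_col X"
  then have p: "p < a*b" and q: "q < a*b" using X by auto
  have b: "0 < b" using p by (cases b) auto
  have P: "(p div b)*b + q mod b < a*b" "(q div b)*b + p mod b < a*b" using ptB_index_less p q by auto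
  show "ptB a b (ptB a b X) $$ (p,q) = X $$ (p,q)"
    unfolding index_ptB[OF p q] index_ptB[OF P] using b by simp
qed (use X in simp_all)

lemma ptB_add: "X \<in> carrier_mat (a*b) (a*b) \<Longrightarrow> Y \<in> carrier_mat (a*b) (a*b) \<Longrightarrow> ptB a b (X + Y) = ptB a b X + ptB a b Y"
  by (rule eq_matI) (simp_all add: index_ptB ptB_index_less)

lemma ptB_smult: "X \<in> carrier_mat (a*b) (a*b) \<Longrightarrow> ptB a b (c \<cdot>\<^sub>m X) = c \<cdot>\<^sub>m ptB a b X"
  by (rule eq_matI) (simp_all add: index_ptB ptB_index_less)

lemma mtrace_ptB: assumes X: "X \<in> carrier_mat (a*b) (a*b)" shows "mtrace (ptB a b X) = mtrace X"
proof -
  have "mtrace (ptB a b X) = (\<Sum>p<a*b. X $$ (p,p))"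
    unfolding mtrace_def by (intro sum.cong) (simp_all add: index_ptB)
  also have "\<dots> = mtrace X" unfolding mtrace_def using X by simp
  finally show ?thesis .
qed

lemma linear_map_pt_conj:
  assumes lin: "linear_map (a1*b1) (a2*b2) P"
  shows "linear_map (a1*b1) (a2*b2) (pt_conj a1 b1 a2 b2 P)"
  unfolding linear_map_def pt_conj_def
proof (intro conjI ballI allI)
  fix X Y :: "complex mat" assume X: "X \<in> carrier_mat (a1*b1) (a1*b1)" and Y: "Y \<in> carrier_mat (a1*b1) (a1*b1)"
  show "ptB a2 b2 (P (ptB a1 b1 (X + Y))) = ptB a2 b2 (P (ptB a1 b1 X)) + ptB a2 b2 (P (ptB a1 b1 Y))"
    using linear_mapD[OF lin] X Y by (simp add: ptB_add)
next
  fix X :: "complex mat" and c :: complex assume X: "X \<in> carrier_mat (a1*b1) (a1*b1)"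
  show "ptB a2 b2 (P (ptB a1 b1 (c \<cdot>\<^sub>m X))) = c \<cdot>\<^sub>m ptB a2 b2 (P (ptB a1 b1 X))"
    using linear_mapD[OF lin] X by (simp add: ptB_smult)
qed simp

lemma ptB_mat_unit:
  assumes i: "i < a1*b1" and j: "j < a1*b1"
  shows "ptB a1 b1 (mat_unit (a1*b1) i j) = mat_unit (a1*b1) ((i div b1)*b1 + j mod b1) ((j div b1)*b1 + i mod b1)"
proof (rule eq_matI)
  fix p q assume "p < dim_row (mat_unit (a1*b1) ((i div b1)*b1 + j mod b1) ((j div b1)*b1 + i mod b1))"
     "q < dim_col (mat_unit (a1*b1) ((i div b1)*b1 + j mod b1) ((j div b1)*b1 + i mod b1))"
  then have p: "p < a1*b1" and q: "q < a1*b1" unfolding mat_unit_def by simp_all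
  have b1: "0 < b1" using p by (cases b1) auto
  have P: "(p div b1)*b1 + q mod b1 < a1*b1" "(q div b1)*b1 + p mod b1 < a1*b1" using ptB_index_less p q by auto
  have iff: "((p div b1)*b1 + q mod b1 = i \<and> (q div b1)*b1 + p mod b1 = j) \<longleftrightarrow>
             (p = (i div b1)*b1 + j mod b1 \<and> q = (j div b1)*b1 + i mod b1)"
  proof
    assume h: "(p div b1)*b1 + q mod b1 = i \<and> (q div b1)*b1 + p mod b1 = j"
    then have "i div b1 = p div b1" "i mod b1 = q mod b1" "j div b1 = q div b1" "j mod b1 = p mod b1"
      using b1 by auto
    then show "p = (i div b1)*b1 + j mod b1 \<and> q = (j div b1)*b1 + i mod b1" by simp
  next
    assume h: "p = (i div b1)*b1 + j mod b1 \<and> q = (j div b1)*b1 + i mod b1"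
    then show "(p div b1)*b1 + q mod b1 = i \<and> (q div b1)*b1 + p mod b1 = j" using b1 by simp
  qed
  show "ptB a1 b1 (mat_unit (a1*b1) i j) $$ (p,q) = mat_unit (a1*b1) ((i div b1)*b1 + j mod b1) ((j div b1)*b1 + i mod b1) $$ (p,q)"
    unfolding index_ptB[OF p q] mat_unit_def using P p q iff by simp
qed (simp_all add: mat_unit_def)

lemma pt_conj_entry_cnj:
  assumes herm: "\<And>i j a b. i < a1*b1 \<Longrightarrow> j < a1*b1 \<Longrightarrow> a < a2*b2 \<Longrightarrow> b < a2*b2 \<Longrightarrow>
        M (mat_unit (a1*b1) j i) $$ (b,a) = cnj (M (mat_unit (a1*b1) i j) $$ (a,b))"
    and i: "i < a1*b1" and j: "j < a1*b1" and a: "a < a2*b2" and b: "b < a2*b2"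
  shows "pt_conj a1 b1 a2 b2 M (mat_unit (a1*b1) j i) $$ (b,a) = cnj (pt_conj a1 b1 a2 b2 M (mat_unit (a1*b1) i j) $$ (a,b))"
proof -
  let ?i = "(i div b1)*b1 + j mod b1" and ?j = "(j div b1)*b1 + i mod b1"
  have ij: "?i < a1*b1" "?j < a1*b1" using ptB_index_less i j by auto
  have AB: "(b div b2)*b2 + a mod b2 < a2*b2" "(a div b2)*b2 + b mod b2 < a2*b2" using ptB_index_less a b by auto
  show ?thesis
    unfolding pt_conj_def ptB_mat_unit[OF i j] ptB_mat_unit[OF j i] index_ptB[OF a b] index_ptB[OF b a]
    by (rule herm[OF ij AB(2) AB(1)])
qed

lemma pt_conj_outer_rank1_bounded:
  assumes ch: "quantum_channel (a1*b1) (a2*b2) P" and cpp: "completely_PPT_preserving a1 b1 a2 b2 P"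
  shows "rank1_bounded (a2*b2) (pt_conj a1 b1 a2 b2 P (outer_mat (a1*b1) v)) (sqnorm (a1*b1) v)"
proof -
  have lin: "linear_map (a1*b1) (a2*b2) P" and tp: "\<And>X. X \<in> carrier_mat (a1*b1) (a1*b1) \<Longrightarrow> mtrace (P X) = mtrace X"
    using ch unfolding quantum_channel_def CP_map_def by auto
  have linc: "linear_map (a1*b1) (a2*b2) (pt_conj a1 b1 a2 b2 P)" by (rule linear_map_pt_conj[OF lin])
  have cp: "completely_positive (a1*b1) (a2*b2) (pt_conj a1 b1 a2 b2 P)"
    using cpp unfolding completely_PPT_preserving_def .
  have ps: "psd (a2*b2) (pt_conj a1 b1 a2 b2 P (outer_mat (a1*b1) v))"
    by (rule completely_positive_psd[OF cp psd_outer_mat linear_mapD(1)[OF linc outer_mat_carrier]])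
  have "mtrace (pt_conj a1 b1 a2 b2 P (outer_mat (a1*b1) v)) = mtrace (outer_mat (a1*b1) v)"
    unfolding pt_conj_def
    using linear_mapD(1)[OF lin ptB_carrier] by (simp add: mtrace_ptB tp)
  also have "\<dots> = complex_of_real (sqnorm (a1*b1) v)" unfolding mtrace_def of_real_sqnorm by (intro sum.cong) simp_all
  finally have "Re (mtrace (pt_conj a1 b1 a2 b2 P (outer_mat (a1*b1) v))) = sqnorm (a1*b1) v" by simp
  then show ?thesis using psd_rank1_bounded[OF ps] by simp
qed

section \<open>Choi matrices, log-negativity and D_max\<close>

lemma CP_choi_psd:
  assumes lin: "linear_map d1 d2 \<Phi>" and cp: "completely_positive d1 d2 \<Phi>"
  shows "psd (d1*d2) (choi_mat d1 d2 \<Phi>)"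
proof -
  have "psd (d1*d2) (lift_outer d1 d2 \<Phi> (max_ent_vec d1))"
    using cp psd_outer_mat unfolding completely_positive_def lift_outer_def by blast
  then show ?thesis unfolding lift_outer_max_ent[OF lin] .
qed

lemma choi_entry_cnj:
  assumes C: "psd (d1*d2) (choi_mat d1 d2 \<Phi>)" and i: "i < d1" and j: "j < d1" and a: "a < d2" and b: "b < d2"
  shows "\<Phi> (mat_unit d1 j i) $$ (b,a) = cnj (\<Phi> (mat_unit d1 i j) $$ (a,b))"
proof -
  have h: "adj (choi_mat d1 d2 \<Phi>) = choi_mat d1 d2 \<Phi>" by (rule psd_adj[OF C])
  have ab: "i*d2+a < d1*d2" "j*d2+b < d1*d2" using mult_add_less i j a b by auto
  have "choi_mat d1 d2 \<Phi> $$ (j*d2+b, i*d2+a) = adj (choi_mat d1 d2 \<Phi>) $$ (j*d2+b, i*d2+a)" unfolding h ..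
  also have "\<dots> = cnj (choi_mat d1 d2 \<Phi> $$ (i*d2+a, j*d2+b))" using ab by (simp add: choi_mat_def)
  finally show ?thesis unfolding index_choi_mat[OF i j a b] index_choi_mat[OF j i b a] .
qed

lemma trace_norm_nonneg:
  assumes Z: "Z \<in> carrier_mat n n"
  shows "0 \<le> trace_norm n Z"
proof -
  have u: "unitary_mat n (1\<^sub>m n)" unfolding unitary_mat_def by simp
  have "cmod (mtrace (1\<^sub>m n * Z)) \<le> trace_norm n Z" unfolding trace_norm_def
    by (rule cSup_upper[OF _ trace_norm_bdd_above[OF Z]]) (use u in blast)
  then show ?thesis by (meson norm_ge_zero order_trans)
qed

lemma lift_left_carrier[simp]: "lift_left k d1 d2 \<Phi> X \<in> carrier_mat (k*d2) (k*d2)"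
  unfolding lift_left_def by simp

lemma trace_norm_le_1_of_log_neg:
  assumes ln: "log_neg a1 b1 a2 b2 M \<le> 0" and ps: "pure_state ((a1*b1)*(a1*b1)) \<psi>"
  shows "trace_norm ((a1*b1)*(a2*b2)) (lift_left (a1*b1) (a1*b1) (a2*b2) (pt_conj a1 b1 a2 b2 M) \<psi>) \<le> 1"
proof -
  let ?tn = "trace_norm ((a1*b1)*(a2*b2)) (lift_left (a1*b1) (a1*b1) (a2*b2) (pt_conj a1 b1 a2 b2 M) \<psi>)"
  define t where "t = diamond_norm (a1*b1) (a2*b2) (pt_conj a1 b1 a2 b2 M)"
  have le: "ereal ?tn \<le> t" unfolding t_def diamond_norm_def
    by (rule Sup_upper) (use ps in blast)
  have nn: "0 \<le> ?tn" by (rule trace_norm_nonneg[OF lift_left_carrier])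
  have ln': "(if t = 0 then -\<infinity> else if t = \<infinity> then \<infinity> else ereal (log 2 (real_of_ereal t))) \<le> 0"
    using ln unfolding log_neg_def t_def Let_def .
  show ?thesis
  proof (cases t)
    case (real r)
    show ?thesis
    proof (cases "r = 0")
      case True then show ?thesis using le real nn by simp
    next
      case False
      then have "log 2 r \<le> 0" using ln' real by (simp add: zero_ereal_def)
      moreover have "r > 0" using le nn real False by simp
      ultimately have "r \<le> 1" by simp
      then show ?thesis using le real by simp
    qed
  next
    case PInf then show ?thesis using ln' by simp
  next
    case MInf then show ?thesis using le by simp
  qed
qed

lemma choi_mat_smult_diff:
  assumes M: "\<And>X. X \<in> carrier_mat d1 d1 \<Longrightarrow> M X \<in> carrier_mat d2 d2"
    and N: "\<And>X. X \<in> carrier_mat d1 d1 \<Longrightarrow> N X \<in> carrier_mat d2 d2"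
  shows "choi_mat d1 d2 (\<lambda>Y. c \<cdot>\<^sub>m M Y - N Y) = c \<cdot>\<^sub>m choi_mat d1 d2 M - choi_mat d1 d2 N"
proof (rule eq_matI)
  fix p q assume "p < dim_row (c \<cdot>\<^sub>m choi_mat d1 d2 M - choi_mat d1 d2 N)" "q < dim_col (c \<cdot>\<^sub>m choi_mat d1 d2 M - choi_mat d1 d2 N)"
  then have p: "p < d1*d2" and q: "q < d1*d2" by (simp_all add: choi_mat_def)
  have d2: "0 < d2" using p by (cases d2) auto
  show "choi_mat d1 d2 (\<lambda>Y. c \<cdot>\<^sub>m M Y - N Y) $$ (p,q) = (c \<cdot>\<^sub>m choi_mat d1 d2 M - choi_mat d1 d2 N) $$ (p,q)"
  proof -
    let ?E = "mat_unit d1 (p div d2) (q div d2)"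
    have "M ?E \<in> carrier_mat d2 d2" "N ?E \<in> carrier_mat d2 d2" using M[OF mat_unit_carrier] N[OF mat_unit_carrier] by auto
    then have dm: "dim_row (M ?E) = d2" "dim_col (M ?E) = d2" "dim_row (N ?E) = d2" "dim_col (N ?E) = d2" by auto
    show ?thesis unfolding choi_mat_def using p q d2 dm by simp
  qed
qed (simp_all add: choi_mat_def)

lemma bipartite_dim_eq: "la*((a*b)*lb) = (la*a)*(b*(lb::nat))" by (simp add: algebra_simps)

lemma choi_mat_dims[simp]: "dim_row (choi_mat d1 d2 \<Phi>) = d1*d2" "dim_col (choi_mat d1 d2 \<Phi>) = d1*d2"
  unfolding choi_mat_def by simp_all

text \<open>Testing D_max of maps on the normalised maximally entangled state compares Choi matrices.\<close>
lemma choi_loewner_of_Dmax_map_less: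
  assumes linM: "linear_map d1 d2 M" and linN: "linear_map d1 d2 N"
    and d1: "0 < d1" and lt: "Dmax_map d1 d2 N M < ereal lam"
  obtains l where "l < lam" and "psd (d1*d2) (complex_of_real (2 powr l) \<cdot>\<^sub>m choi_mat d1 d2 M - choi_mat d1 d2 N)"
proof -
  let ?c = "1 / complex_of_real (sqrt (real d1))"
  let ?\<psi> = "outer_mat (d1*d1) (\<lambda>p. max_ent_vec d1 p / complex_of_real (sqrt (real d1)))"
  let ?s = "complex_of_real (1 / real d1)"
  have pure: "pure_state (d1*d1) ?\<psi>"
    using pure_state_normalise[of "d1*d1" "max_ent_vec d1"] d1 by (simp add: sqnorm_max_ent_vec)
  have cc: "?c * cnj ?c = ?s"
    using d1 by (simp flip: of_real_mult)
  have \<psi>: "?\<psi> = outer_mat (d1*d1) (\<lambda>p. ?c * max_ent_vec d1 p)" by simp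
  have LN: "lift_left d1 d1 d2 N ?\<psi> = ?s \<cdot>\<^sub>m choi_mat d1 d2 N"
    using lift_outer_smult[OF linN, of ?c "max_ent_vec d1"]
    unfolding lift_outer_max_ent[OF linN] cc unfolding lift_outer_def \<psi> .
  have LM: "lift_left d1 d1 d2 M ?\<psi> = ?s \<cdot>\<^sub>m choi_mat d1 d2 M"
    using lift_outer_smult[OF linM, of ?c "max_ent_vec d1"]
    unfolding lift_outer_max_ent[OF linM] cc unfolding lift_outer_def \<psi> .
  have "Dmax (d1*d2) (lift_left d1 d1 d2 N ?\<psi>) (lift_left d1 d1 d2 M ?\<psi>) \<le> Dmax_map d1 d2 N M"
    unfolding Dmax_map_def by (rule Sup_upper) (use pure in blast)
  then have "Dmax (d1*d2) (lift_left d1 d1 d2 N ?\<psi>) (lift_left d1 d1 d2 M ?\<psi>) < ereal lam" using lt by simp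
  then obtain l where l: "l < lam"
    and le: "loewner_le (d1*d2) (lift_left d1 d1 d2 N ?\<psi>) (complex_of_real (2 powr l) \<cdot>\<^sub>m lift_left d1 d1 d2 M ?\<psi>)"
    unfolding Dmax_def Inf_less_iff by auto
  have "psd (d1*d2) (complex_of_real (real d1) \<cdot>\<^sub>m
      (complex_of_real (2 powr l) \<cdot>\<^sub>m (?s \<cdot>\<^sub>m choi_mat d1 d2 M) - ?s \<cdot>\<^sub>m choi_mat d1 d2 N))"
    using le unfolding loewner_le_def LN LM by (rule psd_smult) simp
  moreover have "complex_of_real (real d1) \<cdot>\<^sub>m
      (complex_of_real (2 powr l) \<cdot>\<^sub>m (?s \<cdot>\<^sub>m choi_mat d1 d2 M) - ?s \<cdot>\<^sub>m choi_mat d1 d2 N) =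
      complex_of_real (2 powr l) \<cdot>\<^sub>m choi_mat d1 d2 M - choi_mat d1 d2 N"
    by (rule eq_matI) (use d1 in \<open>simp_all add: field_simps\<close>)
  ultimately show ?thesis using that l by simp
qed

lemma choi_psd_of_Dmax_map_less:
  assumes linM: "linear_map d1 d2 M" and linN: "linear_map d1 d2 N" and cM: "psd (d1*d2) (choi_mat d1 d2 M)"
    and lt: "Dmax_map d1 d2 N M < ereal lam"
  shows "psd (d1*d2) (choi_mat d1 d2 (\<lambda>Y. complex_of_real (2 powr lam) \<cdot>\<^sub>m M Y - N Y))"
proof (cases "d1 = 0")
  case True
  then show ?thesis by (simp add: psd_zero_dim carrier_matI)
next
  case False
  then obtain l where l: "l < lam"
    and p: "psd (d1*d2) (complex_of_real (2 powr l) \<cdot>\<^sub>m choi_mat d1 d2 M - choi_mat d1 d2 N)"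
    using choi_loewner_of_Dmax_map_less[OF linM linN _ lt] by blast
  have "psd (d1*d2) ((complex_of_real (2 powr l) \<cdot>\<^sub>m choi_mat d1 d2 M - choi_mat d1 d2 N)
      + complex_of_real (2 powr lam - 2 powr l) \<cdot>\<^sub>m choi_mat d1 d2 M)"
    by (rule psd_add[OF p psd_smult[OF cM]]) (use l in simp)
  moreover have "(complex_of_real (2 powr l) \<cdot>\<^sub>m choi_mat d1 d2 M - choi_mat d1 d2 N)
      + complex_of_real (2 powr lam - 2 powr l) \<cdot>\<^sub>m choi_mat d1 d2 M =
      complex_of_real (2 powr lam) \<cdot>\<^sub>m choi_mat d1 d2 M - choi_mat d1 d2 N"
    by (rule eq_matI) (simp_all add: algebra_simps)
  ultimately show ?thesis
    using choi_mat_smult_diff[OF linear_mapD(1)[OF linM] linear_mapD(1)[OF linN]] by simp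
qed

section \<open>The protocol\<close>

lemma embed_map_psd_bipartite:
  assumes "linear_map (a1*b1) (a2*b2) \<Phi>" and "psd ((a1*b1)*(a2*b2)) (choi_mat (a1*b1) (a2*b2) \<Phi>)"
    and "psd ((la*a1)*(b1*lb)) X"
  shows "psd ((la*a2)*(b2*lb)) (embed_map la lb (a1*b1) (a2*b2) \<Phi> X)"
  using embed_map_psd[OF assms(1,2), of la lb X] assms(3) unfolding bipartite_dim_eq by simp

lemma linear_map_embed_map_bipartite:
  assumes "linear_map (a1*b1) (a2*b2) \<Phi>"
  shows "linear_map ((la*a1)*(b1*lb)) ((la*a2)*(b2*lb)) (embed_map la lb (a1*b1) (a2*b2) \<Phi>)"
  using linear_map_embed_map[OF assms, of la lb] unfolding bipartite_dim_eq .

text \<open>\<sigma> is feasible for R_max: the rank-one decomposition certifies trace norm at most 1 for its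
  partial transpose.\<close>
definition rains_witness :: "nat \<Rightarrow> nat \<Rightarrow> real \<Rightarrow> complex mat \<Rightarrow> complex mat \<Rightarrow> bool" where
  "rains_witness dA dB c \<sigma> \<tau> \<longleftrightarrow> psd (dA*dB) \<sigma> \<and> psd (dA*dB) \<tau> \<and>
     psd (dA*dB) (complex_of_real c \<cdot>\<^sub>m \<sigma> - \<tau>) \<and> rank1_bounded (dA*dB) (ptB dA dB \<sigma>) 1"

lemma rains_witness_PPT_state:
  assumes "PPT_state dA dB \<rho>"
  shows "rains_witness dA dB 1 \<rho> \<rho>"
proof -
  have \<rho>: "psd (dA*dB) \<rho>" "mtrace \<rho> = 1" "psd (dA*dB) (ptB dA dB \<rho>)"
    using assms unfolding PPT_state_def density_def by auto
  then have \<rho>c: "\<rho> \<in> carrier_mat (dA*dB) (dA*dB)" unfolding psd_iff_quad_form by simp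
  have "1 \<cdot>\<^sub>m \<rho> - \<rho> = 0 \<cdot>\<^sub>m \<rho>" by (rule eq_matI) (use \<rho>c in auto)
  then have "psd (dA*dB) (complex_of_real 1 \<cdot>\<^sub>m \<rho> - \<rho>)"
    using psd_smult[OF \<rho>(1), of 0] by simp
  moreover have "rank1_bounded (dA*dB) (ptB dA dB \<rho>) 1"
    using psd_rank1_bounded[OF \<rho>(3)] mtrace_ptB[OF \<rho>c] \<rho>(2) by simp
  ultimately show ?thesis unfolding rains_witness_def using \<rho> by blast
qed

lemma rains_witness_PPT_channel:
  assumes Q: "PPT_channel dA dB dA' dB' Q" and w: "rains_witness dA dB c \<sigma> \<tau>"
  shows "rains_witness dA' dB' c (Q \<sigma>) (Q \<tau>)"
proof -
  have ch: "quantum_channel (dA*dB) (dA'*dB') Q" and cpp: "completely_PPT_preserving dA dB dA' dB' Q"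
    using Q unfolding PPT_channel_def by auto
  then have lin: "linear_map (dA*dB) (dA'*dB') Q" and cp: "completely_positive (dA*dB) (dA'*dB') Q"
    unfolding quantum_channel_def CP_map_def by auto
  have \<sigma>: "psd (dA*dB) \<sigma>" and \<tau>: "psd (dA*dB) \<tau>" and d: "psd (dA*dB) (complex_of_real c \<cdot>\<^sub>m \<sigma> - \<tau>)"
    and pt: "rank1_bounded (dA*dB) (ptB dA dB \<sigma>) 1"
    using w unfolding rains_witness_def by auto
  have \<sigma>c: "\<sigma> \<in> carrier_mat (dA*dB) (dA*dB)" and \<tau>c: "\<tau> \<in> carrier_mat (dA*dB) (dA*dB)"
    using \<sigma> \<tau> unfolding psd_iff_quad_form by auto
  have psd_Q: "psd (dA'*dB') (Q X)" if "psd (dA*dB) X" for X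
    using completely_positive_psd[OF cp that linear_mapD(1)[OF lin]] that unfolding psd_iff_quad_form by simp
  have "psd (dA'*dB') (complex_of_real c \<cdot>\<^sub>m Q \<sigma> - Q \<tau>)"
    using psd_Q[OF d] unfolding linear_map_smult_diff[OF lin \<sigma>c \<tau>c] .
  moreover have "rank1_bounded (dA'*dB') (pt_conj dA dB dA' dB' Q (ptB dA dB \<sigma>)) 1"
    by (rule linear_map_rank1_bounded[OF linear_map_pt_conj[OF lin] pt pt_conj_outer_rank1_bounded[OF ch cpp]])
  then have "rank1_bounded (dA'*dB') (ptB dA' dB' (Q \<sigma>)) 1"
    unfolding pt_conj_def ptB_ptB[OF \<sigma>c] .
  ultimately show ?thesis unfolding rains_witness_def using psd_Q[OF \<sigma>] psd_Q[OF \<tau>] by blast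
qed

lemma Rmax_state_le_of_rains_witness:
  assumes "rains_witness dA dB (2 powr t) \<sigma> \<omega>"
  shows "Rmax_state dA dB \<omega> \<le> ereal t"
proof -
  have \<sigma>: "psd (dA*dB) \<sigma>" and dom: "loewner_le (dA*dB) \<omega> (complex_of_real (2 powr t) \<cdot>\<^sub>m \<sigma>)"
    and pt: "rank1_bounded (dA*dB) (ptB dA dB \<sigma>) 1"
    using assms unfolding rains_witness_def loewner_le_def by auto
  have "trace_norm (dA*dB) (ptB dA dB \<sigma>) \<le> 1" by (rule trace_norm_le_of_rank1_bounded[OF pt])
  then have "Rmax_state dA dB \<omega> \<le> Dmax (dA*dB) \<omega> \<sigma>"
    unfolding Rmax_state_def using \<sigma> by (intro Inf_lower) blast
  also have "Dmax (dA*dB) \<omega> \<sigma> \<le> ereal t"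
    unfolding Dmax_def using dom by (intro Inf_lower) blast
  finally show ?thesis .
qed

locale PPT_simulation =
  fixes a' b' a b :: nat and N M :: "complex mat \<Rightarrow> complex mat" and lam :: real
  assumes channel_N: "quantum_channel (a'*b') (a*b) N"
    and CP_M: "CP_map (a'*b') (a*b) M"
    and log_neg_M: "log_neg a' b' a b M \<le> 0"
    and Dmax_less: "Dmax_map (a'*b') (a*b) N M < ereal lam"
begin

lemma linear_N: "linear_map (a'*b') (a*b) N"
  and linear_M: "linear_map (a'*b') (a*b) M"
  using channel_N CP_M unfolding quantum_channel_def CP_map_def by auto

lemma choi_N_psd: "psd ((a'*b')*(a*b)) (choi_mat (a'*b') (a*b) N)"
  and choi_M_psd: "psd ((a'*b')*(a*b)) (choi_mat (a'*b') (a*b) M)"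
  using channel_N CP_M CP_choi_psd unfolding quantum_channel_def CP_map_def by auto

lemma choi_excess_psd:
  "psd ((a'*b')*(a*b)) (choi_mat (a'*b') (a*b) (\<lambda>Y. complex_of_real (2 powr lam) \<cdot>\<^sub>m M Y - N Y))"
  by (rule choi_psd_of_Dmax_map_less[OF linear_M linear_N choi_M_psd Dmax_less])

lemma embed_ptB_rank1_bounded:
  assumes "rank1_bounded ((la*a')*(b'*lb)) (ptB (la*a') (b'*lb) X) s"
  shows "rank1_bounded ((la*a)*(b*lb)) (ptB (la*a) (b*lb) (embed_map la lb (a'*b') (a*b) M X)) s"
proof -
  have "M (mat_unit (a'*b') j i) $$ (y,x) = cnj (M (mat_unit (a'*b') i j) $$ (x,y))"
    if "i < a'*b'" "j < a'*b'" "x < a*b" "y < a*b" for i j x y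
    using choi_entry_cnj[OF choi_M_psd that] .
  then have herm: "pt_conj a' b' a b M (mat_unit (a'*b') j i) $$ (y,x) = cnj (pt_conj a' b' a b M (mat_unit (a'*b') i j) $$ (x,y))"
    if "i < a'*b'" "j < a'*b'" "x < a*b" "y < a*b" for i j x y
    using pt_conj_entry_cnj[where M = M] that by blast
  have lin: "linear_map (a'*b') (a*b) (pt_conj a' b' a b M)"
    by (rule linear_map_pt_conj[OF linear_M])
  have outer: "rank1_bounded (la*((a*b)*lb))
      (embed_map la lb (a'*b') (a*b) (pt_conj a' b' a b M) (outer_mat (la*((a'*b')*lb)) v)) (sqnorm (la*((a'*b')*lb)) v)" for v
    by (rule embed_map_outer_rank1_bounded[OF lin herm trace_norm_le_1_of_log_neg[OF log_neg_M]])
  have "rank1_bounded (la*((a*b)*lb)) (embed_map la lb (a'*b') (a*b) (pt_conj a' b' a b M) (ptB (la*a') (b'*lb) X)) s"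
    using assms unfolding bipartite_dim_eq[symmetric] by (rule linear_map_rank1_bounded[OF linear_map_embed_map[OF lin] _ outer])
  then show ?thesis unfolding ptB_embed_map bipartite_dim_eq .
qed

text \<open>2^lam c E_M \<sigma> - E_N \<tau> = 2^lam E_M (c \<sigma> - \<tau>) + E_(2^lam M - N) \<tau>, and both terms are positive.\<close>
lemma rains_witness_embed:
  assumes w: "rains_witness (la*a') (b'*lb) c \<sigma> \<tau>"
  shows "rains_witness (la*a) (b*lb) (2 powr lam * c)
    (embed_map la lb (a'*b') (a*b) M \<sigma>) (embed_map la lb (a'*b') (a*b) N \<tau>)"
proof -
  let ?d = "(la*a')*(b'*lb)" and ?EM = "embed_map la lb (a'*b') (a*b) M" and ?EN = "embed_map la lb (a'*b') (a*b) N"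
  have \<sigma>: "psd ?d \<sigma>" and \<tau>: "psd ?d \<tau>" and d: "psd ?d (complex_of_real c \<cdot>\<^sub>m \<sigma> - \<tau>)"
    and pt: "rank1_bounded ?d (ptB (la*a') (b'*lb) \<sigma>) 1"
    using w unfolding rains_witness_def by auto
  have \<sigma>c: "\<sigma> \<in> carrier_mat ?d ?d" and \<tau>c: "\<tau> \<in> carrier_mat ?d ?d"
    using \<sigma> \<tau> unfolding psd_iff_quad_form by auto
  let ?e = "complex_of_real (2 powr lam)"
  have "psd ((la*a)*(b*lb)) (?EM (complex_of_real c \<cdot>\<^sub>m \<sigma> - \<tau>))"
    by (rule embed_map_psd_bipartite[OF linear_M choi_M_psd d])
  then have p1: "psd ((la*a)*(b*lb)) (complex_of_real c \<cdot>\<^sub>m ?EM \<sigma> - ?EM \<tau>)"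
    unfolding linear_map_smult_diff[OF linear_map_embed_map_bipartite[OF linear_M] \<sigma>c \<tau>c] .
  have "psd ((la*a)*(b*lb)) (embed_map la lb (a'*b') (a*b) (\<lambda>Y. ?e \<cdot>\<^sub>m M Y - N Y) \<tau>)"
    by (rule embed_map_psd_bipartite[OF linear_map_smult_diff_map[OF linear_M linear_N] choi_excess_psd \<tau>])
  moreover have "embed_map la lb (a'*b') (a*b) (\<lambda>Y. ?e \<cdot>\<^sub>m M Y - N Y) \<tau> = ?e \<cdot>\<^sub>m ?EM \<tau> - ?EN \<tau>"
    by (rule embed_map_smult_diff[OF linear_mapD(1)[OF linear_M] linear_mapD(1)[OF linear_N]])
  ultimately have p2: "psd ((la*a)*(b*lb)) (?e \<cdot>\<^sub>m ?EM \<tau> - ?EN \<tau>)" by simp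
  have "?e \<cdot>\<^sub>m (complex_of_real c \<cdot>\<^sub>m ?EM \<sigma> - ?EM \<tau>) + (?e \<cdot>\<^sub>m ?EM \<tau> - ?EN \<tau>) =
      complex_of_real (2 powr lam * c) \<cdot>\<^sub>m ?EM \<sigma> - ?EN \<tau>"
    by (rule eq_matI) (simp_all add: algebra_simps)
  moreover have "psd ((la*a)*(b*lb)) (?e \<cdot>\<^sub>m (complex_of_real c \<cdot>\<^sub>m ?EM \<sigma> - ?EM \<tau>) + (?e \<cdot>\<^sub>m ?EM \<tau> - ?EN \<tau>))"
    by (rule psd_add[OF psd_smult[OF p1] p2]) simp
  ultimately show ?thesis
    unfolding rains_witness_def
    using embed_map_psd_bipartite[OF linear_M choi_M_psd \<sigma>] embed_map_psd_bipartite[OF linear_N choi_N_psd \<tau>]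
      embed_ptB_rank1_bounded[OF pt] by simp
qed

lemma protocol_rains_witness:
  assumes P1: "PPT_state (la 1 * a') (b' * lb 1) \<rho>1"
    and Pi: "\<And>i. 2 \<le> i \<Longrightarrow> i \<le> n \<Longrightarrow>
              PPT_channel (la (i - 1) * a) (b * lb (i - 1)) (la i * a') (b' * lb i) (P i)"
    and tau1: "\<tau> 1 = embed_channel (la 1) (lb 1) a' b' a b N \<rho>1"
    and tauS: "\<And>i. 2 \<le> i \<Longrightarrow> i \<le> n \<Longrightarrow>
              \<tau> i = embed_channel (la i) (lb i) a' b' a b N (P i (\<tau> (i - 1)))"
    and k: "1 \<le> k" "k \<le> n"
  shows "\<exists>\<sigma>. rains_witness (la k * a) (b * lb k) (2 powr (real k * lam)) \<sigma> (\<tau> k)"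
  using k
proof (induction k)
  case 0
  then show ?case by simp
next
  case (Suc k)
  show ?case
  proof (cases "k = 0")
    case True
    then show ?thesis
      using rains_witness_embed[OF rains_witness_PPT_state[OF P1]] tau1 by (auto simp: embed_channel_eq)
  next
    case False
    then obtain \<sigma> where "rains_witness (la k * a) (b * lb k) (2 powr (real k * lam)) \<sigma> (\<tau> k)"
      using Suc by auto
    then have "rains_witness (la (Suc k) * a') (b' * lb (Suc k)) (2 powr (real k * lam)) (P (Suc k) \<sigma>) (P (Suc k) (\<tau> k))"
      using rains_witness_PPT_channel Pi[of "Suc k"] False Suc.prems by simp
    then have "rains_witness (la (Suc k) * a) (b * lb (Suc k)) (2 powr lam * 2 powr (real k * lam))
        (embed_map (la (Suc k)) (lb (Suc k)) (a'*b') (a*b) M (P (Suc k) \<sigma>)) (\<tau> (Suc k))"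
      using rains_witness_embed tauS[of "Suc k"] False Suc.prems by (simp add: embed_channel_eq)
    moreover have "2 powr lam * 2 powr (real k * lam) = 2 powr (real (Suc k) * lam)"
      by (simp add: algebra_simps flip: powr_add)
    ultimately show ?thesis by auto
  qed
qed

end

lemma ereal_le_mult_of_forall_less:
  fixes X R :: ereal and c :: real
  assumes c: "0 < c" and le: "\<And>l. R < ereal l \<Longrightarrow> X \<le> ereal (c * l)"
  shows "X \<le> ereal c * R"
proof (cases R)
  case PInf
  then show ?thesis using c by simp
next
  case (real r)
  show ?thesis
  proof (rule ereal_le_epsilon2)
    fix e :: real assume "0 < e"
    then have "X \<le> ereal (c * (r + e / c))" using le[of "r + e / c"] real c by simp
    then show "X \<le> ereal c * R + ereal e" using real c by (simp add: algebra_simps)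
  qed
next
  case MInf
  have "X \<le> ereal x" for x using le[of "x / c"] MInf c by simp
  then have "X = -\<infinity>" by (rule ereal_bot)
  then show ?thesis by simp
qed

theorem mainTheorem9:
  fixes n :: nat
    and a' b' a b :: nat
    and \<N> :: "complex mat \<Rightarrow> complex mat"
    and la lb :: "nat \<Rightarrow> nat"
    and mA mB :: nat
    and \<rho>1 :: "complex mat"
    and P :: "nat \<Rightarrow> complex mat \<Rightarrow> complex mat"
    and Pfin :: "complex mat \<Rightarrow> complex mat"
    and \<tau> :: "nat \<Rightarrow> complex mat"
    and \<omega> :: "complex mat"
  assumes n_pos: "1 \<le> n"
    and chan: "quantum_channel (a' * b') (a * b) \<N>"
    and P1: "PPT_state (la 1 * a') (b' * lb 1) \<rho>1"
    and Pi: "\<And>i. 2 \<le> i \<Longrightarrow> i \<le> n \<Longrightarrow>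
              PPT_channel (la (i - 1) * a) (b * lb (i - 1)) (la i * a') (b' * lb i) (P i)"
    and Pn: "PPT_channel (la n * a) (b * lb n) mA mB Pfin"
    and tau1: "\<tau> 1 = embed_channel (la 1) (lb 1) a' b' a b \<N> \<rho>1"
    and tauS: "\<And>i. 2 \<le> i \<Longrightarrow> i \<le> n \<Longrightarrow>
              \<tau> i = embed_channel (la i) (lb i) a' b' a b \<N> (P i (\<tau> (i - 1)))"
    and omega: "\<omega> = Pfin (\<tau> n)"
  shows "Rmax_state mA mB \<omega> \<le> ereal (real n) * Rmax_channel a' b' a b \<N>"
proof (rule ereal_le_mult_of_forall_less)
  fix lam assume "Rmax_channel a' b' a b \<N> < ereal lam"
  then obtain M where "CP_map (a'*b') (a*b) M" "log_neg a' b' a b M \<le> 0" "Dmax_map (a'*b') (a*b) \<N> M < ereal lam"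
    unfolding Rmax_channel_def Inf_less_iff by blast
  then interpret PPT_simulation a' b' a b \<N> M lam
    using chan by unfold_locales
  obtain \<sigma> where "rains_witness (la n * a) (b * lb n) (2 powr (real n * lam)) \<sigma> (\<tau> n)"
    using protocol_rains_witness[OF P1 Pi tau1 tauS n_pos order_refl] by blast
  then have "rains_witness mA mB (2 powr (real n * lam)) (Pfin \<sigma>) \<omega>"
    unfolding omega by (rule rains_witness_PPT_channel[OF Pn])
  then show "Rmax_state mA mB \<omega> \<le> ereal (real n * lam)"
    by (rule Rmax_state_le_of_rains_witness)
qed (use n_pos in simp)

end
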